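(* Let $T$ be a $k$-IET on $I=[\ell,r)$ over the ordered alphabet $\mathcal{A}$. For every $w\in\mathcal{L}(T)$ there exists a finite sequence of steps, each a right Rauzy step $\rho$, a left Rauzy step $\lambda$, or a splitting step $\sigma$, such that the IET $\chi(T)$ obtained by applying this sequence to $T$ is the first-return map of $T$ to the cylinder $I_w$.
   Context: A $k$-IET $T$ on $[\ell,r)$ over $\mathcal{A}=\{a_1<\dots<a_k\}$ is given by a partition of $[\ell,r)$ into left-closed right-open intervals $(I_a)_{a\in\mathcal{A}}$ of positive length ordered left to right by the order of $\mathcal{A}$ and a permutation $\pi$ of $\mathcal{A}$, with $T(x)=x+\tau_a$ on $I_a$, $\tau_a=\sum_{b:\,\pi^{-1}(b)<\pi^{-1}(a)}|I_b|-\sum_{b<a}|I_b|$ (images $T(I_{\pi(a_1)}),\dots,T(I_{\pi(a_k)})$ from left to right). No minimality or regularity is assumed. Trajectories: $\Omega_T(x)=w_0w_1\cdots$ with $w_i=a$ iff $T^i(x)\in I_a$; $\mathcal{L}(T)$ is the set of finite factors of all trajectories. For $w=w_0\cdots w_{n-1}\in\mathcal{L}(T)$ the cylinder is $I_w=I_{w_0}\cap T^{-1}(I_{w_1})\cap\dots\cap T^{-(n-1)}(I_{w_{n-1}})$, with $I_\varepsilon=I$. The first-return (induced) map of $T$ to $J\subset I$ is $x\mapsto T^{\nu(x)}(x)$, $\nu(x)=\min\{n>0:T^n(x)\in J\}$. Steps, applied to a current IET $S$ on $[\ell_S,r_S)$ over an alphabet $\{c_1<\dots<c_m\}$ with permutation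 $\pi_S$: the right Rauzy step $\rho$ (defined when $\pi_S(c_m)\neq c_m$) replaces $S$ by its induced map on $[\ell_S,r_S')$, where $r_S'=r_S-\min(|I_{c_m}|,|I_{\pi_S(c_m)}|)$ is the rightmost formal discontinuity of $S$ or $S^{-1}$; the left Rauzy step $\lambda$ (defined when $\pi_S(c_1)\neq c_1$) replaces $S$ by its induced map on $[\ell_S',r_S)$ with $\ell_S'=\ell_S+\min(|I_{c_1}|,|I_{\pi_S(c_1)}|)$ (when the two lengths are equal, the resulting IET has one fewer letter); the splitting step $\sigma_{\mathcal{B}}$, for a proper nonempty sub-alphabet $\mathcal{B}$ whose intervals form an interval $I_{\mathcal{B}}$ with $S(I_{\mathcal{B}})=I_{\mathcal{B}}$, replaces $S$ by one of $S|_{I_{\mathcal{B}}}$ or the restriction of $S$ to the complement of $I_{\mathcal{B}}$ (when this complement is disconnected it is made into an interval by translating its right part left by $|I_{\mathcal{B}}|$; points are identified with the original points of $I$ through this translation). *)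

theory Defs
  imports Complex_Main
begin

(* An IET is represented by its left endpoint, the list of letters in the
   left-to-right order of the intervals I_a (this list IS the order of the
   alphabet a_1 < ... < a_k), the list of letters in the left-to-right order of
   the images (i.e. [pi(a_1), ..., pi(a_k)]), and the lengths. *)
record 'a iet =
  iet_left :: real
  iet_top  :: "'a list"
  iet_bot  :: "'a list"
  iet_len  :: "'a \<Rightarrow> real"

definition iet_wf :: "'a iet \<Rightarrow> bool" where
  "iet_wf S \<longleftrightarrow> iet_top S \<noteq> [] \<and> distinct (iet_top S) \<and> distinct (iet_bot S)
     \<and> set (iet_bot S) = set (iet_top S) \<and> (\<forall>a\<in>set (iet_top S). iet_len S a > 0)"

definition iet_right :: "'a iet \<Rightarrow> real" where
  "iet_right S = iet_left S + sum_list (map (iet_len S) (iet_top S))"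

definition iet_dom :: "'a iet \<Rightarrow> real set" where
  "iet_dom S = {iet_left S ..< iet_right S}"

definition off_top :: "'a iet \<Rightarrow> 'a \<Rightarrow> real" where
  "off_top S a = sum_list (map (iet_len S) (takeWhile (\<lambda>b. b \<noteq> a) (iet_top S)))"

definition off_bot :: "'a iet \<Rightarrow> 'a \<Rightarrow> real" where
  "off_bot S a = sum_list (map (iet_len S) (takeWhile (\<lambda>b. b \<noteq> a) (iet_bot S)))"

definition ivl :: "'a iet \<Rightarrow> 'a \<Rightarrow> real set" where
  "ivl S a = {iet_left S + off_top S a ..< iet_left S + off_top S a + iet_len S a}"

definition iet_map :: "'a iet \<Rightarrow> real \<Rightarrow> real" where
  "iet_map S x = (case find (\<lambda>a. x \<in> ivl S a) (iet_top S) of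
                    None \<Rightarrow> x
                  | Some a \<Rightarrow> x + off_bot S a - off_top S a)"

definition iet_lang :: "'a iet \<Rightarrow> 'a list set" where
  "iet_lang S = {w. \<exists>x\<in>iet_dom S. \<exists>i. \<forall>j<length w.
                    (iet_map S ^^ (i + j)) x \<in> ivl S (w ! j) \<and> w ! j \<in> set (iet_top S)}"

definition cyl :: "'a iet \<Rightarrow> 'a list \<Rightarrow> real set" where
  "cyl S w = {x \<in> iet_dom S. \<forall>j<length w. (iet_map S ^^ j) x \<in> ivl S (w ! j)}"

definition return_time :: "(real \<Rightarrow> real) \<Rightarrow> real set \<Rightarrow> real \<Rightarrow> nat" where
  "return_time f J x = (LEAST n. n > 0 \<and> (f ^^ n) x \<in> J)"

definition first_return :: "(real \<Rightarrow> real) \<Rightarrow> real set \<Rightarrow> real \<Rightarrow> real" where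
  "first_return f J x = (f ^^ return_time f J x) x"

definition ins_before :: "'a \<Rightarrow> 'a \<Rightarrow> 'a list \<Rightarrow> 'a list" where
  "ins_before b a xs = concat (map (\<lambda>c. if c = a then [b, a] else [c]) xs)"

definition ins_after :: "'a \<Rightarrow> 'a \<Rightarrow> 'a list \<Rightarrow> 'a list" where
  "ins_after b a xs = concat (map (\<lambda>c. if c = a then [a, b] else [c]) xs)"

definition repl :: "'a \<Rightarrow> 'a \<Rightarrow> 'a list \<Rightarrow> 'a list" where
  "repl a b xs = map (\<lambda>c. if c = a then b else c) xs"

definition rauzy_right :: "'a iet \<Rightarrow> 'a iet" where
  "rauzy_right S = (let a = last (iet_top S); b = last (iet_bot S); L = iet_len S in
     if L a > L b then
       S\<lparr> iet_bot := ins_after b a (butlast (iet_bot S)), iet_len := L(a := L a - L b) \<rparr>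
     else if L b > L a then
       S\<lparr> iet_top := ins_after a b (butlast (iet_top S)), iet_len := L(b := L b - L a) \<rparr>
     else
       S\<lparr> iet_top := butlast (iet_top S), iet_bot := repl a b (butlast (iet_bot S)) \<rparr>)"

definition rauzy_left :: "'a iet \<Rightarrow> 'a iet" where
  "rauzy_left S = (let a = hd (iet_top S); b = hd (iet_bot S); L = iet_len S in
     if L a > L b then
       S\<lparr> iet_left := iet_left S + L b,
          iet_bot := ins_before b a (tl (iet_bot S)), iet_len := L(a := L a - L b) \<rparr>
     else if L b > L a then
       S\<lparr> iet_left := iet_left S + L a,
          iet_top := ins_before a b (tl (iet_top S)), iet_len := L(b := L b - L a) \<rparr>
     else
       S\<lparr> iet_left := iet_left S + L a,
          iet_top := tl (iet_top S), iet_bot := repl a b (tl (iet_bot S)) \<rparr>)"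

(* A state is a current IET together with the identification of its points
   with points of the original interval I. *)
type_synonym 'a state = "'a iet \<times> (real \<Rightarrow> real)"

inductive iet_step :: "'a state \<Rightarrow> 'a state \<Rightarrow> bool" where
  right: "last (iet_top S) \<noteq> last (iet_bot S) \<Longrightarrow> iet_step (S, e) (rauzy_right S, e)"
| left: "hd (iet_top S) \<noteq> hd (iet_bot S) \<Longrightarrow> iet_step (S, e) (rauzy_left S, e)"
| split_in: "\<lbrakk> iet_top S = p @ q @ s; q \<noteq> []; p @ s \<noteq> [];
     lB = iet_left S + sum_list (map (iet_len S) p);
     rB = lB + sum_list (map (iet_len S) q);
     iet_map S ` {lB..<rB} = {lB..<rB} \<rbrakk> \<Longrightarrow>
     iet_step (S, e)
       (S\<lparr> iet_left := lB, iet_top := q, iet_bot := filter (\<lambda>c. c \<in> set q) (iet_bot S) \<rparr>, e)"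
| split_out: "\<lbrakk> iet_top S = p @ q @ s; q \<noteq> []; p @ s \<noteq> [];
     lB = iet_left S + sum_list (map (iet_len S) p);
     rB = lB + sum_list (map (iet_len S) q);
     iet_map S ` {lB..<rB} = {lB..<rB} \<rbrakk> \<Longrightarrow>
     iet_step (S, e)
       (S\<lparr> iet_top := p @ s, iet_bot := filter (\<lambda>c. c \<notin> set q) (iet_bot S) \<rparr>,
        (\<lambda>x. if x < lB then e x else e (x + (rB - lB))))"

definition iet_reach :: "'a state \<Rightarrow> 'a state \<Rightarrow> bool" where
  "iet_reach = iet_step\<^sup>*\<^sup>*"

end

theory Submission
  imports Defs
begin

text \<open>By induction on \<open>w\<close>: suppose steps have led from \<open>T\<close> to an IET \<open>S\<close> on \<open>I\<^sub>w\<close> which is the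
  first-return map of \<open>T\<close>, each interval of \<open>S\<close> following one \<open>T\<close>-itinerary until it returns.
  Then \<open>I\<^sub>w\<^sub>c\<close> is a union of intervals of \<open>S\<close>, i.e. an interval \<open>[u, v)\<close> between
  discontinuities of \<open>S\<close>. Right Rauzy steps and splittings cut \<open>S\<close> down to end at \<open>v\<close>, then
  left ones to start at \<open>u\<close>; after each step every interval returns within two steps of the
  previous map, so the invariant persists. A splitting, a tie or a winner crossing the cut shortens
  the process; and a run of Rauzy steps without such shortcuts cannot go on forever, because the
  loser lengths are summable and the letters whose lengths tend to \<open>0\<close> would end up forming a
  block that splits off.\<close>

section \<open>Lists and sums of lengths\<close>

abbreviation lensum :: "('a \<Rightarrow> real) \<Rightarrow> 'a list \<Rightarrow> real" where
  "lensum L xs \<equiv> sum_list (map L xs)"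

abbreviation before :: "'a \<Rightarrow> 'a list \<Rightarrow> 'a list" where
  "before c xs \<equiv> takeWhile (\<lambda>b. b \<noteq> c) xs"

lemma before_append_Cons: "c \<notin> set as \<Longrightarrow> before c (as @ c # bs) = as"
  by (induction as) auto

lemma before_append_in: "c \<in> set xs \<Longrightarrow> before c (xs @ ys) = before c xs"
  by (induction xs) auto

lemma before_append_notin: "c \<notin> set xs \<Longrightarrow> before c (xs @ ys) = xs @ before c ys"
  by (induction xs) auto

lemma before_notin: "c \<notin> set xs \<Longrightarrow> before c xs = xs"
  by (induction xs) auto

lemma lensum_nonneg: "(\<forall>c\<in>set xs. L c \<ge> 0) \<Longrightarrow> lensum L xs \<ge> 0"
  by (induction xs) auto

lemma lensum_before_nonneg: "(\<forall>c\<in>set xs. L c \<ge> 0) \<Longrightarrow> lensum L (before d xs) \<ge> 0"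
  by (rule lensum_nonneg) (auto dest: set_takeWhileD)

lemma lensum_before_add_le: "(\<forall>c\<in>set xs. L c \<ge> 0) \<Longrightarrow> c \<in> set xs \<Longrightarrow> lensum L (before c xs) + L c \<le> lensum L xs"
  by (induction xs) (auto simp: lensum_nonneg)

lemma lensum_before_mono: "(\<forall>c\<in>set xs. L c \<ge> 0) \<Longrightarrow> c \<in> set (before d xs) \<Longrightarrow> lensum L (before c xs) + L c \<le> lensum L (before d xs)"
  by (induction xs) (auto simp: lensum_nonneg lensum_before_nonneg split: if_splits)

lemma before_cases: "c \<in> set xs \<Longrightarrow> d \<in> set xs \<Longrightarrow> c = d \<or> c \<in> set (before d xs) \<or> d \<in> set (before c xs)"
  by (induction xs) auto

lemma segments_disjoint:
  assumes "\<forall>c\<in>set xs. L c \<ge> 0" "c \<in> set xs" "d \<in> set xs" "c \<noteq> d"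
    "l + lensum L (before c xs) \<le> x" "x < l + lensum L (before c xs) + L c"
    "l + lensum L (before d xs) \<le> x" "x < l + lensum L (before d xs) + L d"
  shows False
proof -
  from before_cases[OF assms(2,3)] assms(4) have "c \<in> set (before d xs) \<or> d \<in> set (before c xs)" by auto
  then show False
  proof
    assume "c \<in> set (before d xs)"
    from lensum_before_mono[OF assms(1) this] assms show False by linarith
  next
    assume "d \<in> set (before c xs)"
    from lensum_before_mono[OF assms(1) this] assms show False by linarith
  qed
qed

lemma segments_cover:
  assumes "distinct xs" "\<forall>c\<in>set xs. L c > 0" "l \<le> x" "x < l + lensum L xs"
  shows "\<exists>c\<in>set xs. l + lensum L (before c xs) \<le> x \<and> x < l + lensum L (before c xs) + L c"
  using assms
proof (induction xs arbitrary: l)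
  case Nil then show ?case by simp
next
  case (Cons a xs)
  show ?case
  proof (cases "x < l + L a")
    case True then show ?thesis using Cons.prems by (intro bexI[of _ a]) auto
  next
    case False
    then obtain c where c: "c \<in> set xs" "l + L a + lensum L (before c xs) \<le> x" "x < l + L a + lensum L (before c xs) + L c"
      using Cons.IH[of "l + L a"] Cons.prems by auto
    have "c \<noteq> a" using c Cons.prems by auto
    then show ?thesis using c by (intro bexI[of _ c]) (auto simp: algebra_simps)
  qed
qed

lemma find_eq_SomeI: "c \<in> set xs \<Longrightarrow> P c \<Longrightarrow> (\<forall>d\<in>set xs. P d \<longrightarrow> d = c) \<Longrightarrow> find P xs = Some c"
proof (induction xs)
  case Nil then show ?case by simp
next
  case (Cons a xs)
  show ?case
  proof (cases "a = c")
    case True then show ?thesis using Cons.prems(2) by simp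
  next
    case False
    have np: "\<not> P a" using Cons.prems(3) False by (meson list.set_intros(1))
    have "c \<in> set xs" using Cons.prems(1) False by auto
    moreover have "\<forall>d\<in>set xs. P d \<longrightarrow> d = c" using Cons.prems(3) by (meson list.set_intros(2))
    ultimately have "find P xs = Some c" using Cons.IH Cons.prems(2) by blast
    then show ?thesis using np by simp
  qed
qed

lemma lensum_perm: "distinct xs \<Longrightarrow> distinct ys \<Longrightarrow> set xs = set ys \<Longrightarrow> lensum L xs = lensum L ys"
  by (simp add: sum_list_distinct_conv_sum_set)

lemma lensum_upd_notin: "a \<notin> set xs \<Longrightarrow> lensum (L(a := v)) xs = lensum L xs"
  by (induction xs) auto

lemma set_before_subset: "set (before c xs) \<subseteq> set xs"
  by (meson set_takeWhileD subsetI)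

lemma before_block_mid: "distinct (p @ q @ s) \<Longrightarrow> c \<in> set q \<Longrightarrow> before c (p @ q @ s) = p @ before c q"
proof -
  assume d: "distinct (p @ q @ s)" and c: "c \<in> set q"
  then have "c \<notin> set p" by auto
  then have "before c (p @ q @ s) = p @ before c (q @ s)" by (rule before_append_notin)
  also have "before c (q @ s) = before c q" by (rule before_append_in[OF c])
  finally show ?thesis .
qed

lemma before_block_left: "c \<in> set p \<Longrightarrow> before c (p @ q @ s) = before c p"
  using before_append_in[of c p] by auto

lemma before_block_right: "distinct (p @ q @ s) \<Longrightarrow> c \<in> set s \<Longrightarrow> before c (p @ q @ s) = p @ q @ before c s"
proof -
  assume d: "distinct (p @ q @ s)" and c: "c \<in> set s"
  then have "c \<notin> set p" "c \<notin> set q" by auto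
  then show ?thesis using before_append_notin[of c p "q @ s"] before_append_notin[of c q s] by simp
qed

lemma ins_after_notin: "a \<notin> set xs \<Longrightarrow> ins_after b a xs = xs"
  by (induction xs) (auto simp: ins_after_def)

lemma ins_after_split: "a \<notin> set xs \<Longrightarrow> a \<notin> set ys \<Longrightarrow> ins_after b a (xs @ a # ys) = xs @ a # b # ys"
  using ins_after_notin[of a xs b] ins_after_notin[of a ys b] by (simp add: ins_after_def)

lemma ins_before_notin: "a \<notin> set xs \<Longrightarrow> ins_before b a xs = xs"
  by (induction xs) (auto simp: ins_before_def)

lemma ins_before_split: "a \<notin> set xs \<Longrightarrow> a \<notin> set ys \<Longrightarrow> ins_before b a (xs @ a # ys) = xs @ b # a # ys"
  using ins_before_notin[of a xs b] ins_before_notin[of a ys b] by (simp add: ins_before_def)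

lemma repl_notin: "a \<notin> set xs \<Longrightarrow> repl a b xs = xs"
  by (induction xs) (auto simp: repl_def)

lemma repl_split: "a \<notin> set xs \<Longrightarrow> a \<notin> set ys \<Longrightarrow> repl a b (xs @ a # ys) = xs @ b # ys"
  using repl_notin[of a xs b] repl_notin[of a ys b] by (simp add: repl_def)

lemma ins_after_distinct:
  assumes "distinct ys" "b \<in> set ys" "a \<notin> set ys"
  shows "length (ins_after a b ys) = Suc (length ys)" "set (ins_after a b ys) = insert a (set ys)"
    "distinct (ins_after a b ys)"
proof -
  obtain Y1 Y2 where Y: "ys = Y1 @ b # Y2" using split_list[OF assms(2)] by blast
  have bY: "b \<notin> set Y1" "b \<notin> set Y2" using assms(1) Y by auto
  have e: "ins_after a b (Y1 @ b # Y2) = Y1 @ b # a # Y2" using bY ins_after_split by metis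
  have dY: "distinct (Y1 @ b # Y2)" "a \<notin> set (Y1 @ b # Y2)" using assms(1,3) Y by simp_all
  show "length (ins_after a b ys) = Suc (length ys)" unfolding Y e by simp
  show "set (ins_after a b ys) = insert a (set ys)" unfolding Y e by auto
  show "distinct (ins_after a b ys)" unfolding Y e using dY by auto
qed

lemma distinct_butlast_last:
  assumes "distinct xs" "xs \<noteq> []"
  shows "last xs \<notin> set (butlast xs)" "set xs = insert (last xs) (set (butlast xs))"
    "distinct (butlast xs)" "xs = butlast xs @ [last xs]"
proof -
  have e: "xs = butlast xs @ [last xs]" using assms(2) by simp
  show "xs = butlast xs @ [last xs]" by (fact e)
  have "distinct (butlast xs @ [last xs])" using assms(1) e by simp
  then show "last xs \<notin> set (butlast xs)" "distinct (butlast xs)" by simp_all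
  have "set xs = set (butlast xs @ [last xs])" using e by simp
  then show "set xs = insert (last xs) (set (butlast xs))" by simp
qed

lemma set_drop_ins_after:
  assumes d: "distinct (Y1 @ b # Y2 @ [a])" and bi: "b \<in> set (drop i (Y1 @ b # Y2 @ [a]))"
  shows "set (drop i (Y1 @ b # a # Y2)) = set (drop i (Y1 @ b # Y2 @ [a]))"
proof -
  have "i \<le> length Y1"
  proof (rule ccontr)
    assume "\<not> i \<le> length Y1"
    then obtain k where k: "i = length Y1 + Suc k" by (metis add_Suc_right less_imp_Suc_add not_le)
    have "drop i (Y1 @ b # Y2 @ [a]) = drop k (Y2 @ [a])" using k by simp
    then have "b \<in> set (Y2 @ [a])" using bi in_set_dropD by fastforce
    then show False using d by auto
  qed
  then show ?thesis by (auto simp: drop_append)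
qed

lemma last_in_set_drop: "i < length xs \<Longrightarrow> last xs \<in> set (drop i xs)"
proof -
  assume "i < length xs"
  then have "drop i xs \<noteq> []" by simp
  then have "last (drop i xs) \<in> set (drop i xs)" by (rule last_in_set)
  moreover have "last (drop i xs) = last xs" using \<open>i < length xs\<close> by (simp add: last_drop)
  ultimately show ?thesis by simp
qed

lemma last_notin_set_take: "distinct xs \<Longrightarrow> i < length xs \<Longrightarrow> last xs \<notin> set (take i xs)"
  by (cases xs rule: rev_cases) (auto dest: in_set_takeD)

section \<open>Intervals of an IET\<close>

definition img_ivl :: "'a iet \<Rightarrow> 'a \<Rightarrow> real set" where
  "img_ivl S a = {iet_left S + off_bot S a ..< iet_left S + off_bot S a + iet_len S a}"

lemma iet_wf_len_pos: "iet_wf S \<Longrightarrow> c \<in> set (iet_top S) \<Longrightarrow> iet_len S c > 0"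
  unfolding iet_wf_def by blast

lemma iet_wf_len_nonneg: "iet_wf S \<Longrightarrow> \<forall>c\<in>set (iet_top S). iet_len S c \<ge> 0"
  using iet_wf_len_pos[of S] by (meson less_imp_le)

lemma iet_wf_set_bot: "iet_wf S \<Longrightarrow> set (iet_bot S) = set (iet_top S)"
  unfolding iet_wf_def by blast

lemma iet_wf_len_nonneg_bot: "iet_wf S \<Longrightarrow> \<forall>c\<in>set (iet_bot S). iet_len S c \<ge> 0"
  using iet_wf_len_nonneg[of S] iet_wf_set_bot[of S] by simp

lemma lensum_bot: "iet_wf S \<Longrightarrow> lensum (iet_len S) (iet_bot S) = lensum (iet_len S) (iet_top S)"
proof -
  assume "iet_wf S"
  then have "distinct (iet_bot S)" "distinct (iet_top S)" "set (iet_bot S) = set (iet_top S)"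
    unfolding iet_wf_def by blast+
  then show ?thesis by (rule lensum_perm)
qed

lemma ivl_subset_dom: "iet_wf S \<Longrightarrow> c \<in> set (iet_top S) \<Longrightarrow> ivl S c \<subseteq> iet_dom S"
proof
  fix x assume w: "iet_wf S" "c \<in> set (iet_top S)" and "x \<in> ivl S c"
  then have x: "iet_left S + off_top S c \<le> x" "x < iet_left S + off_top S c + iet_len S c"
    by (simp_all add: ivl_def)
  have "off_top S c \<ge> 0" "off_top S c + iet_len S c \<le> lensum (iet_len S) (iet_top S)"
    unfolding off_top_def using lensum_before_add_le[OF iet_wf_len_nonneg[OF w(1)] w(2)] lensum_before_nonneg[OF iet_wf_len_nonneg[OF w(1)]]
    by simp_all
  with x show "x \<in> iet_dom S" by (simp add: iet_dom_def iet_right_def)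
qed

lemma img_ivl_subset_dom: "iet_wf S \<Longrightarrow> c \<in> set (iet_top S) \<Longrightarrow> img_ivl S c \<subseteq> iet_dom S"
proof
  fix x assume w: "iet_wf S" "c \<in> set (iet_top S)" and "x \<in> img_ivl S c"
  then have x: "iet_left S + off_bot S c \<le> x" "x < iet_left S + off_bot S c + iet_len S c"
    by (simp_all add: img_ivl_def)
  have cb: "c \<in> set (iet_bot S)" using w iet_wf_set_bot by blast
  have "off_bot S c \<ge> 0" "off_bot S c + iet_len S c \<le> lensum (iet_len S) (iet_bot S)"
    unfolding off_bot_def using lensum_before_add_le[OF iet_wf_len_nonneg_bot[OF w(1)] cb] lensum_before_nonneg[OF iet_wf_len_nonneg_bot[OF w(1)]]
    by simp_all
  with x lensum_bot[OF w(1)] show "x \<in> iet_dom S" by (simp add: iet_dom_def iet_right_def)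
qed

lemma ivl_disjoint_dom: "c \<notin> set (iet_top S) \<Longrightarrow> ivl S c \<inter> iet_dom S = {}"
  by (auto simp: ivl_def iet_dom_def iet_right_def off_top_def before_notin)

lemma ivl_unique:
  assumes "iet_wf S" "x \<in> ivl S c" "x \<in> ivl S d" "x \<in> iet_dom S"
  shows "c = d"
proof (rule ccontr)
  assume "c \<noteq> d"
  have c: "c \<in> set (iet_top S)" using ivl_disjoint_dom[of c S] assms by auto
  have d: "d \<in> set (iet_top S)" using ivl_disjoint_dom[of d S] assms by auto
  show False
    by (rule segments_disjoint[OF iet_wf_len_nonneg[OF assms(1)] c d \<open>c \<noteq> d\<close>, of "iet_left S" x])
       (use assms in \<open>auto simp: ivl_def off_top_def\<close>)
qed

lemma dom_covered_by_ivl: "iet_wf S \<Longrightarrow> x \<in> iet_dom S \<Longrightarrow> \<exists>c\<in>set (iet_top S). x \<in> ivl S c"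
proof -
  assume w: "iet_wf S" "x \<in> iet_dom S"
  then have d: "distinct (iet_top S)" unfolding iet_wf_def by blast
  have p: "\<forall>c\<in>set (iet_top S). iet_len S c > 0" using iet_wf_len_pos[OF w(1)] by blast
  have x: "iet_left S \<le> x" "x < iet_left S + lensum (iet_len S) (iet_top S)"
    using w(2) by (simp_all add: iet_dom_def iet_right_def)
  from segments_cover[OF d p x] show ?thesis unfolding ivl_def off_top_def by simp
qed

lemma dom_covered_by_img_ivl: "iet_wf S \<Longrightarrow> x \<in> iet_dom S \<Longrightarrow> \<exists>c\<in>set (iet_top S). x \<in> img_ivl S c"
proof -
  assume w: "iet_wf S" "x \<in> iet_dom S"
  then have d: "distinct (iet_bot S)" unfolding iet_wf_def by blast
  have p: "\<forall>c\<in>set (iet_bot S). iet_len S c > 0" using iet_wf_len_pos[OF w(1)] iet_wf_set_bot[OF w(1)] by simp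
  have x: "iet_left S \<le> x" "x < iet_left S + lensum (iet_len S) (iet_bot S)"
    using w(2) lensum_bot[OF w(1)] by (simp_all add: iet_dom_def iet_right_def)
  from segments_cover[OF d p x] show ?thesis unfolding img_ivl_def off_bot_def using iet_wf_set_bot[OF w(1)] by simp
qed

lemma iet_map_ivl:
  assumes "iet_wf S" "c \<in> set (iet_top S)" "x \<in> ivl S c"
  shows "iet_map S x = x + off_bot S c - off_top S c"
proof -
  have "find (\<lambda>a. x \<in> ivl S a) (iet_top S) = Some c"
  proof (rule find_eq_SomeI[OF assms(2)])
    show "x \<in> ivl S c" by fact
    have xd: "x \<in> iet_dom S" using ivl_subset_dom[OF assms(1,2)] assms(3) by blast
    show "\<forall>d\<in>set (iet_top S). x \<in> ivl S d \<longrightarrow> d = c"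
      using ivl_unique[OF assms(1) _ assms(3) xd] by blast
  qed
  then show ?thesis by (simp add: iet_map_def)
qed

lemma iet_map_ivl_in_img:
  assumes "iet_wf S" "c \<in> set (iet_top S)" "x \<in> ivl S c"
  shows "iet_map S x \<in> img_ivl S c"
  using assms iet_map_ivl[OF assms] by (auto simp: ivl_def img_ivl_def)

lemma iet_map_in_dom: "iet_wf S \<Longrightarrow> x \<in> iet_dom S \<Longrightarrow> iet_map S x \<in> iet_dom S"
proof -
  assume a: "iet_wf S" "x \<in> iet_dom S"
  then obtain c where c: "c \<in> set (iet_top S)" "x \<in> ivl S c" using dom_covered_by_ivl by blast
  show ?thesis using iet_map_ivl_in_img[OF a(1) c] img_ivl_subset_dom[OF a(1) c(1)] by blast
qed

lemma iet_map_funpow_in_dom: "iet_wf S \<Longrightarrow> x \<in> iet_dom S \<Longrightarrow> (iet_map S ^^ n) x \<in> iet_dom S"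
  by (induction n) (auto simp: iet_map_in_dom)

lemma iet_map_image_ivl:
  assumes "iet_wf S" "c \<in> set (iet_top S)"
  shows "iet_map S ` ivl S c = img_ivl S c"
proof
  show "iet_map S ` ivl S c \<subseteq> img_ivl S c" using iet_map_ivl_in_img[OF assms] by auto
  show "img_ivl S c \<subseteq> iet_map S ` ivl S c"
  proof
    fix y assume "y \<in> img_ivl S c"
    then have "y - off_bot S c + off_top S c \<in> ivl S c" by (auto simp: ivl_def img_ivl_def)
    moreover have "iet_map S (y - off_bot S c + off_top S c) = y" using iet_map_ivl[OF assms calculation] by simp
    ultimately show "y \<in> iet_map S ` ivl S c" by force
  qed
qed

lemma iet_dom_subset: "iet_left S \<le> iet_left S' \<Longrightarrow> iet_right S' \<le> iet_right S \<Longrightarrow> iet_dom S' \<subseteq> iet_dom S"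
  by (auto simp: iet_dom_def)

section \<open>Induced maps\<close>

definition return_tower :: "'a iet \<Rightarrow> real set \<Rightarrow> (real \<Rightarrow> real) \<Rightarrow> real set \<Rightarrow> bool" where
  "return_tower T D f J \<longleftrightarrow> (\<exists>h>0. \<exists>ws. length ws = h \<and> (\<forall>x\<in>J.
      (\<forall>j<h. (iet_map T ^^ j) x \<in> ivl T (ws ! j))
    \<and> (\<forall>j. 0 < j \<and> j < h \<longrightarrow> (iet_map T ^^ j) x \<notin> D)
    \<and> (iet_map T ^^ h) x = f x))"

definition tower :: "'a iet \<Rightarrow> 'a iet \<Rightarrow> bool" where
  "tower T S \<longleftrightarrow> (\<forall>c\<in>set (iet_top S). return_tower T (iet_dom S) (iet_map S) (ivl S c))"

text \<open>\<open>induced T S\<close>: \<open>S\<close> is the first-return map of \<open>T\<close> to \<open>iet_dom S\<close>, and each interval of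
  \<open>S\<close> lies in a single cylinder of \<open>T\<close> for its return time.\<close>

definition induced :: "'a iet \<Rightarrow> 'a iet \<Rightarrow> bool" where
  "induced T S \<longleftrightarrow> iet_wf S \<and> iet_dom S \<subseteq> iet_dom T \<and> tower T S"

definition returns_within_two :: "'a iet \<Rightarrow> 'a iet \<Rightarrow> bool" where
  "returns_within_two S S' \<longleftrightarrow> (\<forall>c\<in>set (iet_top S').
     (\<exists>d. \<forall>x\<in>ivl S' c. x \<in> ivl S d \<and> iet_map S' x = iet_map S x) \<or>
     (\<exists>d1 d2. \<forall>x\<in>ivl S' c. x \<in> ivl S d1 \<and> iet_map S x \<in> ivl S d2 \<and> iet_map S x \<notin> iet_dom S'
        \<and> iet_map S' x = iet_map S (iet_map S x)))"

lemma left_end_in_ivl: "iet_wf S \<Longrightarrow> c \<in> set (iet_top S) \<Longrightarrow> iet_left S + off_top S c \<in> ivl S c"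
  using iet_wf_len_pos[of S c] by (simp add: ivl_def)

lemma ivl_letter:
  assumes "iet_wf S" "x \<in> ivl S d" "x \<in> iet_dom S" shows "d \<in> set (iet_top S)"
  using ivl_disjoint_dom[of d S] assms by blast

lemma return_towerE:
  assumes "return_tower T D f J"
  obtains h ws where "h > 0" "length ws = h" "\<And>x j. x \<in> J \<Longrightarrow> j < h \<Longrightarrow> (iet_map T ^^ j) x \<in> ivl T (ws ! j)"
    "\<And>x j. x \<in> J \<Longrightarrow> 0 < j \<Longrightarrow> j < h \<Longrightarrow> (iet_map T ^^ j) x \<notin> D"
    "\<And>x. x \<in> J \<Longrightarrow> (iet_map T ^^ h) x = f x"
  using assms unfolding return_tower_def by blast

lemma return_towerI:
  assumes "h > 0" "length ws = h" "\<And>x j. x \<in> J \<Longrightarrow> j < h \<Longrightarrow> (iet_map T ^^ j) x \<in> ivl T (ws ! j)"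
    "\<And>x j. x \<in> J \<Longrightarrow> 0 < j \<Longrightarrow> j < h \<Longrightarrow> (iet_map T ^^ j) x \<notin> D"
    "\<And>x. x \<in> J \<Longrightarrow> (iet_map T ^^ h) x = f x"
  shows "return_tower T D f J"
  using assms unfolding return_tower_def by blast

lemma return_tower_mono:
  assumes "return_tower T D f J" "J' \<subseteq> J" "D' \<subseteq> D" "\<And>x. x \<in> J' \<Longrightarrow> f' x = f x"
  shows "return_tower T D' f' J'"
proof -
  obtain h ws where "h > 0" "length ws = h" "\<And>x j. x \<in> J \<Longrightarrow> j < h \<Longrightarrow> (iet_map T ^^ j) x \<in> ivl T (ws ! j)"
    "\<And>x j. x \<in> J \<Longrightarrow> 0 < j \<Longrightarrow> j < h \<Longrightarrow> (iet_map T ^^ j) x \<notin> D"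
    "\<And>x. x \<in> J \<Longrightarrow> (iet_map T ^^ h) x = f x"
    using assms(1) by (rule return_towerE) blast
  then show ?thesis using assms(2-4) by (intro return_towerI[of h ws]) (auto simp: subset_iff)
qed

lemma return_tower_comp:
  assumes f: "return_tower T D f J" and g: "return_tower T D g K"
    and "f ` J \<subseteq> K" "D' \<subseteq> D" "\<And>x. x \<in> J \<Longrightarrow> f x \<notin> D'"
  shows "return_tower T D' (g \<circ> f) J"
proof -
  obtain h1 ws1 where h1: "h1 > 0" "length ws1 = h1"
    and it1: "\<And>x j. x \<in> J \<Longrightarrow> j < h1 \<Longrightarrow> (iet_map T ^^ j) x \<in> ivl T (ws1 ! j)"
    and av1: "\<And>x j. x \<in> J \<Longrightarrow> 0 < j \<Longrightarrow> j < h1 \<Longrightarrow> (iet_map T ^^ j) x \<notin> D"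
    and ret1: "\<And>x. x \<in> J \<Longrightarrow> (iet_map T ^^ h1) x = f x"
    using f by (rule return_towerE) blast
  obtain h2 ws2 where h2: "h2 > 0" "length ws2 = h2"
    and it2: "\<And>x j. x \<in> K \<Longrightarrow> j < h2 \<Longrightarrow> (iet_map T ^^ j) x \<in> ivl T (ws2 ! j)"
    and av2: "\<And>x j. x \<in> K \<Longrightarrow> 0 < j \<Longrightarrow> j < h2 \<Longrightarrow> (iet_map T ^^ j) x \<notin> D"
    and ret2: "\<And>x. x \<in> K \<Longrightarrow> (iet_map T ^^ h2) x = g x"
    using g by (rule return_towerE) blast
  have fK: "f x \<in> K" if "x \<in> J" for x using assms(3) that by blast
  have shift: "(iet_map T ^^ (k + h1)) x = (iet_map T ^^ k) (f x)" if "x \<in> J" for x k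
    using ret1[OF that] by (simp add: funpow_add)
  show ?thesis
  proof (rule return_towerI[of "h1 + h2" "ws1 @ ws2"])
    show "0 < h1 + h2" "length (ws1 @ ws2) = h1 + h2" using h1 h2 by simp_all
    show "(iet_map T ^^ (h1 + h2)) x = (g \<circ> f) x" if "x \<in> J" for x
      using shift[OF that, of h2] ret2[OF fK[OF that]] by (simp add: add.commute)
    fix x j assume x: "x \<in> J"
    show "(iet_map T ^^ j) x \<in> ivl T ((ws1 @ ws2) ! j)" if "j < h1 + h2"
    proof (cases "j < h1")
      case False
      define k where "k = j - h1"
      have "j = k + h1" "k < h2" using that False by (simp_all add: k_def)
      then show ?thesis using shift[OF x] it2[OF fK[OF x]] h1 False by (simp add: nth_append)
    qed (use it1[OF x] h1 in \<open>simp add: nth_append\<close>)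
    show "(iet_map T ^^ j) x \<notin> D'" if "0 < j" "j < h1 + h2"
    proof (cases "j \<le> h1")
      case True
      then show ?thesis using av1[OF x] that assms(4) assms(5)[OF x] ret1[OF x] by (cases "j = h1") auto
    next
      case False
      define k where "k = j - h1"
      have "j = k + h1" "0 < k" "k < h2" using that False by (simp_all add: k_def)
      then show ?thesis using shift[OF x] av2[OF fK[OF x]] assms(4) by auto
    qed
  qed
qed

lemma tower_refl: "tower T T"
  unfolding tower_def
proof
  fix c show "return_tower T (iet_dom T) (iet_map T) (ivl T c)" by (rule return_towerI[of 1 "[c]"]) auto
qed

lemma induced_refl: "iet_wf T \<Longrightarrow> induced T T"
  by (simp add: induced_def tower_refl)

lemma induced_trans:
  assumes I: "induced T S" and w': "iet_wf S'" and sub: "iet_dom S' \<subseteq> iet_dom S"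
    and st: "returns_within_two S S'"
  shows "induced T S'"
proof -
  have wS: "iet_wf S" and towers: "\<And>d. d \<in> set (iet_top S) \<Longrightarrow> return_tower T (iet_dom S) (iet_map S) (ivl S d)"
    using I by (auto simp: induced_def tower_def)
  have "return_tower T (iet_dom S') (iet_map S') (ivl S' c)" if c: "c \<in> set (iet_top S')" for c
  proof -
    have x0: "iet_left S' + off_top S' c \<in> ivl S' c" "iet_left S' + off_top S' c \<in> iet_dom S"
      using left_end_in_ivl[OF w' c] ivl_subset_dom[OF w' c] sub by auto
    have letter: "d \<in> set (iet_top S)" if "iet_left S' + off_top S' c \<in> ivl S d" for d
      using ivl_letter[OF wS that x0(2)] .
    from st c consider (one) d where "\<forall>x\<in>ivl S' c. x \<in> ivl S d \<and> iet_map S' x = iet_map S x"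
      | (two) d1 d2 where "\<forall>x\<in>ivl S' c. x \<in> ivl S d1 \<and> iet_map S x \<in> ivl S d2 \<and> iet_map S x \<notin> iet_dom S'
          \<and> iet_map S' x = iet_map S (iet_map S x)"
      unfolding returns_within_two_def by blast
    then show ?thesis
    proof cases
      case one
      then have "d \<in> set (iet_top S)" using x0(1) letter by blast
      then show ?thesis by (rule return_tower_mono[OF towers]) (use one sub in auto)
    next
      case two
      have d2: "d2 \<in> set (iet_top S)"
        using two x0 iet_map_in_dom[OF wS x0(2)] ivl_letter[OF wS] by blast
      have "d1 \<in> set (iet_top S)" using two x0(1) letter by blast
      then have "return_tower T (iet_dom S) (iet_map S) (ivl S' c)"
        by (rule return_tower_mono[OF towers]) (use two in auto)
      then have "return_tower T (iet_dom S') (iet_map S \<circ> iet_map S) (ivl S' c)"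
        using two sub by (intro return_tower_comp[OF _ towers[OF d2]]) auto
      from return_tower_mono[OF this] show ?thesis using two by auto
    qed
  qed
  then show ?thesis using w' sub I by (auto simp: induced_def tower_def)
qed

lemma returns_within_twoI:
  assumes wS: "iet_wf S" and wS': "iet_wf S'"
    and gen: "\<And>c. c \<in> set (iet_top S') \<Longrightarrow> c \<noteq> s \<Longrightarrow> c \<in> set (iet_top S) \<and> ivl S' c \<subseteq> ivl S c
        \<and> off_bot S' c - off_top S' c = off_bot S c - off_top S c"
    and spec: "s \<in> set (iet_top S') \<Longrightarrow> d1 \<in> set (iet_top S) \<and> d2 \<in> set (iet_top S) \<and> ivl S' s \<subseteq> ivl S d1
        \<and> (\<forall>x\<in>ivl S' s. x + off_bot S d1 - off_top S d1 \<in> ivl S d2 \<and> x + off_bot S d1 - off_top S d1 \<notin> iet_dom S')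
        \<and> off_bot S' s - off_top S' s = (off_bot S d1 - off_top S d1) + (off_bot S d2 - off_top S d2)"
  shows "returns_within_two S S'"
  unfolding returns_within_two_def
proof
  fix c assume c: "c \<in> set (iet_top S')"
  show "(\<exists>d. \<forall>x\<in>ivl S' c. x \<in> ivl S d \<and> iet_map S' x = iet_map S x) \<or>
     (\<exists>d1 d2. \<forall>x\<in>ivl S' c. x \<in> ivl S d1 \<and> iet_map S x \<in> ivl S d2 \<and> iet_map S x \<notin> iet_dom S'
        \<and> iet_map S' x = iet_map S (iet_map S x))"
  proof (cases "c = s")
    case False
    have g: "c \<in> set (iet_top S)" "ivl S' c \<subseteq> ivl S c"
        "off_bot S' c - off_top S' c = off_bot S c - off_top S c" using gen[OF c False] by auto
    have "\<forall>x\<in>ivl S' c. x \<in> ivl S c \<and> iet_map S' x = iet_map S x"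
    proof
      fix x assume x: "x \<in> ivl S' c"
      then have xs: "x \<in> ivl S c" using g by blast
      have "iet_map S' x = x + off_bot S' c - off_top S' c" by (rule iet_map_ivl[OF wS' c x])
      also have "\<dots> = x + off_bot S c - off_top S c" using g(3) by simp
      also have "\<dots> = iet_map S x" using iet_map_ivl[OF wS g(1) xs] by simp
      finally show "x \<in> ivl S c \<and> iet_map S' x = iet_map S x" using xs by simp
    qed
    then show ?thesis by blast
  next
    case True
    have sp: "d1 \<in> set (iet_top S)" "d2 \<in> set (iet_top S)" "ivl S' s \<subseteq> ivl S d1"
        "\<forall>x\<in>ivl S' s. x + off_bot S d1 - off_top S d1 \<in> ivl S d2 \<and> x + off_bot S d1 - off_top S d1 \<notin> iet_dom S'"
        "off_bot S' s - off_top S' s = (off_bot S d1 - off_top S d1) + (off_bot S d2 - off_top S d2)"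
      using spec c True by auto
    have "\<forall>x\<in>ivl S' c. x \<in> ivl S d1 \<and> iet_map S x \<in> ivl S d2 \<and> iet_map S x \<notin> iet_dom S'
        \<and> iet_map S' x = iet_map S (iet_map S x)"
    proof
      fix x assume x: "x \<in> ivl S' c"
      then have xs: "x \<in> ivl S d1" using sp True by blast
      have m1: "iet_map S x = x + off_bot S d1 - off_top S d1" by (rule iet_map_ivl[OF wS sp(1) xs])
      have y: "iet_map S x \<in> ivl S d2" "iet_map S x \<notin> iet_dom S'" using sp(4) x True m1 by auto
      have "iet_map S' x = x + off_bot S' s - off_top S' s" using iet_map_ivl[OF wS' c] x True by simp
      also have "\<dots> = iet_map S x + off_bot S d2 - off_top S d2" using sp(5) m1 by simp
      also have "\<dots> = iet_map S (iet_map S x)" using iet_map_ivl[OF wS sp(2) y(1)] by simp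
      finally show "x \<in> ivl S d1 \<and> iet_map S x \<in> ivl S d2 \<and> iet_map S x \<notin> iet_dom S'
        \<and> iet_map S' x = iet_map S (iet_map S x)" using xs y by simp
    qed
    then show ?thesis by blast
  qed
qed

lemma tower_return:
  assumes "tower T S" "iet_wf S" "x \<in> iet_dom S"
  obtains h where "h > 0" "(iet_map T ^^ h) x = iet_map S x"
    "\<And>j. 0 < j \<Longrightarrow> j < h \<Longrightarrow> (iet_map T ^^ j) x \<notin> iet_dom S"
proof -
  obtain d where d: "d \<in> set (iet_top S)" "x \<in> ivl S d" using dom_covered_by_ivl[OF assms(2,3)] by blast
  then have "return_tower T (iet_dom S) (iet_map S) (ivl S d)" using assms(1) by (simp add: tower_def)
  then obtain h ws where "h > 0" "length ws = h"
    "\<And>x j. x \<in> ivl S d \<Longrightarrow> j < h \<Longrightarrow> (iet_map T ^^ j) x \<in> ivl T (ws ! j)"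
    "\<And>x j. x \<in> ivl S d \<Longrightarrow> 0 < j \<Longrightarrow> j < h \<Longrightarrow> (iet_map T ^^ j) x \<notin> iet_dom S"
    "\<And>x. x \<in> ivl S d \<Longrightarrow> (iet_map T ^^ h) x = iet_map S x"
    by (rule return_towerE) blast
  then show ?thesis using that[of h] d(2) by blast
qed

lemma induced_first_return:
  assumes I: "induced T S" and x: "x \<in> iet_dom S"
  shows "first_return (iet_map T) (iet_dom S) x = iet_map S x"
proof -
  have wf: "iet_wf S" and tow: "tower T S" using I by (simp_all add: induced_def)
  obtain h where h: "h > 0" "(iet_map T ^^ h) x = iet_map S x"
    "\<And>j. 0 < j \<Longrightarrow> j < h \<Longrightarrow> (iet_map T ^^ j) x \<notin> iet_dom S"
    by (rule tower_return[OF tow wf x]) blast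
  have "return_time (iet_map T) (iet_dom S) x = h"
    unfolding return_time_def
  proof (rule Least_equality)
    show "0 < h \<and> (iet_map T ^^ h) x \<in> iet_dom S" using h iet_map_in_dom[OF wf x] by simp
    show "h \<le> n" if "0 < n \<and> (iet_map T ^^ n) x \<in> iet_dom S" for n
      using that h(3) not_le by blast
  qed
  then show ?thesis using h(2) by (simp add: first_return_def)
qed

lemma induced_recurrent:
  assumes "induced T S" "x \<in> iet_dom S"
  shows "\<exists>n>0. (iet_map T ^^ n) x \<in> iet_dom S"
proof -
  have wf: "iet_wf S" and tow: "tower T S" using assms(1) by (simp_all add: induced_def)
  obtain h where "h > 0" "(iet_map T ^^ h) x = iet_map S x"
    "\<And>j. 0 < j \<Longrightarrow> j < h \<Longrightarrow> (iet_map T ^^ j) x \<notin> iet_dom S"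
    by (rule tower_return[OF tow wf assms(2)]) blast
  then show ?thesis using iet_map_in_dom[OF wf assms(2)] by auto
qed

section \<open>Rauzy steps\<close>

text \<open>In each case exactly one interval of the new IET, the one whose image under the old IET lands in
  the cut-off part, returns after two steps of the old IET; all others return after one.\<close>

lemma rauzy_right_top_wins:
  fixes S :: "'a iet"
  assumes wf: "iet_wf S" and ab: "last (iet_top S) \<noteq> last (iet_bot S)"
    and gt: "iet_len S (last (iet_bot S)) < iet_len S (last (iet_top S))"
  shows "iet_wf (rauzy_right S) \<and> iet_left (rauzy_right S) = iet_left S
   \<and> iet_right (rauzy_right S) = iet_right S - iet_len S (last (iet_bot S))
   \<and> iet_top (rauzy_right S) = iet_top S
   \<and> iet_len (rauzy_right S) = (iet_len S)(last (iet_top S) := iet_len S (last (iet_top S)) - iet_len S (last (iet_bot S)))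
   \<and> returns_within_two S (rauzy_right S)
   \<and> (\<forall>c\<in>set (iet_top S). off_top (rauzy_right S) c = off_top S c)"
proof -
  define tp where "tp = iet_top S"
  define bt where "bt = iet_bot S"
  define L where "L = iet_len S"
  define a where "a = last (iet_top S)"
  define b where "b = last (iet_bot S)"
  define l where "l = iet_left S"
  define L' where "L' = L(a := L a - L b)"
  have gt': "L b < L a" using gt by (simp add: L_def a_def b_def)
  have ab': "a \<noteq> b" using ab by (simp add: a_def b_def)
  have tpne: "tp \<noteq> []" and dtp: "distinct tp" and dbt: "distinct bt" and sbt: "set bt = set tp"
    and pos: "\<forall>c\<in>set tp. L c > 0"
    using wf unfolding iet_wf_def tp_def bt_def L_def by auto
  have btne: "bt \<noteq> []" using tpne sbt by auto
  define A where "A = butlast tp"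
  define B where "B = butlast bt"
  have tpA: "tp = A @ [a]" using tpne unfolding A_def a_def tp_def by simp
  have btB: "bt = B @ [b]" using btne unfolding B_def b_def bt_def by simp
  have aA: "a \<notin> set A" and dA: "distinct A" using dtp tpA by auto
  have bB: "b \<notin> set B" and dB: "distinct B" using dbt btB by auto
  have aB: "a \<in> set B" using sbt tpA btB ab' by auto
  obtain B1 B2 where B: "B = B1 @ a # B2" using split_list[OF aB] by blast
  have aB1: "a \<notin> set B1" "a \<notin> set B2" "set B1 \<inter> set B2 = {}" "distinct B1" "distinct B2"
    using dB B by auto
  have bB1: "b \<notin> set B1" "b \<notin> set B2" using bB B by auto
  have rr: "rauzy_right S = S\<lparr>iet_bot := ins_after b a B, iet_len := L'\<rparr>"
    using gt' unfolding rauzy_right_def Let_def L'_def L_def a_def b_def B_def bt_def by simp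
  have bt': "ins_after b a B = B1 @ a # b # B2" using B aB1 ins_after_split by metis
  define S' where "S' = rauzy_right S"
  have S'f: "iet_top S' = tp" "iet_bot S' = B1 @ a # b # B2" "iet_len S' = L'" "iet_left S' = l"
    unfolding S'_def rr using bt' by (simp_all add: tp_def l_def)
  have bt_eq: "bt = B1 @ a # B2 @ [b]" using btB B by simp
  have sumeq: "lensum L B + L b = lensum L A + L a"
    using lensum_bot[OF wf] unfolding tp_def[symmetric] bt_def[symmetric] L_def[symmetric] using tpA btB by simp
  have L'a: "L' a = L a - L b" and L'o: "\<And>c. c \<noteq> a \<Longrightarrow> L' c = L c" by (simp_all add: L'_def)
  have wf': "iet_wf S'"
    unfolding iet_wf_def S'f
  proof (intro conjI)
    show "tp \<noteq> []" "distinct tp" by fact+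
    show "distinct (B1 @ a # b # B2)" using aB1 bB1 ab' by auto
    show "set (B1 @ a # b # B2) = set tp" using sbt bt_eq by auto
    show "\<forall>c\<in>set tp. 0 < L' c" using pos gt' by (auto simp: L'_def)
  qed
  have ot: "off_top S' c = off_top S c" if c: "c \<in> set tp" for c
  proof -
    have "a \<notin> set (before c tp)"
    proof (cases "c = a")
      case True then show ?thesis using tpA aA before_append_Cons[of a A "[]"] by simp
    next
      case False
      then have "c \<in> set A" using c tpA by simp
      then have "before c tp = before c A" using tpA before_append_in by metis
      then show ?thesis using aA set_before_subset[of c A] by auto
    qed
    then show ?thesis unfolding off_top_def S'f using tp_def L_def L'_def lensum_upd_notin by metis
  qed
  have ob: "off_bot S' c = off_bot S c" if c: "c \<in> set tp" "c \<noteq> b" for c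
  proof -
    have cs: "c \<in> set B1 \<or> c = a \<or> c \<in> set B2" using c sbt bt_eq by auto
    have "lensum L' (before c (B1 @ a # b # B2)) = lensum L (before c (B1 @ a # B2 @ [b]))"
    proof -
      { assume c1: "c \<in> set B1"
        have e1: "before c (B1 @ a # b # B2) = before c B1" using before_append_in[OF c1] by metis
        have e2: "before c (B1 @ a # B2 @ [b]) = before c B1" using before_append_in[OF c1] by metis
        have "a \<notin> set (before c B1)" using aB1 set_before_subset[of c B1] by auto
        then have ?thesis unfolding e1 e2 L'_def using lensum_upd_notin by metis }
      moreover
      { assume c2: "c = a"
        have e1: "before c (B1 @ a # b # B2) = B1" using before_append_Cons[of a B1] aB1 c2 by simp
        have e2: "before c (B1 @ a # B2 @ [b]) = B1" using before_append_Cons[of a B1] aB1 c2 by simp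
        have ?thesis unfolding e1 e2 L'_def using lensum_upd_notin aB1 by metis }
      moreover
      { assume c3: "c \<in> set B2"
        have cn: "c \<notin> set B1" "c \<noteq> a" "c \<noteq> b" using c3 aB1 bB1 by auto
        have e1: "before c (B1 @ a # b # B2) = B1 @ a # b # before c B2" using before_append_notin[of c B1] cn by simp
        have e2: "before c (B1 @ a # B2 @ [b]) = B1 @ a # before c B2" using before_append_notin[of c B1] before_append_in[OF c3, of "[b]"] cn by simp
        have "a \<notin> set (before c B2)" using aB1 set_before_subset[of c B2] by auto
        then have "lensum L' (before c B2) = lensum L (before c B2)" unfolding L'_def using lensum_upd_notin by metis
        moreover have "lensum L' B1 = lensum L B1" unfolding L'_def using lensum_upd_notin aB1 by metis
        moreover have "L' b = L b" using ab' by (simp add: L'_def)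
        ultimately have ?thesis unfolding e1 e2 using L'a by simp }
      ultimately show ?thesis using cs by blast
    qed
    then show ?thesis unfolding off_bot_def S'f using bt_eq L_def bt_def by simp
  qed
  have ob_b: "off_bot S' b = lensum L B1 + (L a - L b)"
  proof -
    have e1: "before b (B1 @ a # b # B2) = B1 @ [a]" using before_append_notin[of b B1] bB1 ab' by simp
    have "lensum L' B1 = lensum L B1" unfolding L'_def using lensum_upd_notin aB1 by metis
    then show ?thesis unfolding off_bot_def S'f e1 using L'a by simp
  qed
  have ob_bS: "off_bot S b = lensum L B" unfolding off_bot_def using btB bB before_append_Cons[of b B "[]"] by (simp add: bt_def L_def)
  have ob_aS: "off_bot S a = lensum L B1" unfolding off_bot_def using bt_eq aB1 before_append_Cons[of a B1] by (simp add: bt_def L_def)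
  have ot_aS: "off_top S a = lensum L A" unfolding off_top_def using tpA aA before_append_Cons[of a A "[]"] by (simp add: tp_def L_def)
  have right': "iet_right S' = iet_right S - L b"
  proof -
    have "lensum L' A = lensum L A" unfolding L'_def using lensum_upd_notin aA by metis
    then show ?thesis unfolding iet_right_def S'f using tpA L'a by (simp add: l_def tp_def L_def)
  qed
  have right: "iet_right S = l + lensum L A + L a" unfolding iet_right_def using tpA by (simp add: l_def tp_def L_def)
  have bA: "b \<in> set tp" using sbt btB by auto
  have aT: "a \<in> set tp" using tpA by auto
  have Lbpos: "L b > 0" using pos bA by blast
  have st: "returns_within_two S S'"
  proof (rule returns_within_twoI[OF wf wf', of b b a])
    fix c assume c: "c \<in> set (iet_top S')" "c \<noteq> b"
    have cT: "c \<in> set tp" using c S'f by simp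
    have "ivl S' c \<subseteq> ivl S c"
      unfolding ivl_def using ot[OF cT] S'f gt' Lbpos by (auto simp: L'_def l_def L_def)
    then show "c \<in> set (iet_top S) \<and> ivl S' c \<subseteq> ivl S c
        \<and> off_bot S' c - off_top S' c = off_bot S c - off_top S c"
      using cT ot[OF cT] ob[OF cT c(2)] by (simp add: tp_def)
  next
    assume "b \<in> set (iet_top S')"
    have ivb: "ivl S' b = ivl S b" unfolding ivl_def using ot[OF bA] S'f ab' by (simp add: L'_def l_def L_def)
    have "\<forall>x\<in>ivl S' b. x + off_bot S b - off_top S b \<in> ivl S a \<and> x + off_bot S b - off_top S b \<notin> iet_dom S'"
    proof
      fix x assume x: "x \<in> ivl S' b"
      then have x1: "l + off_top S b \<le> x" "x < l + off_top S b + L b" using ivb by (auto simp: ivl_def l_def L_def)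
      show "x + off_bot S b - off_top S b \<in> ivl S a \<and> x + off_bot S b - off_top S b \<notin> iet_dom S'"
        using x1 ob_bS ot_aS sumeq gt' right right' unfolding ivl_def iet_dom_def
        by (auto simp: l_def L_def)
    qed
    moreover have "off_bot S' b - off_top S' b = (off_bot S b - off_top S b) + (off_bot S a - off_top S a)"
      using ob_b ot[OF bA] ob_bS ob_aS ot_aS sumeq by simp
    ultimately show "b \<in> set (iet_top S) \<and> a \<in> set (iet_top S) \<and> ivl S' b \<subseteq> ivl S b
        \<and> (\<forall>x\<in>ivl S' b. x + off_bot S b - off_top S b \<in> ivl S a \<and> x + off_bot S b - off_top S b \<notin> iet_dom S')
        \<and> off_bot S' b - off_top S' b = (off_bot S b - off_top S b) + (off_bot S a - off_top S a)"
      using bA aT ivb by (simp add: tp_def)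
  qed
  show ?thesis
    using wf' S'f right' st ot unfolding S'_def
    by (simp add: l_def tp_def L'_def L_def a_def b_def)
qed

lemma rauzy_right_bot_wins:
  fixes S :: "'a iet"
  assumes wf: "iet_wf S" and ab: "last (iet_top S) \<noteq> last (iet_bot S)"
    and gt: "iet_len S (last (iet_top S)) < iet_len S (last (iet_bot S))"
  shows "iet_wf (rauzy_right S) \<and> iet_left (rauzy_right S) = iet_left S
   \<and> iet_right (rauzy_right S) = iet_right S - iet_len S (last (iet_top S))
   \<and> iet_bot (rauzy_right S) = iet_bot S
   \<and> iet_len (rauzy_right S) = (iet_len S)(last (iet_bot S) := iet_len S (last (iet_bot S)) - iet_len S (last (iet_top S)))
   \<and> (\<exists>A1 A2. iet_top S = A1 @ last (iet_bot S) # A2 @ [last (iet_top S)]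
         \<and> iet_top (rauzy_right S) = A1 @ last (iet_bot S) # last (iet_top S) # A2)
   \<and> returns_within_two S (rauzy_right S)
   \<and> (\<forall>c\<in>set (iet_top S). c \<noteq> last (iet_top S) \<longrightarrow> off_top (rauzy_right S) c = off_top S c)"
proof -
  define tp where "tp = iet_top S"
  define bt where "bt = iet_bot S"
  define L where "L = iet_len S"
  define a where "a = last (iet_top S)"
  define b where "b = last (iet_bot S)"
  define l where "l = iet_left S"
  define L' where "L' = L(b := L b - L a)"
  have gt': "L a < L b" using gt by (simp add: L_def a_def b_def)
  have ab': "a \<noteq> b" using ab by (simp add: a_def b_def)
  have tpne: "tp \<noteq> []" and dtp: "distinct tp" and dbt: "distinct bt" and sbt: "set bt = set tp"
    and pos: "\<forall>c\<in>set tp. L c > 0"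
    using wf unfolding iet_wf_def tp_def bt_def L_def by auto
  have btne: "bt \<noteq> []" using tpne sbt by auto
  define A where "A = butlast tp"
  define B where "B = butlast bt"
  have tpA: "tp = A @ [a]" using tpne unfolding A_def a_def tp_def by simp
  have btB: "bt = B @ [b]" using btne unfolding B_def b_def bt_def by simp
  have aA: "a \<notin> set A" and dA: "distinct A" using dtp tpA by auto
  have bB: "b \<notin> set B" and dB: "distinct B" using dbt btB by auto
  have bA: "b \<in> set A" using sbt tpA btB ab' by auto
  obtain A1 A2 where A: "A = A1 @ b # A2" using split_list[OF bA] by blast
  have bA1: "b \<notin> set A1" "b \<notin> set A2" "set A1 \<inter> set A2 = {}" "distinct A1" "distinct A2"
    using dA A by auto
  have aA1: "a \<notin> set A1" "a \<notin> set A2" using aA A by auto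
  have rr: "rauzy_right S = S\<lparr>iet_top := ins_after a b A, iet_len := L'\<rparr>"
    using gt' unfolding rauzy_right_def Let_def L'_def L_def a_def b_def A_def tp_def by auto
  have tp': "ins_after a b A = A1 @ b # a # A2" using A bA1 ins_after_split by metis
  define S' where "S' = rauzy_right S"
  have S'f: "iet_top S' = A1 @ b # a # A2" "iet_bot S' = bt" "iet_len S' = L'" "iet_left S' = l"
    unfolding S'_def rr using tp' by (simp_all add: bt_def l_def)
  have tp_eq: "tp = A1 @ b # A2 @ [a]" using tpA A by simp
  have sumeq: "lensum L B + L b = lensum L A + L a"
    using lensum_bot[OF wf] unfolding tp_def[symmetric] bt_def[symmetric] L_def[symmetric] using tpA btB by simp
  have L'b: "L' b = L b - L a" and L'o: "\<And>c. c \<noteq> b \<Longrightarrow> L' c = L c" by (simp_all add: L'_def)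
  have aT: "a \<in> set tp" using tpA by auto
  have bT: "b \<in> set tp" using tpA bA by auto
  have Lapos: "L a > 0" using pos aT by blast
  have wf': "iet_wf S'"
    unfolding iet_wf_def S'f
  proof (intro conjI)
    show "A1 @ b # a # A2 \<noteq> []" by simp
    show "distinct (A1 @ b # a # A2)" using bA1 aA1 ab' by auto
    show "distinct bt" by fact
    show "set bt = set (A1 @ b # a # A2)" using sbt tp_eq by auto
    show "\<forall>c\<in>set (A1 @ b # a # A2). 0 < L' c" using pos gt' tp_eq by (auto simp: L'_def)
  qed
  have ot: "off_top S' c = off_top S c" if c: "c \<in> set tp" "c \<noteq> a" for c
  proof -
    have cs: "c \<in> set A1 \<or> c = b \<or> c \<in> set A2" using c tp_eq by auto
    have "lensum L' (before c (A1 @ b # a # A2)) = lensum L (before c (A1 @ b # A2 @ [a]))"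
    proof -
      { assume c1: "c \<in> set A1"
        have e1: "before c (A1 @ b # a # A2) = before c A1" using before_append_in[OF c1] by metis
        have e2: "before c (A1 @ b # A2 @ [a]) = before c A1" using before_append_in[OF c1] by metis
        have "b \<notin> set (before c A1)" using bA1 set_before_subset[of c A1] by auto
        then have ?thesis unfolding e1 e2 L'_def using lensum_upd_notin by metis }
      moreover
      { assume c2: "c = b"
        have e1: "before c (A1 @ b # a # A2) = A1" using before_append_Cons[of b A1] bA1 c2 by simp
        have e2: "before c (A1 @ b # A2 @ [a]) = A1" using before_append_Cons[of b A1] bA1 c2 by simp
        have ?thesis unfolding e1 e2 L'_def using lensum_upd_notin bA1 by metis }
      moreover
      { assume c3: "c \<in> set A2"
        have cn: "c \<notin> set A1" "c \<noteq> b" "c \<noteq> a" using c3 bA1 aA1 by auto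
        have e1: "before c (A1 @ b # a # A2) = A1 @ b # a # before c A2" using before_append_notin[of c A1] cn by simp
        have e2: "before c (A1 @ b # A2 @ [a]) = A1 @ b # before c A2" using before_append_notin[of c A1] before_append_in[OF c3, of "[a]"] cn by simp
        have "b \<notin> set (before c A2)" using bA1 set_before_subset[of c A2] by auto
        then have "lensum L' (before c A2) = lensum L (before c A2)" unfolding L'_def using lensum_upd_notin by metis
        moreover have "lensum L' A1 = lensum L A1" unfolding L'_def using lensum_upd_notin bA1 by metis
        moreover have "L' a = L a" using ab' by (simp add: L'_def)
        ultimately have ?thesis unfolding e1 e2 using L'b by simp }
      ultimately show ?thesis using cs by blast
    qed
    then show ?thesis unfolding off_top_def S'f using tp_eq L_def tp_def by simp
  qed
  have ot_a: "off_top S' a = lensum L A1 + (L b - L a)"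
  proof -
    have e1: "before a (A1 @ b # a # A2) = A1 @ [b]" using before_append_notin[of a A1] aA1 ab' by simp
    have "lensum L' A1 = lensum L A1" unfolding L'_def using lensum_upd_notin bA1 by metis
    then show ?thesis unfolding off_top_def S'f e1 using L'b by simp
  qed
  have ob: "off_bot S' c = off_bot S c" if c: "c \<in> set tp" for c
  proof -
    have "b \<notin> set (before c bt)"
    proof (cases "c = b")
      case True then show ?thesis using btB bB before_append_Cons[of b B "[]"] by simp
    next
      case False
      then have "c \<in> set B" using c btB sbt by auto
      then have "before c bt = before c B" using btB before_append_in by metis
      then show ?thesis using bB set_before_subset[of c B] by auto
    qed
    then show ?thesis unfolding off_bot_def S'f using bt_def L_def L'_def lensum_upd_notin by metis
  qed
  have ob_bS: "off_bot S b = lensum L B" unfolding off_bot_def using btB bB before_append_Cons[of b B "[]"] by (simp add: bt_def L_def)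
  have ot_bS: "off_top S b = lensum L A1" unfolding off_top_def using tp_eq bA1 before_append_Cons[of b A1] by (simp add: tp_def L_def)
  have ot_aS: "off_top S a = lensum L A" unfolding off_top_def using tpA aA before_append_Cons[of a A "[]"] by (simp add: tp_def L_def)
  have sA: "lensum L A = lensum L A1 + L b + lensum L A2" using A by simp
  have right': "iet_right S' = iet_right S - L a"
  proof -
    have "lensum L' A1 = lensum L A1" "lensum L' A2 = lensum L A2" unfolding L'_def using lensum_upd_notin bA1 by metis+
    then show ?thesis unfolding iet_right_def S'f using tpA sA L'b ab' by (simp add: l_def tp_def L_def L'_def)
  qed
  have right: "iet_right S = l + lensum L A + L a" unfolding iet_right_def using tpA by (simp add: l_def tp_def L_def)
  have st: "returns_within_two S S'"
  proof (rule returns_within_twoI[OF wf wf', of a b a])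
    fix c assume c: "c \<in> set (iet_top S')" "c \<noteq> a"
    have cT: "c \<in> set tp" using c S'f tp_eq by auto
    have "ivl S' c \<subseteq> ivl S c"
      unfolding ivl_def using ot[OF cT c(2)] S'f gt' Lapos by (auto simp: L'_def l_def L_def)
    then show "c \<in> set (iet_top S) \<and> ivl S' c \<subseteq> ivl S c
        \<and> off_bot S' c - off_top S' c = off_bot S c - off_top S c"
      using cT ot[OF cT c(2)] ob[OF cT] by (simp add: tp_def)
  next
    assume "a \<in> set (iet_top S')"
    have iva: "ivl S' a \<subseteq> ivl S b" unfolding ivl_def using ot_a ot_bS S'f ab' Lapos gt'
      by (auto simp: L'_def l_def L_def)
    have "\<forall>x\<in>ivl S' a. x + off_bot S b - off_top S b \<in> ivl S a \<and> x + off_bot S b - off_top S b \<notin> iet_dom S'"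
    proof
      fix x assume x: "x \<in> ivl S' a"
      then have x1: "l + lensum L A1 + (L b - L a) \<le> x" "x < l + lensum L A1 + (L b - L a) + L a"
        using ot_a S'f ab' by (auto simp: ivl_def l_def L_def L'_def)
      show "x + off_bot S b - off_top S b \<in> ivl S a \<and> x + off_bot S b - off_top S b \<notin> iet_dom S'"
        using x1 ob_bS ot_bS ot_aS sumeq gt' right right' unfolding ivl_def iet_dom_def
        by (auto simp: l_def L_def)
    qed
    moreover have "off_bot S' a - off_top S' a = (off_bot S b - off_top S b) + (off_bot S a - off_top S a)"
      using ob[OF aT] ot_a ob_bS ot_bS ot_aS sumeq by simp
    ultimately show "b \<in> set (iet_top S) \<and> a \<in> set (iet_top S) \<and> ivl S' a \<subseteq> ivl S b
        \<and> (\<forall>x\<in>ivl S' a. x + off_bot S b - off_top S b \<in> ivl S a \<and> x + off_bot S b - off_top S b \<notin> iet_dom S')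
        \<and> off_bot S' a - off_top S' a = (off_bot S b - off_top S b) + (off_bot S a - off_top S a)"
      using bT aT iva by (simp add: tp_def)
  qed
  have ex: "\<exists>A1 A2. iet_top S = A1 @ last (iet_bot S) # A2 @ [last (iet_top S)]
         \<and> iet_top (rauzy_right S) = A1 @ last (iet_bot S) # last (iet_top S) # A2"
    using tp_eq S'f unfolding S'_def tp_def a_def b_def by blast
  show ?thesis
    using wf' S'f right' st ot ex unfolding S'_def
    by (simp add: l_def tp_def bt_def L'_def L_def a_def b_def)
qed

lemma rauzy_right_tie:
  fixes S :: "'a iet"
  assumes wf: "iet_wf S" and ab: "last (iet_top S) \<noteq> last (iet_bot S)"
    and eq: "iet_len S (last (iet_top S)) = iet_len S (last (iet_bot S))"
  shows "iet_wf (rauzy_right S) \<and> iet_left (rauzy_right S) = iet_left S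
   \<and> iet_right (rauzy_right S) = iet_right S - iet_len S (last (iet_top S))
   \<and> iet_len (rauzy_right S) = iet_len S
   \<and> iet_top (rauzy_right S) = butlast (iet_top S)
   \<and> returns_within_two S (rauzy_right S)
   \<and> (\<forall>c\<in>set (iet_top (rauzy_right S)). off_top (rauzy_right S) c = off_top S c)"
proof -
  define tp where "tp = iet_top S"
  define bt where "bt = iet_bot S"
  define L where "L = iet_len S"
  define a where "a = last (iet_top S)"
  define b where "b = last (iet_bot S)"
  define l where "l = iet_left S"
  have eq': "L a = L b" using eq by (simp add: L_def a_def b_def)
  have ab': "a \<noteq> b" using ab by (simp add: a_def b_def)
  have tpne: "tp \<noteq> []" and dtp: "distinct tp" and dbt: "distinct bt" and sbt: "set bt = set tp"
    and pos: "\<forall>c\<in>set tp. L c > 0"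
    using wf unfolding iet_wf_def tp_def bt_def L_def by auto
  have btne: "bt \<noteq> []" using tpne sbt by auto
  define A where "A = butlast tp"
  define B where "B = butlast bt"
  have tpA: "tp = A @ [a]" using tpne unfolding A_def a_def tp_def by simp
  have btB: "bt = B @ [b]" using btne unfolding B_def b_def bt_def by simp
  have aA: "a \<notin> set A" and dA: "distinct A" using dtp tpA by auto
  have bB: "b \<notin> set B" and dB: "distinct B" using dbt btB by auto
  have aB: "a \<in> set B" using sbt tpA btB ab' by auto
  have bA: "b \<in> set A" using sbt tpA btB ab' by auto
  obtain B1 B2 where B: "B = B1 @ a # B2" using split_list[OF aB] by blast
  have aB1: "a \<notin> set B1" "a \<notin> set B2" "set B1 \<inter> set B2 = {}" "distinct B1" "distinct B2"
    using dB B by auto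
  have bB1: "b \<notin> set B1" "b \<notin> set B2" using bB B by auto
  have rr: "rauzy_right S = S\<lparr>iet_top := A, iet_bot := repl a b B\<rparr>"
    using eq' unfolding rauzy_right_def Let_def L_def a_def b_def A_def B_def tp_def bt_def by simp
  have bt': "repl a b B = B1 @ b # B2" using B aB1 repl_split by metis
  define S' where "S' = rauzy_right S"
  have S'f: "iet_top S' = A" "iet_bot S' = B1 @ b # B2" "iet_len S' = L" "iet_left S' = l"
    unfolding S'_def rr using bt' by (simp_all add: L_def l_def)
  have bt_eq: "bt = B1 @ a # B2 @ [b]" using btB B by simp
  have sumeq: "lensum L B + L b = lensum L A + L a"
    using lensum_bot[OF wf] unfolding tp_def[symmetric] bt_def[symmetric] L_def[symmetric] using tpA btB by simp
  have aT: "a \<in> set tp" using tpA by auto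
  have bT: "b \<in> set tp" using tpA bA by auto
  have wf': "iet_wf S'"
    unfolding iet_wf_def S'f
  proof (intro conjI)
    show "A \<noteq> []" using bA by auto
    show "distinct A" by fact
    show "distinct (B1 @ b # B2)" using aB1 bB1 by auto
    show "set (B1 @ b # B2) = set A"
    proof -
      have "set bt = set A \<union> {a}" using tpA sbt by auto
      then show ?thesis using bt_eq aA aB1 bA ab' by auto
    qed
    show "\<forall>c\<in>set A. 0 < L c" using pos tpA by auto
  qed
  have ot: "off_top S' c = off_top S c" if c: "c \<in> set A" for c
  proof -
    have "before c tp = before c A" using tpA before_append_in[OF c] by metis
    then show ?thesis unfolding off_top_def S'f by (simp add: tp_def L_def)
  qed
  have ob: "off_bot S' c = off_bot S c" if c: "c \<in> set A" "c \<noteq> b" for c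
  proof -
    have cs: "c \<in> set B1 \<or> c \<in> set B2" using c bt_eq sbt tpA aA by auto
    have "lensum L (before c (B1 @ b # B2)) = lensum L (before c (B1 @ a # B2 @ [b]))"
    proof -
      { assume c1: "c \<in> set B1"
        have ?thesis using before_append_in[OF c1, of "b # B2"] before_append_in[OF c1, of "a # B2 @ [b]"] by simp }
      moreover
      { assume c3: "c \<in> set B2"
        have cn: "c \<notin> set B1" "c \<noteq> a" "c \<noteq> b" using c3 aB1 bB1 by auto
        have e1: "before c (B1 @ b # B2) = B1 @ b # before c B2" using before_append_notin[of c B1] cn by simp
        have e2: "before c (B1 @ a # B2 @ [b]) = B1 @ a # before c B2" using before_append_notin[of c B1] before_append_in[OF c3, of "[b]"] cn by simp
        have ?thesis unfolding e1 e2 using eq' by simp }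
      ultimately show ?thesis using cs by blast
    qed
    then show ?thesis unfolding off_bot_def S'f using bt_eq L_def bt_def by simp
  qed
  have ob_b: "off_bot S' b = lensum L B1"
  proof -
    have e1: "before b (B1 @ b # B2) = B1" using before_append_Cons[of b B1] bB1 by simp
    then show ?thesis unfolding off_bot_def S'f e1 by simp
  qed
  have ob_bS: "off_bot S b = lensum L B" unfolding off_bot_def using btB bB before_append_Cons[of b B "[]"] by (simp add: bt_def L_def)
  have ob_aS: "off_bot S a = lensum L B1" unfolding off_bot_def using bt_eq aB1 before_append_Cons[of a B1] by (simp add: bt_def L_def)
  have ot_aS: "off_top S a = lensum L A" unfolding off_top_def using tpA aA before_append_Cons[of a A "[]"] by (simp add: tp_def L_def)
  have right': "iet_right S' = iet_right S - L a"
    unfolding iet_right_def S'f using tpA by (simp add: l_def tp_def L_def)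
  have right: "iet_right S = l + lensum L A + L a" unfolding iet_right_def using tpA by (simp add: l_def tp_def L_def)
  have st: "returns_within_two S S'"
  proof (rule returns_within_twoI[OF wf wf', of b b a])
    fix c assume c: "c \<in> set (iet_top S')" "c \<noteq> b"
    have cT: "c \<in> set A" using c S'f by simp
    have "ivl S' c = ivl S c"
      unfolding ivl_def using ot[OF cT] S'f by (simp add: l_def L_def)
    then show "c \<in> set (iet_top S) \<and> ivl S' c \<subseteq> ivl S c
        \<and> off_bot S' c - off_top S' c = off_bot S c - off_top S c"
      using cT ot[OF cT] ob[OF cT c(2)] tpA by (simp add: tp_def)
  next
    assume "b \<in> set (iet_top S')"
    have ivb: "ivl S' b = ivl S b" unfolding ivl_def using ot[OF bA] S'f by (simp add: l_def L_def)
    have "\<forall>x\<in>ivl S' b. x + off_bot S b - off_top S b \<in> ivl S a \<and> x + off_bot S b - off_top S b \<notin> iet_dom S'"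
    proof
      fix x assume x: "x \<in> ivl S' b"
      then have x1: "l + off_top S b \<le> x" "x < l + off_top S b + L b" using ivb by (auto simp: ivl_def l_def L_def)
      show "x + off_bot S b - off_top S b \<in> ivl S a \<and> x + off_bot S b - off_top S b \<notin> iet_dom S'"
        using x1 ob_bS ot_aS sumeq eq' right right' unfolding ivl_def iet_dom_def
        by (auto simp: l_def L_def)
    qed
    moreover have "off_bot S' b - off_top S' b = (off_bot S b - off_top S b) + (off_bot S a - off_top S a)"
      using ob_b ot[OF bA] ob_bS ob_aS ot_aS sumeq eq' by simp
    ultimately show "b \<in> set (iet_top S) \<and> a \<in> set (iet_top S) \<and> ivl S' b \<subseteq> ivl S b
        \<and> (\<forall>x\<in>ivl S' b. x + off_bot S b - off_top S b \<in> ivl S a \<and> x + off_bot S b - off_top S b \<notin> iet_dom S')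
        \<and> off_bot S' b - off_top S' b = (off_bot S b - off_top S b) + (off_bot S a - off_top S a)"
      using bT aT ivb by (simp add: tp_def)
  qed
  show ?thesis
    using wf' S'f right' st ot unfolding S'_def
    by (simp add: l_def tp_def A_def L_def a_def)
qed

lemma rauzy_left_top_wins:
  fixes S :: "'a iet"
  assumes wf: "iet_wf S" and ab: "hd (iet_top S) \<noteq> hd (iet_bot S)"
    and gt: "iet_len S (hd (iet_bot S)) < iet_len S (hd (iet_top S))"
  shows "iet_wf (rauzy_left S) \<and> iet_left (rauzy_left S) = iet_left S + iet_len S (hd (iet_bot S))
   \<and> iet_right (rauzy_left S) = iet_right S
   \<and> iet_top (rauzy_left S) = iet_top S
   \<and> iet_len (rauzy_left S) = (iet_len S)(hd (iet_top S) := iet_len S (hd (iet_top S)) - iet_len S (hd (iet_bot S)))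
   \<and> returns_within_two S (rauzy_left S)"
proof -
  define tp where "tp = iet_top S"
  define bt where "bt = iet_bot S"
  define L where "L = iet_len S"
  define a where "a = hd (iet_top S)"
  define b where "b = hd (iet_bot S)"
  define l where "l = iet_left S"
  define L' where "L' = L(a := L a - L b)"
  have gt': "L b < L a" using gt by (simp add: L_def a_def b_def)
  have ab': "a \<noteq> b" using ab by (simp add: a_def b_def)
  have tpne: "tp \<noteq> []" and dtp: "distinct tp" and dbt: "distinct bt" and sbt: "set bt = set tp"
    and pos: "\<forall>c\<in>set tp. L c > 0"
    using wf unfolding iet_wf_def tp_def bt_def L_def by auto
  have btne: "bt \<noteq> []" using tpne sbt by auto
  define A where "A = tl tp"
  define B where "B = tl bt"
  have tpA: "tp = a # A" using tpne unfolding A_def a_def tp_def by simp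
  have btB: "bt = b # B" using btne unfolding B_def b_def bt_def by simp
  have aA: "a \<notin> set A" and dA: "distinct A" using dtp tpA by auto
  have bB: "b \<notin> set B" and dB: "distinct B" using dbt btB by auto
  have aB: "a \<in> set B" using sbt tpA btB ab' by auto
  obtain B1 B2 where B: "B = B1 @ a # B2" using split_list[OF aB] by blast
  have aB1: "a \<notin> set B1" "a \<notin> set B2" "set B1 \<inter> set B2 = {}" "distinct B1" "distinct B2"
    using dB B by auto
  have bB1: "b \<notin> set B1" "b \<notin> set B2" using bB B by auto
  have rr: "rauzy_left S = S\<lparr>iet_left := l + L b, iet_bot := ins_before b a B, iet_len := L'\<rparr>"
    using gt' unfolding rauzy_left_def Let_def L'_def L_def a_def b_def B_def bt_def l_def by simp
  have bt': "ins_before b a B = B1 @ b # a # B2" using B aB1 ins_before_split by metis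
  define S' where "S' = rauzy_left S"
  have S'f: "iet_top S' = tp" "iet_bot S' = B1 @ b # a # B2" "iet_len S' = L'" "iet_left S' = l + L b"
    unfolding S'_def rr using bt' by (simp_all add: tp_def)
  have bt_eq: "bt = b # B1 @ a # B2" using btB B by simp
  have sumeq: "lensum L B + L b = lensum L A + L a"
    using lensum_bot[OF wf] unfolding tp_def[symmetric] bt_def[symmetric] L_def[symmetric] using tpA btB by simp
  have L'a: "L' a = L a - L b" and L'o: "\<And>c. c \<noteq> a \<Longrightarrow> L' c = L c" by (simp_all add: L'_def)
  have aT: "a \<in> set tp" using tpA by auto
  have bT: "b \<in> set tp" using sbt btB by auto
  have bA: "b \<in> set A" using bT tpA ab' by auto
  have Lbpos: "L b > 0" using pos bT by blast
  have wf': "iet_wf S'"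
    unfolding iet_wf_def S'f
  proof (intro conjI)
    show "tp \<noteq> []" "distinct tp" by fact+
    show "distinct (B1 @ b # a # B2)" using aB1 bB1 ab' by auto
    show "set (B1 @ b # a # B2) = set tp" using sbt bt_eq by auto
    show "\<forall>c\<in>set tp. 0 < L' c" using pos gt' by (auto simp: L'_def)
  qed
  have ot: "off_top S' c = off_top S c - L b" if c: "c \<in> set A" for c
  proof -
    have "c \<noteq> a" using c aA by auto
    then have e: "before c tp = a # before c A" using tpA by simp
    have "a \<notin> set (before c A)" using aA set_before_subset[of c A] by auto
    then have "lensum L' (before c A) = lensum L (before c A)" unfolding L'_def using lensum_upd_notin by metis
    moreover have "off_top S c = lensum L (before c tp)" by (simp add: off_top_def tp_def L_def)
    moreover have "off_top S' c = lensum L' (before c tp)" by (simp add: off_top_def S'f)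
    ultimately show ?thesis unfolding e using L'a by simp
  qed
  have ot_a: "off_top S' a = 0" "off_top S a = 0" unfolding off_top_def S'f using tpA by (simp_all add: tp_def)
  have ob_a: "off_bot S' a = off_bot S a"
  proof -
    have e1: "before a (B1 @ b # a # B2) = B1 @ [b]" using before_append_notin[of a B1] aB1 ab' by simp
    have e2: "before a (b # B1 @ a # B2) = b # B1" using before_append_Cons[of a B1] aB1 ab' by simp
    have "lensum L' B1 = lensum L B1" unfolding L'_def using lensum_upd_notin aB1 by metis
    then show ?thesis unfolding off_bot_def S'f e1 using e2 ab' bt_eq by (simp add: L'_def bt_def L_def)
  qed
  have ob: "off_bot S' c = off_bot S c - L b" if c: "c \<in> set tp" "c \<noteq> b" "c \<noteq> a" for c
  proof -
    have cs: "c \<in> set B1 \<or> c = a \<or> c \<in> set B2" using c sbt bt_eq by auto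
    have "lensum L' (before c (B1 @ b # a # B2)) = lensum L (before c (b # B1 @ a # B2)) - L b"
    proof -
      { assume c1: "c \<in> set B1"
        have e1: "before c (B1 @ b # a # B2) = before c B1" using before_append_in[OF c1] by metis
        have e2: "before c (b # B1 @ a # B2) = b # before c B1" using before_append_in[OF c1] c by simp
        have "a \<notin> set (before c B1)" using aB1 set_before_subset[of c B1] by auto
        then have ?thesis unfolding e1 e2 L'_def using lensum_upd_notin by fastforce }
      moreover
      { assume c2: "c = a"
        then have ?thesis using c(3) by simp }
      moreover
      { assume c3: "c \<in> set B2"
        have cn: "c \<notin> set B1" "c \<noteq> a" "c \<noteq> b" using c3 aB1 bB1 by auto
        have e1: "before c (B1 @ b # a # B2) = B1 @ b # a # before c B2" using before_append_notin[of c B1] cn by simp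
        have e2: "before c (b # B1 @ a # B2) = b # B1 @ a # before c B2" using before_append_notin[of c B1] cn by simp
        have "a \<notin> set (before c B2)" using aB1 set_before_subset[of c B2] by auto
        then have "lensum L' (before c B2) = lensum L (before c B2)" unfolding L'_def using lensum_upd_notin by metis
        moreover have "lensum L' B1 = lensum L B1" unfolding L'_def using lensum_upd_notin aB1 by metis
        moreover have "L' b = L b" using ab' by (simp add: L'_def)
        ultimately have ?thesis unfolding e1 e2 using L'a by simp }
      ultimately show ?thesis using cs by blast
    qed
    then show ?thesis unfolding off_bot_def S'f using bt_eq L_def bt_def by simp
  qed
  have ob_b: "off_bot S' b = lensum L B1"
  proof -
    have e1: "before b (B1 @ b # a # B2) = B1" using before_append_Cons[of b B1] bB1 by simp
    have "lensum L' B1 = lensum L B1" unfolding L'_def using lensum_upd_notin aB1 by metis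
    then show ?thesis unfolding off_bot_def S'f e1 by simp
  qed
  have ob_bS: "off_bot S b = 0" unfolding off_bot_def using btB by (simp add: bt_def)
  have ob_aS: "off_bot S a = L b + lensum L B1" unfolding off_bot_def using bt_eq aB1 before_append_Cons[of a B1] ab'
    by (simp add: bt_def L_def)
  have right': "iet_right S' = iet_right S"
  proof -
    have "lensum L' A = lensum L A" unfolding L'_def using lensum_upd_notin aA by metis
    then show ?thesis unfolding iet_right_def S'f using tpA L'a by (simp add: l_def tp_def L_def)
  qed
  have right: "iet_right S = l + L a + lensum L A" unfolding iet_right_def using tpA by (simp add: l_def tp_def L_def)
  have st: "returns_within_two S S'"
  proof (rule returns_within_twoI[OF wf wf', of b b a])
    fix c assume c: "c \<in> set (iet_top S')" "c \<noteq> b"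
    have cT: "c \<in> set tp" using c S'f by simp
    show "c \<in> set (iet_top S) \<and> ivl S' c \<subseteq> ivl S c
        \<and> off_bot S' c - off_top S' c = off_bot S c - off_top S c"
    proof (cases "c = a")
      case True
      have "ivl S' c \<subseteq> ivl S c" unfolding ivl_def using ot_a S'f True L'a Lbpos by (auto simp: l_def L_def)
      then show ?thesis using cT ob_a ot_a True by (simp add: tp_def)
    next
      case False
      then have cA: "c \<in> set A" using cT tpA by simp
      have "ivl S' c = ivl S c" unfolding ivl_def using ot[OF cA] S'f False by (simp add: l_def L_def L'_def)
      then show ?thesis using cT ob[OF cT c(2) False] ot[OF cA] by (simp add: tp_def)
    qed
  next
    assume "b \<in> set (iet_top S')"
    have ivb: "ivl S' b = ivl S b" unfolding ivl_def using ot[OF bA] S'f ab' by (simp add: L'_def l_def L_def)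
    have "\<forall>x\<in>ivl S' b. x + off_bot S b - off_top S b \<in> ivl S a \<and> x + off_bot S b - off_top S b \<notin> iet_dom S'"
    proof
      fix x assume x: "x \<in> ivl S' b"
      then have x1: "l + off_top S b \<le> x" "x < l + off_top S b + L b" using ivb by (auto simp: ivl_def l_def L_def)
      show "x + off_bot S b - off_top S b \<in> ivl S a \<and> x + off_bot S b - off_top S b \<notin> iet_dom S'"
        using x1 ob_bS ot_a gt' right right' S'f unfolding ivl_def iet_dom_def
        by (auto simp: l_def L_def)
    qed
    moreover have "off_bot S' b - off_top S' b = (off_bot S b - off_top S b) + (off_bot S a - off_top S a)"
      using ob_b ot[OF bA] ob_bS ob_aS ot_a by simp
    ultimately show "b \<in> set (iet_top S) \<and> a \<in> set (iet_top S) \<and> ivl S' b \<subseteq> ivl S b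
        \<and> (\<forall>x\<in>ivl S' b. x + off_bot S b - off_top S b \<in> ivl S a \<and> x + off_bot S b - off_top S b \<notin> iet_dom S')
        \<and> off_bot S' b - off_top S' b = (off_bot S b - off_top S b) + (off_bot S a - off_top S a)"
      using bT aT ivb by (simp add: tp_def)
  qed
  show ?thesis
    using wf' S'f right' st unfolding S'_def
    by (simp add: l_def tp_def L'_def L_def a_def b_def)
qed

lemma rauzy_left_bot_wins:
  fixes S :: "'a iet"
  assumes wf: "iet_wf S" and ab: "hd (iet_top S) \<noteq> hd (iet_bot S)"
    and gt: "iet_len S (hd (iet_top S)) < iet_len S (hd (iet_bot S))"
  shows "iet_wf (rauzy_left S) \<and> iet_left (rauzy_left S) = iet_left S + iet_len S (hd (iet_top S))
   \<and> iet_right (rauzy_left S) = iet_right S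
   \<and> iet_bot (rauzy_left S) = iet_bot S
   \<and> iet_len (rauzy_left S) = (iet_len S)(hd (iet_bot S) := iet_len S (hd (iet_bot S)) - iet_len S (hd (iet_top S)))
   \<and> (\<exists>A1 A2. iet_top S = hd (iet_top S) # A1 @ hd (iet_bot S) # A2
         \<and> iet_top (rauzy_left S) = A1 @ hd (iet_top S) # hd (iet_bot S) # A2)
   \<and> returns_within_two S (rauzy_left S)"
proof -
  define tp where "tp = iet_top S"
  define bt where "bt = iet_bot S"
  define L where "L = iet_len S"
  define a where "a = hd (iet_top S)"
  define b where "b = hd (iet_bot S)"
  define l where "l = iet_left S"
  define L' where "L' = L(b := L b - L a)"
  have gt': "L a < L b" using gt by (simp add: L_def a_def b_def)
  have ab': "a \<noteq> b" using ab by (simp add: a_def b_def)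
  have tpne: "tp \<noteq> []" and dtp: "distinct tp" and dbt: "distinct bt" and sbt: "set bt = set tp"
    and pos: "\<forall>c\<in>set tp. L c > 0"
    using wf unfolding iet_wf_def tp_def bt_def L_def by auto
  have btne: "bt \<noteq> []" using tpne sbt by auto
  define A where "A = tl tp"
  define B where "B = tl bt"
  have tpA: "tp = a # A" using tpne unfolding A_def a_def tp_def by simp
  have btB: "bt = b # B" using btne unfolding B_def b_def bt_def by simp
  have aA: "a \<notin> set A" and dA: "distinct A" using dtp tpA by auto
  have bB: "b \<notin> set B" and dB: "distinct B" using dbt btB by auto
  have bA: "b \<in> set A" using sbt tpA btB ab' by auto
  obtain A1 A2 where A: "A = A1 @ b # A2" using split_list[OF bA] by blast
  have bA1: "b \<notin> set A1" "b \<notin> set A2" "set A1 \<inter> set A2 = {}" "distinct A1" "distinct A2"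
    using dA A by auto
  have aA1: "a \<notin> set A1" "a \<notin> set A2" using aA A by auto
  have rr: "rauzy_left S = S\<lparr>iet_left := l + L a, iet_top := ins_before a b A, iet_len := L'\<rparr>"
    using gt' unfolding rauzy_left_def Let_def L'_def L_def a_def b_def A_def tp_def l_def by auto
  have tp': "ins_before a b A = A1 @ a # b # A2" using A bA1 ins_before_split by metis
  define S' where "S' = rauzy_left S"
  have S'f: "iet_top S' = A1 @ a # b # A2" "iet_bot S' = bt" "iet_len S' = L'" "iet_left S' = l + L a"
    unfolding S'_def rr using tp' by (simp_all add: bt_def)
  have tp_eq: "tp = a # A1 @ b # A2" using tpA A by simp
  have sumeq: "lensum L B + L b = lensum L A + L a"
    using lensum_bot[OF wf] unfolding tp_def[symmetric] bt_def[symmetric] L_def[symmetric] using tpA btB by simp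
  have L'b: "L' b = L b - L a" and L'o: "\<And>c. c \<noteq> b \<Longrightarrow> L' c = L c" by (simp_all add: L'_def)
  have aT: "a \<in> set tp" using tpA by auto
  have bT: "b \<in> set tp" using tpA bA by auto
  have Lapos: "L a > 0" using pos aT by blast
  have wf': "iet_wf S'"
    unfolding iet_wf_def S'f
  proof (intro conjI)
    show "A1 @ a # b # A2 \<noteq> []" by simp
    show "distinct (A1 @ a # b # A2)" using bA1 aA1 ab' by auto
    show "distinct bt" by fact
    show "set bt = set (A1 @ a # b # A2)" using sbt tp_eq by auto
    show "\<forall>c\<in>set (A1 @ a # b # A2). 0 < L' c" using pos gt' tp_eq by (auto simp: L'_def)
  qed
  have ot: "off_top S' c = off_top S c - L a" if c: "c \<in> set A1 \<or> c \<in> set A2" for c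
  proof -
    have "lensum L' (before c (A1 @ a # b # A2)) = lensum L (before c (a # A1 @ b # A2)) - L a"
    proof -
      { assume c1: "c \<in> set A1"
        have e1: "before c (A1 @ a # b # A2) = before c A1" using before_append_in[OF c1] by metis
        have e2: "before c (a # A1 @ b # A2) = a # before c A1" using before_append_in[OF c1] c1 aA1 by auto
        have "b \<notin> set (before c A1)" using bA1 set_before_subset[of c A1] by auto
        then have ?thesis unfolding e1 e2 L'_def using lensum_upd_notin by fastforce }
      moreover
      { assume c3: "c \<in> set A2"
        have cn: "c \<notin> set A1" "c \<noteq> b" "c \<noteq> a" using c3 bA1 aA1 by auto
        have e1: "before c (A1 @ a # b # A2) = A1 @ a # b # before c A2" using before_append_notin[of c A1] cn by simp
        have e2: "before c (a # A1 @ b # A2) = a # A1 @ b # before c A2" using before_append_notin[of c A1] cn by simp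
        have "b \<notin> set (before c A2)" using bA1 set_before_subset[of c A2] by auto
        then have "lensum L' (before c A2) = lensum L (before c A2)" unfolding L'_def using lensum_upd_notin by metis
        moreover have "lensum L' A1 = lensum L A1" unfolding L'_def using lensum_upd_notin bA1 by metis
        moreover have "L' a = L a" using ab' by (simp add: L'_def)
        ultimately have ?thesis unfolding e1 e2 using L'b by simp }
      ultimately show ?thesis using c by blast
    qed
    then show ?thesis unfolding off_top_def S'f using tp_eq L_def tp_def by simp
  qed
  have ot_a: "off_top S' a = lensum L A1"
  proof -
    have e1: "before a (A1 @ a # b # A2) = A1" using before_append_Cons[of a A1] aA1 by simp
    have "lensum L' A1 = lensum L A1" unfolding L'_def using lensum_upd_notin bA1 by metis
    then show ?thesis unfolding off_top_def S'f e1 by simp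
  qed
  have ot_b: "off_top S' b = lensum L A1 + L a"
  proof -
    have e1: "before b (A1 @ a # b # A2) = A1 @ [a]" using before_append_notin[of b A1] bA1 ab' by simp
    have "lensum L' A1 = lensum L A1" unfolding L'_def using lensum_upd_notin bA1 by metis
    then show ?thesis unfolding off_top_def S'f e1 using ab' by (simp add: L'_def)
  qed
  have ot_bS: "off_top S b = L a + lensum L A1" unfolding off_top_def using tp_eq bA1 before_append_Cons[of b A1] ab'
    by (simp add: tp_def L_def)
  have ot_aS: "off_top S a = 0" unfolding off_top_def using tpA by (simp add: tp_def)
  have ob: "off_bot S' c = off_bot S c - L a" if c: "c \<in> set tp" "c \<noteq> b" for c
  proof -
    have "c \<in> set B" using c btB sbt by auto
    then have e: "before c bt = b # before c B" using btB c(2) by simp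
    have "b \<notin> set (before c B)" using bB set_before_subset[of c B] by auto
    then have "lensum L' (before c B) = lensum L (before c B)" unfolding L'_def using lensum_upd_notin by metis
    moreover have "off_bot S c = lensum L (before c bt)" by (simp add: off_bot_def bt_def L_def)
    moreover have "off_bot S' c = lensum L' (before c bt)" by (simp add: off_bot_def S'f)
    ultimately show ?thesis unfolding e using L'b by simp
  qed
  have ob_b: "off_bot S' b = 0" "off_bot S b = 0" unfolding off_bot_def S'f using btB by (simp_all add: bt_def)
  have right': "iet_right S' = iet_right S"
  proof -
    have "lensum L' A1 = lensum L A1" "lensum L' A2 = lensum L A2" unfolding L'_def using lensum_upd_notin bA1 by metis+
    then show ?thesis unfolding iet_right_def S'f using tp_eq L'b ab' by (simp add: l_def tp_def L_def L'_def)
  qed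
  have right: "iet_right S = l + L a + lensum L A1 + L b + lensum L A2" unfolding iet_right_def using tp_eq by (simp add: l_def tp_def L_def)
  have st: "returns_within_two S S'"
  proof (rule returns_within_twoI[OF wf wf', of a b a])
    fix c assume c: "c \<in> set (iet_top S')" "c \<noteq> a"
    have cT: "c \<in> set tp" using c S'f tp_eq by auto
    show "c \<in> set (iet_top S) \<and> ivl S' c \<subseteq> ivl S c
        \<and> off_bot S' c - off_top S' c = off_bot S c - off_top S c"
    proof (cases "c = b")
      case True
      have "ivl S' c \<subseteq> ivl S c" unfolding ivl_def using ot_b ot_bS S'f True L'b Lapos by (auto simp: l_def L_def)
      then show ?thesis using cT ob_b ot_b ot_bS True by (simp add: tp_def)
    next
      case False
      then have cA: "c \<in> set A1 \<or> c \<in> set A2" using c S'f by auto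
      have "ivl S' c = ivl S c" unfolding ivl_def using ot[OF cA] S'f False by (simp add: l_def L_def L'_def)
      then show ?thesis using cT ob[OF cT False] ot[OF cA] by (simp add: tp_def)
    qed
  next
    assume "a \<in> set (iet_top S')"
    have iva: "ivl S' a \<subseteq> ivl S b" unfolding ivl_def using ot_a ot_bS S'f ab' Lapos gt'
      by (auto simp: L'_def l_def L_def)
    have "\<forall>x\<in>ivl S' a. x + off_bot S b - off_top S b \<in> ivl S a \<and> x + off_bot S b - off_top S b \<notin> iet_dom S'"
    proof
      fix x assume x: "x \<in> ivl S' a"
      then have x1: "l + L a + lensum L A1 \<le> x" "x < l + L a + lensum L A1 + L a"
        using ot_a S'f ab' by (auto simp: ivl_def l_def L_def L'_def)
      show "x + off_bot S b - off_top S b \<in> ivl S a \<and> x + off_bot S b - off_top S b \<notin> iet_dom S'"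
        using x1 ob_b ot_bS ot_aS right right' S'f unfolding ivl_def iet_dom_def
        by (auto simp: l_def L_def)
    qed
    moreover have "off_bot S' a - off_top S' a = (off_bot S b - off_top S b) + (off_bot S a - off_top S a)"
      using ob[OF aT ab'] ot_a ob_b ot_bS ot_aS by simp
    ultimately show "b \<in> set (iet_top S) \<and> a \<in> set (iet_top S) \<and> ivl S' a \<subseteq> ivl S b
        \<and> (\<forall>x\<in>ivl S' a. x + off_bot S b - off_top S b \<in> ivl S a \<and> x + off_bot S b - off_top S b \<notin> iet_dom S')
        \<and> off_bot S' a - off_top S' a = (off_bot S b - off_top S b) + (off_bot S a - off_top S a)"
      using bT aT iva by (simp add: tp_def)
  qed
  have ex: "\<exists>A1 A2. iet_top S = hd (iet_top S) # A1 @ hd (iet_bot S) # A2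
         \<and> iet_top (rauzy_left S) = A1 @ hd (iet_top S) # hd (iet_bot S) # A2"
    using tp_eq S'f unfolding S'_def tp_def a_def b_def by blast
  show ?thesis
    using wf' S'f right' st ex unfolding S'_def
    by (simp add: l_def tp_def bt_def L'_def L_def a_def b_def)
qed

lemma rauzy_left_tie:
  fixes S :: "'a iet"
  assumes wf: "iet_wf S" and ab: "hd (iet_top S) \<noteq> hd (iet_bot S)"
    and eq: "iet_len S (hd (iet_top S)) = iet_len S (hd (iet_bot S))"
  shows "iet_wf (rauzy_left S) \<and> iet_left (rauzy_left S) = iet_left S + iet_len S (hd (iet_top S))
   \<and> iet_right (rauzy_left S) = iet_right S
   \<and> iet_len (rauzy_left S) = iet_len S
   \<and> iet_top (rauzy_left S) = tl (iet_top S)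
   \<and> returns_within_two S (rauzy_left S)"
proof -
  define tp where "tp = iet_top S"
  define bt where "bt = iet_bot S"
  define L where "L = iet_len S"
  define a where "a = hd (iet_top S)"
  define b where "b = hd (iet_bot S)"
  define l where "l = iet_left S"
  have eq': "L a = L b" using eq by (simp add: L_def a_def b_def)
  have ab': "a \<noteq> b" using ab by (simp add: a_def b_def)
  have tpne: "tp \<noteq> []" and dtp: "distinct tp" and dbt: "distinct bt" and sbt: "set bt = set tp"
    and pos: "\<forall>c\<in>set tp. L c > 0"
    using wf unfolding iet_wf_def tp_def bt_def L_def by auto
  have btne: "bt \<noteq> []" using tpne sbt by auto
  define A where "A = tl tp"
  define B where "B = tl bt"
  have tpA: "tp = a # A" using tpne unfolding A_def a_def tp_def by simp
  have btB: "bt = b # B" using btne unfolding B_def b_def bt_def by simp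
  have aA: "a \<notin> set A" and dA: "distinct A" using dtp tpA by auto
  have bB: "b \<notin> set B" and dB: "distinct B" using dbt btB by auto
  have aB: "a \<in> set B" using sbt tpA btB ab' by auto
  have bA: "b \<in> set A" using sbt tpA btB ab' by auto
  obtain B1 B2 where B: "B = B1 @ a # B2" using split_list[OF aB] by blast
  have aB1: "a \<notin> set B1" "a \<notin> set B2" "set B1 \<inter> set B2 = {}" "distinct B1" "distinct B2"
    using dB B by auto
  have bB1: "b \<notin> set B1" "b \<notin> set B2" using bB B by auto
  have rr: "rauzy_left S = S\<lparr>iet_left := l + L a, iet_top := A, iet_bot := repl a b B\<rparr>"
    using eq' unfolding rauzy_left_def Let_def L_def a_def b_def A_def B_def tp_def bt_def l_def by simp
  have bt': "repl a b B = B1 @ b # B2" using B aB1 repl_split by metis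
  define S' where "S' = rauzy_left S"
  have S'f: "iet_top S' = A" "iet_bot S' = B1 @ b # B2" "iet_len S' = L" "iet_left S' = l + L a"
    unfolding S'_def rr using bt' by (simp_all add: L_def)
  have bt_eq: "bt = b # B1 @ a # B2" using btB B by simp
  have aT: "a \<in> set tp" using tpA by auto
  have bT: "b \<in> set tp" using tpA bA by auto
  have wf': "iet_wf S'"
    unfolding iet_wf_def S'f
  proof (intro conjI)
    show "A \<noteq> []" using bA by auto
    show "distinct A" by fact
    show "distinct (B1 @ b # B2)" using aB1 bB1 by auto
    show "set (B1 @ b # B2) = set A"
    proof -
      have "set bt = set A \<union> {a}" using tpA sbt by auto
      then show ?thesis using bt_eq aA aB1 bA ab' by auto
    qed
    show "\<forall>c\<in>set A. 0 < L c" using pos tpA by auto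
  qed
  have ot: "off_top S' c = off_top S c - L a" if c: "c \<in> set A" for c
  proof -
    have "c \<noteq> a" using c aA by auto
    then have "before c tp = a # before c A" using tpA by simp
    then show ?thesis unfolding off_top_def S'f by (simp add: tp_def L_def)
  qed
  have ob: "off_bot S' c = off_bot S c - L a" if c: "c \<in> set A" "c \<noteq> b" for c
  proof -
    have cs: "c \<in> set B1 \<or> c \<in> set B2" using c bt_eq sbt tpA aA by auto
    have "lensum L (before c (B1 @ b # B2)) = lensum L (before c (b # B1 @ a # B2)) - L a"
    proof -
      { assume c1: "c \<in> set B1"
        have ?thesis using before_append_in[OF c1, of "b # B2"] before_append_in[OF c1, of "a # B2"] c(2) eq' by simp }
      moreover
      { assume c3: "c \<in> set B2"
        have cn: "c \<notin> set B1" "c \<noteq> a" "c \<noteq> b" using c3 aB1 bB1 by auto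
        have e1: "before c (B1 @ b # B2) = B1 @ b # before c B2" using before_append_notin[of c B1] cn by simp
        have e2: "before c (b # B1 @ a # B2) = b # B1 @ a # before c B2" using before_append_notin[of c B1] cn by simp
        have ?thesis unfolding e1 e2 using eq' by simp }
      ultimately show ?thesis using cs by blast
    qed
    then show ?thesis unfolding off_bot_def S'f using bt_eq L_def bt_def by simp
  qed
  have ob_b: "off_bot S' b = lensum L B1"
  proof -
    have e1: "before b (B1 @ b # B2) = B1" using before_append_Cons[of b B1] bB1 by simp
    then show ?thesis unfolding off_bot_def S'f e1 by simp
  qed
  have ob_bS: "off_bot S b = 0" unfolding off_bot_def using btB by (simp add: bt_def)
  have ob_aS: "off_bot S a = L b + lensum L B1" unfolding off_bot_def using bt_eq aB1 before_append_Cons[of a B1] ab'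
    by (simp add: bt_def L_def)
  have ot_aS: "off_top S a = 0" unfolding off_top_def using tpA by (simp add: tp_def)
  have right': "iet_right S' = iet_right S"
    unfolding iet_right_def S'f using tpA by (simp add: l_def tp_def L_def)
  have right: "iet_right S = l + L a + lensum L A" unfolding iet_right_def using tpA by (simp add: l_def tp_def L_def)
  have st: "returns_within_two S S'"
  proof (rule returns_within_twoI[OF wf wf', of b b a])
    fix c assume c: "c \<in> set (iet_top S')" "c \<noteq> b"
    have cT: "c \<in> set A" using c S'f by simp
    have "ivl S' c = ivl S c"
      unfolding ivl_def using ot[OF cT] S'f by (simp add: l_def L_def)
    then show "c \<in> set (iet_top S) \<and> ivl S' c \<subseteq> ivl S c
        \<and> off_bot S' c - off_top S' c = off_bot S c - off_top S c"
      using cT ot[OF cT] ob[OF cT c(2)] tpA by (simp add: tp_def)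
  next
    assume "b \<in> set (iet_top S')"
    have ivb: "ivl S' b = ivl S b" unfolding ivl_def using ot[OF bA] S'f by (simp add: l_def L_def)
    have "\<forall>x\<in>ivl S' b. x + off_bot S b - off_top S b \<in> ivl S a \<and> x + off_bot S b - off_top S b \<notin> iet_dom S'"
    proof
      fix x assume x: "x \<in> ivl S' b"
      then have x1: "l + off_top S b \<le> x" "x < l + off_top S b + L b" using ivb by (auto simp: ivl_def l_def L_def)
      show "x + off_bot S b - off_top S b \<in> ivl S a \<and> x + off_bot S b - off_top S b \<notin> iet_dom S'"
        using x1 ob_bS ot_aS eq' right right' S'f unfolding ivl_def iet_dom_def
        by (auto simp: l_def L_def)
    qed
    moreover have "off_bot S' b - off_top S' b = (off_bot S b - off_top S b) + (off_bot S a - off_top S a)"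
      using ob_b ot[OF bA] ob_bS ob_aS ot_aS eq' by simp
    ultimately show "b \<in> set (iet_top S) \<and> a \<in> set (iet_top S) \<and> ivl S' b \<subseteq> ivl S b
        \<and> (\<forall>x\<in>ivl S' b. x + off_bot S b - off_top S b \<in> ivl S a \<and> x + off_bot S b - off_top S b \<notin> iet_dom S')
        \<and> off_bot S' b - off_top S' b = (off_bot S b - off_top S b) + (off_bot S a - off_top S a)"
      using bT aT ivb by (simp add: tp_def)
  qed
  show ?thesis
    using wf' S'f right' st unfolding S'_def
    by (simp add: l_def tp_def A_def L_def a_def)
qed

lemma rauzy_right_top_wins_lists:
  "iet_len S (last (iet_bot S)) < iet_len S (last (iet_top S)) \<Longrightarrow>
   rauzy_right S = S\<lparr>iet_bot := ins_after (last (iet_bot S)) (last (iet_top S)) (butlast (iet_bot S)),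
     iet_len := (iet_len S)(last (iet_top S) := iet_len S (last (iet_top S)) - iet_len S (last (iet_bot S)))\<rparr>"
  by (simp add: rauzy_right_def Let_def)

lemma rauzy_right_bot_wins_lists:
  "iet_len S (last (iet_top S)) < iet_len S (last (iet_bot S)) \<Longrightarrow>
   rauzy_right S = S\<lparr>iet_top := ins_after (last (iet_top S)) (last (iet_bot S)) (butlast (iet_top S)),
     iet_len := (iet_len S)(last (iet_bot S) := iet_len S (last (iet_bot S)) - iet_len S (last (iet_top S)))\<rparr>"
  by (simp add: rauzy_right_def Let_def)

lemma induced_rauzy_right:
  assumes I: "induced T S" and ab: "last (iet_top S) \<noteq> last (iet_bot S)"
  shows "induced T (rauzy_right S)" and "iet_dom (rauzy_right S) \<subseteq> iet_dom S"
proof -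
  have wf: "iet_wf S" using I by (simp add: induced_def)
  have ne: "iet_top S \<noteq> []" "iet_bot S \<noteq> []" using wf unfolding iet_wf_def by auto
  have pos: "iet_len S (last (iet_top S)) > 0" "iet_len S (last (iet_bot S)) > 0"
    using iet_wf_len_pos[OF wf] iet_wf_set_bot[OF wf] last_in_set[OF ne(1)] last_in_set[OF ne(2)] by auto
  consider "iet_len S (last (iet_bot S)) < iet_len S (last (iet_top S))"
    | "iet_len S (last (iet_top S)) < iet_len S (last (iet_bot S))"
    | "iet_len S (last (iet_top S)) = iet_len S (last (iet_bot S))" by linarith
  then have "iet_wf (rauzy_right S) \<and> iet_left S \<le> iet_left (rauzy_right S)
      \<and> iet_right (rauzy_right S) \<le> iet_right S \<and> returns_within_two S (rauzy_right S)"
    by cases (use rauzy_right_top_wins[OF wf ab] rauzy_right_bot_wins[OF wf ab] rauzy_right_tie[OF wf ab] pos in auto)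
  then show sub: "iet_dom (rauzy_right S) \<subseteq> iet_dom S" using iet_dom_subset by blast
  then show "induced T (rauzy_right S)" using induced_trans[OF I] \<open>iet_wf _ \<and> _\<close> by blast
qed

lemma induced_rauzy_left:
  assumes I: "induced T S" and ab: "hd (iet_top S) \<noteq> hd (iet_bot S)"
  shows "induced T (rauzy_left S)" and "iet_dom (rauzy_left S) \<subseteq> iet_dom S"
proof -
  have wf: "iet_wf S" using I by (simp add: induced_def)
  have ne: "iet_top S \<noteq> []" "iet_bot S \<noteq> []" using wf unfolding iet_wf_def by auto
  have pos: "iet_len S (hd (iet_top S)) > 0" "iet_len S (hd (iet_bot S)) > 0"
    using iet_wf_len_pos[OF wf] iet_wf_set_bot[OF wf] hd_in_set[OF ne(1)] hd_in_set[OF ne(2)] by auto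
  consider "iet_len S (hd (iet_bot S)) < iet_len S (hd (iet_top S))"
    | "iet_len S (hd (iet_top S)) < iet_len S (hd (iet_bot S))"
    | "iet_len S (hd (iet_top S)) = iet_len S (hd (iet_bot S))" by linarith
  then have "iet_wf (rauzy_left S) \<and> iet_left S \<le> iet_left (rauzy_left S)
      \<and> iet_right (rauzy_left S) \<le> iet_right S \<and> returns_within_two S (rauzy_left S)"
    by cases (use rauzy_left_top_wins[OF wf ab] rauzy_left_bot_wins[OF wf ab] rauzy_left_tie[OF wf ab] pos in auto)
  then show sub: "iet_dom (rauzy_left S) \<subseteq> iet_dom S" using iet_dom_subset by blast
  then show "induced T (rauzy_left S)" using induced_trans[OF I] \<open>iet_wf _ \<and> _\<close> by blast
qed

section \<open>Splitting steps\<close>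

lemma iet_map_block_invariant:
  assumes wf: "iet_wf S" and tp: "iet_top S = p @ q @ s" and bt: "iet_bot S = p' @ q' @ s'"
    and sq: "set q = set q'" and sp: "lensum (iet_len S) p = lensum (iet_len S) p'"
  defines "lB \<equiv> iet_left S + lensum (iet_len S) p"
  shows "iet_map S ` {lB..<lB + lensum (iet_len S) q} = {lB..<lB + lensum (iet_len S) q}"
proof -
  define L where "L = iet_len S"
  define l where "l = iet_left S"
  have dtp: "distinct (p @ q @ s)" and dbt: "distinct (p' @ q' @ s')"
    using wf tp bt unfolding iet_wf_def by auto
  have nn: "\<forall>c\<in>set (iet_top S). L c \<ge> 0" using iet_wf_len_nonneg[OF wf] L_def by simp
  have nnb: "\<forall>c\<in>set (iet_bot S). L c \<ge> 0" using iet_wf_len_nonneg_bot[OF wf] L_def by simp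
  have sqq: "lensum L q = lensum L q'" using lensum_perm[of q q' L] dtp dbt sq by auto
  have nnq: "\<forall>c\<in>set q. L c \<ge> 0" "\<forall>c\<in>set p. L c \<ge> 0" "\<forall>c\<in>set s. L c \<ge> 0" using nn tp by auto
  have nnq': "\<forall>c\<in>set q'. L c \<ge> 0" "\<forall>c\<in>set p'. L c \<ge> 0" "\<forall>c\<in>set s'. L c \<ge> 0" using nnb bt by auto
  have topq: "c \<in> set q" if "c \<in> set (iet_top S)" "x \<in> ivl S c" "l + lensum L p \<le> x" "x < l + lensum L p + lensum L q" for c x
  proof -
    have x: "l + off_top S c \<le> x" "x < l + off_top S c + L c" using that(2) by (auto simp: ivl_def l_def L_def)
    have "c \<in> set p \<or> c \<in> set q \<or> c \<in> set s" using that(1) tp by auto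
    moreover
    { assume cp: "c \<in> set p"
      have "off_top S c + L c \<le> lensum L p" unfolding off_top_def
        using tp before_block_left[OF cp] lensum_before_add_le[OF nnq(2) cp] by (simp add: L_def)
      then have False using x that by simp }
    moreover
    { assume cs: "c \<in> set s"
      have "off_top S c \<ge> lensum L p + lensum L q" unfolding off_top_def
        using tp before_block_right[OF dtp cs] lensum_before_nonneg[OF nnq(3)] by (simp add: L_def)
      then have False using x that by simp }
    ultimately show ?thesis by blast
  qed
  have botq: "c \<in> set q" if "c \<in> set (iet_top S)" "y \<in> img_ivl S c" "l + lensum L p \<le> y" "y < l + lensum L p + lensum L q" for c y
  proof -
    have y: "l + off_bot S c \<le> y" "y < l + off_bot S c + L c" using that(2) by (auto simp: img_ivl_def l_def L_def)
    have "c \<in> set (iet_bot S)" using that(1) iet_wf_set_bot[OF wf] by simp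
    then have "c \<in> set p' \<or> c \<in> set q' \<or> c \<in> set s'" using bt by auto
    moreover
    { assume cp: "c \<in> set p'"
      have "off_bot S c + L c \<le> lensum L p'" unfolding off_bot_def
        using bt before_block_left[OF cp] lensum_before_add_le[OF nnq'(2) cp] by (simp add: L_def)
      then have False using y that sp by (simp add: L_def) }
    moreover
    { assume cs: "c \<in> set s'"
      have "off_bot S c \<ge> lensum L p' + lensum L q'" unfolding off_bot_def
        using bt before_block_right[OF dbt cs] lensum_before_nonneg[OF nnq'(3)] by (simp add: L_def)
      then have False using y that sp sqq by (simp add: L_def) }
    ultimately show ?thesis using sq by blast
  qed
  have ivq: "ivl S c \<subseteq> {l + lensum L p..<l + lensum L p + lensum L q}" if "c \<in> set q" for c
  proof -
    have "off_top S c = lensum L p + lensum L (before c q)" unfolding off_top_def using tp before_block_mid[OF dtp that] by (simp add: L_def)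
    moreover have "lensum L (before c q) + L c \<le> lensum L q" by (rule lensum_before_add_le[OF nnq(1) that])
    moreover have "lensum L (before c q) \<ge> 0" by (rule lensum_before_nonneg[OF nnq(1)])
    ultimately show ?thesis by (auto simp: ivl_def l_def L_def)
  qed
  have bivq: "img_ivl S c \<subseteq> {l + lensum L p..<l + lensum L p + lensum L q}" if "c \<in> set q" for c
  proof -
    have c': "c \<in> set q'" using that sq by simp
    have "off_bot S c = lensum L p' + lensum L (before c q')" unfolding off_bot_def using bt before_block_mid[OF dbt c'] by (simp add: L_def)
    moreover have "lensum L (before c q') + L c \<le> lensum L q'" by (rule lensum_before_add_le[OF nnq'(1) c'])
    moreover have "lensum L (before c q') \<ge> 0" by (rule lensum_before_nonneg[OF nnq'(1)])
    ultimately show ?thesis using sp sqq by (auto simp: img_ivl_def l_def L_def)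
  qed
  have right: "iet_right S = l + lensum L p + lensum L q + lensum L s" unfolding iet_right_def using tp by (simp add: l_def L_def)
  have sn: "lensum L s \<ge> 0" "lensum L p \<ge> 0" using lensum_nonneg nnq by blast+
  have J: "{lB..<lB + lensum L q} \<subseteq> iet_dom S" unfolding lB_def iet_dom_def using right sn by (auto simp: l_def L_def)
  show ?thesis unfolding L_def[symmetric]
  proof
    show "iet_map S ` {lB..<lB + lensum L q} \<subseteq> {lB..<lB + lensum L q}"
    proof
      fix y assume "y \<in> iet_map S ` {lB..<lB + lensum L q}"
      then obtain x where x: "x \<in> {lB..<lB + lensum L q}" "y = iet_map S x" by blast
      obtain c where c: "c \<in> set (iet_top S)" "x \<in> ivl S c" using dom_covered_by_ivl[OF wf] J x(1) by blast
      have cq: "c \<in> set q" using topq[OF c] x(1) by (simp add: lB_def l_def L_def)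
      show "y \<in> {lB..<lB + lensum L q}" using iet_map_ivl_in_img[OF wf c] bivq[OF cq] x(2) by (auto simp: lB_def l_def L_def)
    qed
    show "{lB..<lB + lensum L q} \<subseteq> iet_map S ` {lB..<lB + lensum L q}"
    proof
      fix y assume y: "y \<in> {lB..<lB + lensum L q}"
      obtain c where c: "c \<in> set (iet_top S)" "y \<in> img_ivl S c" using dom_covered_by_img_ivl[OF wf] J y by blast
      have cq: "c \<in> set q" using botq[OF c] y by (simp add: lB_def l_def L_def)
      have "y \<in> iet_map S ` ivl S c" using iet_map_image_ivl[OF wf c(1)] c(2) by simp
      then show "y \<in> iet_map S ` {lB..<lB + lensum L q}" using ivq[OF cq] by (auto simp: lB_def l_def L_def)
    qed
  qed
qed

lemma split_off_suffix:
  assumes wf: "iet_wf S" and tp: "iet_top S = p @ q" and bt: "iet_bot S = p' @ q'"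
    and sq: "set q = set q'" and pne: "p \<noteq> []" and qne: "q \<noteq> []"
  defines "S' \<equiv> S\<lparr>iet_top := p, iet_bot := filter (\<lambda>c. c \<notin> set q) (iet_bot S)\<rparr>"
  shows "iet_step (S, e) (S', (\<lambda>x. if x < iet_left S + lensum (iet_len S) p then e x
            else e (x + (iet_left S + lensum (iet_len S) p + lensum (iet_len S) q - (iet_left S + lensum (iet_len S) p)))))"
    and "iet_wf S'" "iet_left S' = iet_left S" "iet_right S' = iet_left S + lensum (iet_len S) p"
      "iet_top S' = p" "iet_len S' = iet_len S" "returns_within_two S S'"
      "\<forall>c\<in>set p. off_top S' c = off_top S c"
proof -
  define L where "L = iet_len S"
  have dtp: "distinct (p @ q)" and dbt: "distinct (p' @ q')" and sbt: "set (p' @ q') = set (p @ q)"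
    using wf tp bt unfolding iet_wf_def by auto
  have sp: "set p = set p'" using dtp dbt sbt sq by auto
  have slp: "lensum L p = lensum L p'" using lensum_perm[of p p' L] dtp dbt sp by auto
  have filt: "filter (\<lambda>c. c \<notin> set q) (iet_bot S) = p'"
    using bt dbt sq by (auto intro!: filter_True simp: filter_empty_conv)
  have S'f: "iet_top S' = p" "iet_bot S' = p'" "iet_len S' = L" "iet_left S' = iet_left S"
    unfolding S'_def using filt by (simp_all add: L_def)
  have inv: "iet_map S ` {iet_left S + lensum L p..<iet_left S + lensum L p + lensum L q} = {iet_left S + lensum L p..<iet_left S + lensum L p + lensum L q}"
    using iet_map_block_invariant[OF wf, of p q "[]" p' q' "[]"] tp bt sq slp by (simp add: L_def)
  show "iet_step (S, e) (S', (\<lambda>x. if x < iet_left S + lensum (iet_len S) p then e x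
            else e (x + (iet_left S + lensum (iet_len S) p + lensum (iet_len S) q - (iet_left S + lensum (iet_len S) p)))))"
    using iet_step.split_out[of S p q "[]" "iet_left S + lensum (iet_len S) p" "iet_left S + lensum (iet_len S) p + lensum (iet_len S) q" e] tp qne pne inv
    unfolding S'_def L_def by simp
  have wf': "iet_wf S'" unfolding iet_wf_def S'f using pne dtp dbt sp wf tp unfolding iet_wf_def L_def by auto
  show "iet_wf S'" by (fact wf')
  show "iet_left S' = iet_left S" "iet_top S' = p" "iet_len S' = iet_len S" using S'f by (simp_all add: L_def)
  show "iet_right S' = iet_left S + lensum (iet_len S) p" unfolding iet_right_def S'f by (simp add: L_def)
  have ot: "off_top S' c = off_top S c" if "c \<in> set p" for c
    unfolding off_top_def S'f using tp before_append_in[OF that, of q] by (simp add: L_def)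
  show "\<forall>c\<in>set p. off_top S' c = off_top S c" using ot by blast
  have ob: "off_bot S' c = off_bot S c" if "c \<in> set p" for c
  proof -
    have "c \<in> set p'" using that sp by simp
    then show ?thesis unfolding off_bot_def S'f using bt before_append_in[of c p' q'] by (simp add: L_def)
  qed
  show "returns_within_two S S'"
  proof (rule returns_within_twoI[OF wf wf', of "hd q"])
    fix c assume c: "c \<in> set (iet_top S')" "c \<noteq> hd q"
    then have cp: "c \<in> set p" using S'f by simp
    show "c \<in> set (iet_top S) \<and> ivl S' c \<subseteq> ivl S c \<and> off_bot S' c - off_top S' c = off_bot S c - off_top S c"
      using cp tp ot[OF cp] ob[OF cp] S'f by (simp add: ivl_def L_def)
  next
    assume "hd q \<in> set (iet_top S')"
    then have False using S'f dtp qne by (cases q) auto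
    then show "hd q \<in> set (iet_top S) \<and> hd q \<in> set (iet_top S) \<and> ivl S' (hd q) \<subseteq> ivl S (hd q) \<and>
      (\<forall>x\<in>ivl S' (hd q). x + off_bot S (hd q) - off_top S (hd q) \<in> ivl S (hd q) \<and> x + off_bot S (hd q) - off_top S (hd q) \<notin> iet_dom S') \<and>
      off_bot S' (hd q) - off_top S' (hd q) = off_bot S (hd q) - off_top S (hd q) + (off_bot S (hd q) - off_top S (hd q))" by blast
  qed
qed

lemma split_off_prefix:
  assumes wf: "iet_wf S" and tp: "iet_top S = p @ q" and bt: "iet_bot S = p' @ q'"
    and sp: "set p = set p'" and pne: "p \<noteq> []" and qne: "q \<noteq> []"
  defines "S' \<equiv> S\<lparr>iet_left := iet_left S + lensum (iet_len S) p, iet_top := q, iet_bot := filter (\<lambda>c. c \<in> set q) (iet_bot S)\<rparr>"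
  shows "iet_step (S, e) (S', e)"
    and "iet_wf S'" "iet_left S' = iet_left S + lensum (iet_len S) p" "iet_right S' = iet_right S"
      "iet_top S' = q" "iet_len S' = iet_len S" "returns_within_two S S'"
proof -
  define L where "L = iet_len S"
  have dtp: "distinct (p @ q)" and dbt: "distinct (p' @ q')" and sbt: "set (p' @ q') = set (p @ q)"
    using wf tp bt unfolding iet_wf_def by auto
  have sq: "set q = set q'" using dtp dbt sbt sp by auto
  have slp: "lensum L p = lensum L p'" using lensum_perm[of p p' L] dtp dbt sp by auto
  have filt: "filter (\<lambda>c. c \<in> set q) (iet_bot S) = q'"
    using bt dbt sq sp dtp by (auto intro!: filter_True simp: filter_empty_conv)
  have S'f: "iet_top S' = q" "iet_bot S' = q'" "iet_len S' = L" "iet_left S' = iet_left S + lensum L p"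
    unfolding S'_def using filt by (simp_all add: L_def)
  have inv: "iet_map S ` {iet_left S + lensum L p..<iet_left S + lensum L p + lensum L q} = {iet_left S + lensum L p..<iet_left S + lensum L p + lensum L q}"
    using iet_map_block_invariant[OF wf, of p q "[]" p' q' "[]"] tp bt sq slp by (simp add: L_def)
  show "iet_step (S, e) (S', e)"
    using iet_step.split_in[of S p q "[]" "iet_left S + lensum (iet_len S) p" "iet_left S + lensum (iet_len S) p + lensum (iet_len S) q" e] tp qne pne inv
    unfolding S'_def L_def by simp
  have wf': "iet_wf S'" unfolding iet_wf_def S'f using qne dtp dbt sq wf tp unfolding iet_wf_def L_def by auto
  show "iet_wf S'" by (fact wf')
  show "iet_left S' = iet_left S + lensum (iet_len S) p" "iet_top S' = q" "iet_len S' = iet_len S" using S'f by (simp_all add: L_def)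
  show "iet_right S' = iet_right S" unfolding iet_right_def S'f using tp by (simp add: L_def)
  have ot: "off_top S' c = off_top S c - lensum L p" if "c \<in> set q" for c
    unfolding off_top_def S'f using tp before_block_mid[of p q "[]" c] dtp that by (simp add: L_def)
  have ob: "off_bot S' c = off_bot S c - lensum L p" if "c \<in> set q" for c
  proof -
    have "c \<in> set q'" using that sq by simp
    then show ?thesis unfolding off_bot_def S'f using bt before_block_mid[of p' q' "[]" c] dbt slp by (simp add: L_def)
  qed
  show "returns_within_two S S'"
  proof (rule returns_within_twoI[OF wf wf', of "hd p"])
    fix c assume c: "c \<in> set (iet_top S')" "c \<noteq> hd p"
    then have cq: "c \<in> set q" using S'f by simp
    show "c \<in> set (iet_top S) \<and> ivl S' c \<subseteq> ivl S c \<and> off_bot S' c - off_top S' c = off_bot S c - off_top S c"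
      using cq tp ot[OF cq] ob[OF cq] S'f by (simp add: ivl_def L_def)
  next
    assume "hd p \<in> set (iet_top S')"
    then have False using S'f dtp pne by (cases p) auto
    then show "hd p \<in> set (iet_top S) \<and> hd p \<in> set (iet_top S) \<and> ivl S' (hd p) \<subseteq> ivl S (hd p) \<and>
      (\<forall>x\<in>ivl S' (hd p). x + off_bot S (hd p) - off_top S (hd p) \<in> ivl S (hd p) \<and> x + off_bot S (hd p) - off_top S (hd p) \<notin> iet_dom S') \<and>
      off_bot S' (hd p) - off_top S' (hd p) = off_bot S (hd p) - off_top S (hd p) + (off_bot S (hd p) - off_top S (hd p))" by blast
  qed
qed

section \<open>Runs of Rauzy steps\<close>

definition after :: "'a list \<Rightarrow> 'a \<Rightarrow> 'a set" where
  "after xs c = set (tl (dropWhile (\<lambda>d. d \<noteq> c) xs))"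

lemma after_Nil [simp]: "after [] c = {}"
  by (simp add: after_def)

lemma after_Cons: "after (x # xs) c = (if x = c then set xs else after xs c)"
  by (simp add: after_def)

lemma after_notin: "c \<notin> set xs \<Longrightarrow> after xs c = {}"
  by (induction xs) (auto simp: after_Cons)

lemma after_append: "after (xs @ ys) c = (if c \<in> set xs then after xs c \<union> set ys else after ys c)"
  by (induction xs) (auto simp: after_Cons)

lemma after_subset: "after xs c \<subseteq> set xs"
  by (induction xs) (auto simp: after_Cons)

lemma after_last: "distinct (ys @ [a]) \<Longrightarrow> after (ys @ [a]) a = {}"
  by (simp add: after_append after_Cons)

lemma after_snoc: "c \<in> set ys \<Longrightarrow> after (ys @ [a]) c = insert a (after ys c)"
  by (simp add: after_append)

lemma after_last_eq_empty: "distinct xs \<Longrightarrow> after xs (last xs) = {}"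
  by (cases xs rule: rev_cases) (auto simp: after_last)

lemma after_butlast: "c \<in> set (butlast xs) \<Longrightarrow> after xs c = insert (last xs) (after (butlast xs) c)"
  by (cases xs rule: rev_cases) (auto simp: after_snoc)

lemma after_ins:
  assumes d: "distinct ys" and a: "a \<notin> set ys" and b: "b \<in> set ys" and c: "c \<in> set ys"
  shows "after (ins_after a b ys) c = (if c = b \<or> b \<in> after ys c then insert a (after ys c) else after ys c)"
proof -
  obtain Y1 Y2 where Y: "ys = Y1 @ b # Y2" using split_list[OF b] by blast
  have bY: "b \<notin> set Y1" "b \<notin> set Y2" "set Y1 \<inter> set Y2 = {}" using d Y by auto
  have e: "ins_after a b (Y1 @ b # Y2) = Y1 @ b # a # Y2" using bY ins_after_split by metis
  show ?thesis unfolding Y e using bY a Y c after_subset[of Y1 c] after_subset[of Y2 c]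
    by (auto simp: after_append after_Cons)
qed

lemma after_ins_new:
  assumes d: "distinct ys" and a: "a \<notin> set ys" and b: "b \<in> set ys"
  shows "after (ins_after a b ys) a = after ys b"
proof -
  obtain Y1 Y2 where Y: "ys = Y1 @ b # Y2" using split_list[OF b] by blast
  have bY: "b \<notin> set Y1" "b \<notin> set Y2" "set Y1 \<inter> set Y2 = {}" using d Y by auto
  have e: "ins_after a b (Y1 @ b # Y2) = Y1 @ b # a # Y2" using bY ins_after_split by metis
  show ?thesis unfolding Y e using bY a Y by (auto simp: after_append after_Cons)
qed

lemma set_drop_eq_if_after_closed:
  assumes "distinct xs" "finite G" "G \<subseteq> set xs" "\<forall>c\<in>G. after xs c \<subseteq> G"
  shows "set (drop (length xs - card G) xs) = G"
  using assms
proof (induction xs)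
  case Nil then show ?case by simp
next
  case (Cons x xs)
  show ?case
  proof (cases "x \<in> G")
    case True
    then have "after (x # xs) x \<subseteq> G" using Cons.prems(4) by blast
    then have "set xs \<subseteq> G" by (simp add: after_Cons)
    then have G: "G = set (x # xs)" using Cons.prems(3) True by auto
    then have "card G = length (x # xs)" using Cons.prems(1) distinct_card by metis
    then show ?thesis using G by simp
  next
    case False
    then have G: "G \<subseteq> set xs" using Cons.prems(3) by auto
    have a: "\<forall>c\<in>G. after xs c \<subseteq> G" using Cons.prems(4) False by (auto simp: after_Cons split: if_splits)
    have IH: "set (drop (length xs - card G) xs) = G" using Cons.IH Cons.prems(1,2) G a by auto
    have "card G \<le> card (set xs)" using G by (simp add: card_mono)
    also have "\<dots> = length xs" using Cons.prems(1) distinct_card by auto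
    finally have "length (x # xs) - card G = Suc (length xs - card G)" by simp
    then show ?thesis using IH by simp
  qed
qed

lemma antimono_nat_eventually_const:
  fixes g :: "nat \<Rightarrow> nat"
  assumes mono: "\<And>n. g (Suc n) \<le> g n"
  shows "\<exists>k. \<forall>n\<ge>k. g n = g k"
proof -
  have le0: "g n \<le> g 0" for n using lift_Suc_antimono_le[of g 0 n] mono by simp
  have fin: "finite (range g)" by (rule finite_subset[of _ "{..g 0}"]) (use le0 in auto)
  have "Min (range g) \<in> range g" using Min_in[OF fin] by blast
  then obtain k where k: "g k = Min (range g)" by auto
  have "\<forall>n\<ge>k. g n = g k"
  proof (intro allI impI)
    fix n assume n: "n \<ge> k"
    have "g n \<le> g k" using lift_Suc_antimono_le[of g k n] mono n by simp
    moreover have "Min (range g) \<le> g n" using Min_le[OF fin] by blast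
    ultimately show "g n = g k" using k by simp
  qed
  then show ?thesis by blast
qed

lemma finite_uniform_lower_bound:
  assumes "finite A" "\<forall>c\<in>A. \<exists>e>0. \<forall>n. e \<le> (f n c :: real)"
  shows "\<exists>e>0. \<forall>c\<in>A. \<forall>n. e \<le> f n c"
  using assms
proof (induction A rule: finite_induct)
  case empty then show ?case by (intro exI[of _ 1]) auto
next
  case (insert x A)
  obtain e1 where e1: "e1 > 0" "\<forall>c\<in>A. \<forall>n. e1 \<le> f n c" using insert by auto
  obtain e2 where e2: "e2 > 0" "\<forall>n. e2 \<le> f n x" using insert.prems by auto
  have "\<forall>c\<in>insert x A. \<forall>n. min e1 e2 \<le> f n c"
  proof (intro ballI allI)
    fix c n assume c: "c \<in> insert x A"
    show "min e1 e2 \<le> f n c"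
    proof (cases "c = x")
      case True then show ?thesis using e2 by (metis min.coboundedI2)
    next
      case False then have "c \<in> A" using c by simp
      then show ?thesis using e1 by (metis min.coboundedI1)
    qed
  qed
  then show ?case using e1 e2 by (intro exI[of _ "min e1 e2"]) simp
qed

lemma sum_update_minus:
  assumes "finite R" "w \<in> R"
  shows "(\<Sum>c\<in>R. (if c = w then f c - (d::real) else f c)) = (\<Sum>c\<in>R. f c) - d"
proof -
  have "(\<Sum>c\<in>R. (if c = w then f c - d else f c)) = (f w - d) + (\<Sum>c\<in>R - {w}. f c)"
    using sum.remove[OF assms, of "\<lambda>c. if c = w then f c - d else f c"] by simp
  also have "\<dots> = (\<Sum>c\<in>R. f c) - d" using sum.remove[OF assms, of f] by simp
  finally show ?thesis .
qed

text \<open>The right end is trimmed towards the cut after the first \<open>i\<close> letters. A shortcut is a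
  suffix block that splits off, a tie, or a bottom winner left of the cut.\<close>

definition no_right_shortcut :: "nat \<Rightarrow> 'a iet \<Rightarrow> bool" where
  "no_right_shortcut i S \<longleftrightarrow>
     (\<forall>j. 1 \<le> j \<longrightarrow> i + j \<le> length (iet_top S) \<longrightarrow>
        set (drop (length (iet_top S) - j) (iet_top S)) \<noteq> set (drop (length (iet_top S) - j) (iet_bot S)))
   \<and> iet_len S (last (iet_top S)) \<noteq> iet_len S (last (iet_bot S))
   \<and> (iet_len S (last (iet_top S)) < iet_len S (last (iet_bot S)) \<longrightarrow>
        last (iet_bot S) \<in> set (drop i (iet_top S)))"

lemma no_right_shortcut_last_neq:
  assumes wf: "iet_wf S" and i: "i < length (iet_top S)" and ns: "no_right_shortcut i S"
  shows "last (iet_top S) \<noteq> last (iet_bot S)"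
proof
  assume eq: "last (iet_top S) = last (iet_bot S)"
  have ne: "iet_top S \<noteq> []" "iet_bot S \<noteq> []" using wf iet_wf_set_bot[OF wf] unfolding iet_wf_def by auto
  have "length (iet_bot S) = length (iet_top S)"
    using wf unfolding iet_wf_def by (metis distinct_card)
  then have "drop (length (iet_top S) - 1) (iet_top S) = [last (iet_top S)]"
    "drop (length (iet_top S) - 1) (iet_bot S) = [last (iet_bot S)]"
    using ne by (metis append_butlast_last_id append_eq_conv_conj length_butlast)+
  then show False using ns i eq unfolding no_right_shortcut_def by force
qed

text \<open>Along an infinite run of right Rauzy steps without shortcuts the loser lengths are summable, so
  eventually every loser is a letter whose length is not bounded below (a vanishing letter), while
  each vanishing letter keeps winning; this forces the vanishing letters to form a common suffix of
  both rows.\<close>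

locale right_rauzy_run =
  fixes S :: "nat \<Rightarrow> 'a iet" and i :: nat
  assumes wf: "\<And>n. iet_wf (S n)"
    and run: "\<And>n. S (Suc n) = rauzy_right (S n)"
    and long: "\<And>n. i < length (iet_top (S n))"
    and last_neq: "\<And>n. last (iet_top (S n)) \<noteq> last (iet_bot (S n))"
    and len_neq: "\<And>n. iet_len (S n) (last (iet_top (S n))) \<noteq> iet_len (S n) (last (iet_bot (S n)))"
    and bot_winner_right: "\<And>n. iet_len (S n) (last (iet_top (S n))) < iet_len (S n) (last (iet_bot (S n)))
      \<Longrightarrow> last (iet_bot (S n)) \<in> set (drop i (iet_top (S n)))"

begin

abbreviation tops :: "nat \<Rightarrow> 'a list" where "tops n \<equiv> iet_top (S n)"

abbreviation bots :: "nat \<Rightarrow> 'a list" where "bots n \<equiv> iet_bot (S n)"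

abbreviation lens :: "nat \<Rightarrow> 'a \<Rightarrow> real" where "lens n \<equiv> iet_len (S n)"

abbreviation last_top :: "nat \<Rightarrow> 'a" where "last_top n \<equiv> last (tops n)"

abbreviation last_bot :: "nat \<Rightarrow> 'a" where "last_bot n \<equiv> last (bots n)"

definition top_wins :: "nat \<Rightarrow> bool" where
  "top_wins n \<longleftrightarrow> lens n (last_bot n) < lens n (last_top n)"

definition winner :: "nat \<Rightarrow> 'a" where
  "winner n = (if top_wins n then last_top n else last_bot n)"

definition loser :: "nat \<Rightarrow> 'a" where
  "loser n = (if top_wins n then last_bot n else last_top n)"

definition letters :: "'a set" where
  "letters = set (tops 0)"

definition right_letters :: "'a set" where
  "right_letters = set (drop i (tops 0))"

definition vanishing :: "'a set" where
  "vanishing = {c \<in> letters. \<not> (\<exists>\<epsilon>>0. \<forall>n. \<epsilon> \<le> lens n c)}"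

lemma bot_wins: "\<not> top_wins n \<Longrightarrow> lens n (last_top n) < lens n (last_bot n)"
  using len_neq[of n] by (auto simp: top_wins_def)

lemma distinct_tops: "distinct (tops n)" and distinct_bots: "distinct (bots n)"
  and set_bots: "set (bots n) = set (tops n)" and tops_ne: "tops n \<noteq> []" and bots_ne: "bots n \<noteq> []"
  using wf[of n] unfolding iet_wf_def by auto

lemma top_wins_step:
  "top_wins n \<Longrightarrow> tops (Suc n) = tops n \<and> bots (Suc n) = ins_after (last_bot n) (last_top n) (butlast (bots n))"
  using rauzy_right_top_wins_lists[of "S n"] run[of n] by (simp add: top_wins_def)

lemma bot_wins_step:
  "\<not> top_wins n \<Longrightarrow> bots (Suc n) = bots n \<and> tops (Suc n) = ins_after (last_top n) (last_bot n) (butlast (tops n))"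
  using rauzy_right_bot_wins_lists[of "S n"] bot_wins[of n] run[of n] by simp

lemma lens_step: "lens (Suc n) = (lens n)(winner n := lens n (winner n) - lens n (loser n))"
  using rauzy_right_top_wins_lists[of "S n"] rauzy_right_bot_wins_lists[of "S n"] bot_wins[of n] run[of n]
  by (cases "top_wins n") (simp_all add: top_wins_def winner_def loser_def)

lemma last_bot_in_butlast_tops: "last_bot n \<in> set (butlast (tops n))"
  using last_neq[of n] distinct_butlast_last(2)[OF distinct_tops tops_ne, of n] set_bots[of n]
    last_in_set[OF bots_ne, of n] by auto

lemma last_top_in_butlast_bots: "last_top n \<in> set (butlast (bots n))"
  using last_neq[of n] distinct_butlast_last(2)[OF distinct_bots bots_ne, of n] set_bots[of n]
    last_in_set[OF tops_ne, of n] by auto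

lemma set_tops: "set (tops n) = letters"
proof (induction n)
  case 0 then show ?case by (simp add: letters_def)
next
  case (Suc n)
  note d = distinct_butlast_last[OF distinct_tops tops_ne, of n]
  have "set (tops (Suc n)) = set (tops n)"
  proof (cases "top_wins n")
    case False
    then show ?thesis
      using bot_wins_step[OF False] ins_after_distinct(2)[OF d(3) last_bot_in_butlast_tops d(1)] d(2) by simp
  qed (use top_wins_step in simp)
  then show ?case using Suc by simp
qed

lemma set_drop_tops: "set (drop i (tops n)) = right_letters"
proof (induction n)
  case 0 then show ?case by (simp add: right_letters_def)
next
  case (Suc n)
  have "set (drop i (tops (Suc n))) = set (drop i (tops n))"
  proof (cases "top_wins n")
    case False
    note d = distinct_butlast_last[OF distinct_tops tops_ne, of n]
    obtain Y1 Y2 where Y: "butlast (tops n) = Y1 @ last_bot n # Y2"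
      using split_list[OF last_bot_in_butlast_tops] by blast
    have tops: "tops n = Y1 @ last_bot n # Y2 @ [last_top n]" using d(4) Y by simp
    have "last_bot n \<notin> set Y1" "last_bot n \<notin> set Y2" using d(3) unfolding Y by auto
    then have "set (drop i (tops (Suc n))) = set (drop i (Y1 @ last_bot n # last_top n # Y2))"
      using bot_wins_step[OF False] Y ins_after_split by metis
    also have "\<dots> = set (drop i (Y1 @ last_bot n # Y2 @ [last_top n]))"
    proof (rule set_drop_ins_after)
      show "distinct (Y1 @ last_bot n # Y2 @ [last_top n])"
        using distinct_tops[of n] by (simp only: tops[symmetric])
      show "last_bot n \<in> set (drop i (Y1 @ last_bot n # Y2 @ [last_top n]))"
        using bot_winner_right bot_wins[OF False] by (simp only: tops[symmetric])
    qed
    also have "\<dots> = set (drop i (tops n))" by (simp only: tops[symmetric])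
    finally show ?thesis .
  qed (use top_wins_step in simp)
  then show ?case using Suc by simp
qed

lemma winner_right: "winner n \<in> right_letters"
proof (cases "top_wins n")
  case True
  then show ?thesis using last_in_set_drop[OF long] set_drop_tops by (simp add: winner_def)
next
  case False
  then show ?thesis using bot_winner_right bot_wins[OF False] set_drop_tops by (simp add: winner_def)
qed

lemma right_letters_subset: "right_letters \<subseteq> letters"
  using set_drop_tops[of 0] set_tops[of 0] by (auto dest: in_set_dropD)

lemma lens_pos: "c \<in> letters \<Longrightarrow> lens n c > 0"
  using wf[of n] set_tops[of n] unfolding iet_wf_def by auto

lemma loser_in_letters: "loser n \<in> letters"
  using set_tops[of n] set_bots[of n] last_in_set[OF tops_ne, of n] last_in_set[OF bots_ne, of n]
  by (simp add: loser_def)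

lemma loser_len_pos: "lens n (loser n) > 0"
  by (rule lens_pos[OF loser_in_letters])

lemma lens_antimono: "lens (Suc n) c \<le> lens n c"
  using lens_step[of n] loser_len_pos[of n] by simp

lemma sum_right_lens:
  "(\<Sum>c\<in>right_letters. lens n c) = (\<Sum>c\<in>right_letters. lens 0 c) - (\<Sum>m<n. lens m (loser m))"
proof (induction n)
  case (Suc n)
  have "finite right_letters" by (simp add: right_letters_def)
  have "(\<Sum>c\<in>right_letters. lens (Suc n) c)
      = (\<Sum>c\<in>right_letters. if c = winner n then lens n c - lens n (loser n) else lens n c)"
    using lens_step[of n] by (intro sum.cong) auto
  also have "\<dots> = (\<Sum>c\<in>right_letters. lens n c) - lens n (loser n)"
    by (rule sum_update_minus[OF \<open>finite right_letters\<close> winner_right])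
  finally show ?case using Suc by simp
qed simp

text \<open>Every step takes the loser's length away from the right letters, whose total length stays
  nonnegative; so the loser lengths are summable.\<close>

lemma loser_len_tendsto_0: "(\<lambda>n. lens n (loser n)) \<longlonglongrightarrow> 0"
proof (rule summable_LIMSEQ_zero, rule summableI_nonneg_bounded)
  show "0 \<le> lens n (loser n)" for n using loser_len_pos[of n] by simp
  have nonneg: "0 \<le> (\<Sum>c\<in>right_letters. lens n c)" for n
    using lens_pos right_letters_subset by (intro sum_nonneg) (auto intro: less_imp_le)
  show "(\<Sum>m<n. lens m (loser m)) \<le> (\<Sum>c\<in>right_letters. lens 0 c)" for n
    using sum_right_lens[of n] nonneg[of n] by simp
qed

lemma eventually_loser_vanishing: "\<exists>N. \<forall>n\<ge>N. loser n \<in> vanishing"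
proof -
  let ?K = "{c \<in> letters. c \<notin> vanishing}"
  have "finite ?K" by (simp add: letters_def)
  moreover have "\<forall>c\<in>?K. \<exists>\<epsilon>>0. \<forall>n. \<epsilon> \<le> lens n c" by (simp add: vanishing_def)
  ultimately obtain \<epsilon> where \<epsilon>: "\<epsilon> > 0" "\<forall>c\<in>?K. \<forall>n. \<epsilon> \<le> lens n c"
    using finite_uniform_lower_bound[of ?K "\<lambda>n c. lens n c"] by blast
  obtain N where N: "\<forall>n\<ge>N. lens n (loser n) < \<epsilon>"
    using order_tendstoD(2)[OF loser_len_tendsto_0 \<epsilon>(1)] unfolding eventually_sequentially by blast
  have "loser n \<in> vanishing" if "n \<ge> N" for n
  proof (rule ccontr)
    assume "loser n \<notin> vanishing"
    then have "\<epsilon> \<le> lens n (loser n)" using \<epsilon>(2) loser_in_letters by blast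
    then show False using N that by force
  qed
  then show ?thesis by blast
qed

lemma lens_const_if_never_winner:
  assumes "\<forall>n\<ge>N. winner n \<noteq> c" "n \<ge> N"
  shows "lens n c = lens N c"
  using assms(2)
proof (induction n rule: dec_induct)
  case (step m)
  then show ?case using assms(1) lens_step[of m] by auto
qed simp

lemma vanishing_wins_again:
  assumes "c \<in> vanishing" shows "\<exists>n\<ge>N. winner n = c"
proof (rule ccontr)
  assume "\<not> (\<exists>n\<ge>N. winner n = c)"
  then have const: "lens n c = lens N c" if "n \<ge> N" for n
    using lens_const_if_never_winner that by blast
  have "lens N c \<le> lens n c" for n
  proof (cases "n \<le> N")
    case True then show ?thesis using lift_Suc_antimono_le[of "\<lambda>n. lens n c" n N] lens_antimono by simp
  next
    case False then show ?thesis using const[of n] by simp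
  qed
  moreover have "lens N c > 0" using assms lens_pos by (simp add: vanishing_def)
  ultimately show False using assms by (auto simp: vanishing_def)
qed

lemma vanishing_subset_right_letters: "vanishing \<subseteq> right_letters"
  using vanishing_wins_again[of _ 0] winner_right by blast

lemma vanishing_nonempty: "vanishing \<noteq> {}"
  using eventually_loser_vanishing by blast

end

definition after_closed :: "'a set \<Rightarrow> 'a list \<Rightarrow> 'a set" where
  "after_closed G xs = {c \<in> G. after xs c \<subseteq> G}"

lemma after_closed_ins_after:
  assumes d: "distinct ys" and x: "x \<notin> set ys" "x \<in> G" and y: "y \<in> set ys"
  shows "after_closed G (ins_after x y ys) \<subseteq> after_closed G (ys @ [x])"
    and "after_closed G (ins_after x y ys) = after_closed G (ys @ [x]) \<Longrightarrow> after ys y \<subseteq> G"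
proof -
  have same: "after (ins_after x y ys) c \<subseteq> G \<longleftrightarrow> after (ys @ [x]) c \<subseteq> G" if "c \<noteq> x" for c
  proof (cases "c \<in> set ys")
    case True
    then show ?thesis using after_ins[OF d x(1) y True] after_snoc[OF True] x(2) by auto
  next
    case False
    then show ?thesis using that ins_after_distinct(2)[OF d y x(1)] by (simp add: after_notin)
  qed
  have x_closed: "x \<in> after_closed G (ys @ [x])"
    using after_last[of ys x] d x by (simp add: after_closed_def)
  show "after_closed G (ins_after x y ys) \<subseteq> after_closed G (ys @ [x])"
  proof
    fix c assume c: "c \<in> after_closed G (ins_after x y ys)"
    show "c \<in> after_closed G (ys @ [x])"
    proof (cases "c = x")
      case False then show ?thesis using c same[OF False] by (simp add: after_closed_def)
    qed (use x_closed in simp)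
  qed
  show "after ys y \<subseteq> G" if "after_closed G (ins_after x y ys) = after_closed G (ys @ [x])"
  proof -
    have "x \<in> after_closed G (ins_after x y ys)" using that x_closed by simp
    then show ?thesis using after_ins_new[OF d x(1) y] by (simp add: after_closed_def)
  qed
qed

context right_rauzy_run

begin

lemma after_closed_step:
  assumes "loser n \<in> vanishing"
  shows "after_closed vanishing (tops (Suc n)) \<subseteq> after_closed vanishing (tops n)"
    and "after_closed vanishing (bots (Suc n)) \<subseteq> after_closed vanishing (bots n)"
    and "top_wins n \<Longrightarrow> after_closed vanishing (bots (Suc n)) = after_closed vanishing (bots n) \<Longrightarrow>
           after (butlast (bots n)) (last_top n) \<subseteq> vanishing"
    and "\<not> top_wins n \<Longrightarrow> after_closed vanishing (tops (Suc n)) = after_closed vanishing (tops n) \<Longrightarrow>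
           after (butlast (tops n)) (last_bot n) \<subseteq> vanishing"
proof -
  note dt = distinct_butlast_last[OF distinct_tops tops_ne, of n]
  note db = distinct_butlast_last[OF distinct_bots bots_ne, of n]
  note top_case = after_closed_ins_after[OF db(3) db(1) _ last_top_in_butlast_bots, of vanishing, folded db(4)]
  note bot_case = after_closed_ins_after[OF dt(3) dt(1) _ last_bot_in_butlast_tops, of vanishing, folded dt(4)]
  have "after_closed vanishing (tops (Suc n)) \<subseteq> after_closed vanishing (tops n)
    \<and> after_closed vanishing (bots (Suc n)) \<subseteq> after_closed vanishing (bots n)"
  proof (cases "top_wins n")
    case True
    then show ?thesis using assms top_wins_step[OF True] top_case(1) by (simp add: loser_def)
  next
    case False
    then show ?thesis using assms bot_wins_step[OF False] bot_case(1) by (simp add: loser_def)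
  qed
  then show "after_closed vanishing (tops (Suc n)) \<subseteq> after_closed vanishing (tops n)"
    "after_closed vanishing (bots (Suc n)) \<subseteq> after_closed vanishing (bots n)" by auto
  show "top_wins n \<Longrightarrow> after_closed vanishing (bots (Suc n)) = after_closed vanishing (bots n) \<Longrightarrow>
      after (butlast (bots n)) (last_top n) \<subseteq> vanishing"
    using assms top_wins_step top_case by (simp add: loser_def)
  show "\<not> top_wins n \<Longrightarrow> after_closed vanishing (tops (Suc n)) = after_closed vanishing (tops n) \<Longrightarrow>
      after (butlast (tops n)) (last_bot n) \<subseteq> vanishing"
    using assms bot_wins_step bot_case by (simp add: loser_def)
qed

lemma after_closed_eventually_const:
  assumes N0: "\<forall>n\<ge>N0. loser n \<in> vanishing"
  obtains N where "N \<ge> N0" "\<And>n. n \<ge> N \<Longrightarrow> after_closed vanishing (tops n) = after_closed vanishing (tops N)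
      \<and> after_closed vanishing (bots n) = after_closed vanishing (bots N)"
proof -
  define Zt where "Zt n = after_closed vanishing (tops n)" for n
  define Zb where "Zb n = after_closed vanishing (bots n)" for n
  have fin: "finite (Zt n)" "finite (Zb n)" for n
    by (simp_all add: Zt_def Zb_def after_closed_def vanishing_def letters_def)
  have shrink: "Zt (Suc n) \<subseteq> Zt n" "Zb (Suc n) \<subseteq> Zb n" if "n \<ge> N0" for n
    using after_closed_step(1,2)[of n] N0 that unfolding Zt_def Zb_def by auto
  define g where "g m = card (Zt (N0 + m)) + card (Zb (N0 + m))" for m
  have "g (Suc m) \<le> g m" for m
    using shrink[of "N0 + m"] card_mono[OF fin(1)] card_mono[OF fin(2)] by (simp add: g_def add_mono)
  then obtain k where k: "\<forall>m\<ge>k. g m = g k" using antimono_nat_eventually_const by blast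
  have sub: "Zt n \<subseteq> Zt (N0 + k) \<and> Zb n \<subseteq> Zb (N0 + k)" if "n \<ge> N0 + k" for n
    using that
  proof (induction n rule: dec_induct)
    case (step m)
    have "N0 \<le> m" using step.hyps(1) by simp
    then show ?case using shrink[of m] step.IH by blast
  qed simp
  have const: "Zt n = Zt (N0 + k) \<and> Zb n = Zb (N0 + k)" if n: "n \<ge> N0 + k" for n
  proof -
    have "g (n - N0) = g k" by (rule k[rule_format]) (use n in simp)
    then have sum: "card (Zt n) + card (Zb n) = card (Zt (N0 + k)) + card (Zb (N0 + k))"
      using n by (simp add: g_def)
    have sub_t: "Zt n \<subseteq> Zt (N0 + k)" and sub_b: "Zb n \<subseteq> Zb (N0 + k)" using sub[OF n] by auto
    then have "card (Zt n) \<le> card (Zt (N0 + k))" "card (Zb n) \<le> card (Zb (N0 + k))"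
      using fin by (simp_all add: card_mono)
    then have "card (Zt n) = card (Zt (N0 + k))" "card (Zb n) = card (Zb (N0 + k))"
      using sum by linarith+
    then show ?thesis using card_subset_eq[OF fin(1) sub_t] card_subset_eq[OF fin(2) sub_b] by blast
  qed
  show ?thesis
  proof (rule that[of "N0 + k"])
    show "after_closed vanishing (tops n) = after_closed vanishing (tops (N0 + k))
      \<and> after_closed vanishing (bots n) = after_closed vanishing (bots (N0 + k))" if "n \<ge> N0 + k" for n
      using const[OF that] unfolding Zt_def Zb_def by blast
  qed simp
qed

lemma vanishing_after_closed:
  assumes N0: "\<forall>n\<ge>N0. loser n \<in> vanishing"
    and N: "\<And>n. n \<ge> N \<Longrightarrow> after_closed vanishing (tops n) = after_closed vanishing (tops N)
      \<and> after_closed vanishing (bots n) = after_closed vanishing (bots N)"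
    and "N \<ge> N0" and c: "c \<in> vanishing"
  shows "c \<in> after_closed vanishing (tops N) \<and> c \<in> after_closed vanishing (bots N)"
proof -
  obtain n where n: "n \<ge> N" "winner n = c" using vanishing_wins_again[OF c] by blast
  have lost: "loser n \<in> vanishing" using N0 n \<open>N \<ge> N0\<close> by simp
  have stable: "after_closed vanishing (tops (Suc n)) = after_closed vanishing (tops n)"
    "after_closed vanishing (bots (Suc n)) = after_closed vanishing (bots n)"
    using N[of n] N[of "Suc n"] n by auto
  have "c \<in> after_closed vanishing (tops n) \<and> c \<in> after_closed vanishing (bots n)"
  proof (cases "top_wins n")
    case True
    then have "c = last_top n" "loser n = last_bot n" using n by (simp_all add: winner_def loser_def)
    then show ?thesis
      using after_closed_step(3)[OF lost True stable(2)] after_last_eq_empty[OF distinct_tops, of n]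
        after_butlast[OF last_top_in_butlast_bots, of n] lost c
      by (simp add: after_closed_def)
  next
    case False
    then have "c = last_bot n" "loser n = last_top n" using n by (simp_all add: winner_def loser_def)
    then show ?thesis
      using after_closed_step(4)[OF lost False stable(1)] after_last_eq_empty[OF distinct_bots, of n]
        after_butlast[OF last_bot_in_butlast_tops, of n] lost c
      by (simp add: after_closed_def)
  qed
  then show ?thesis using N[OF n(1)] by simp
qed

lemma eventually_suffix_block:
  "\<exists>n j. 1 \<le> j \<and> i + j \<le> length (tops n)
     \<and> set (drop (length (tops n) - j) (tops n)) = set (drop (length (tops n) - j) (bots n))"
proof -
  obtain N0 where N0: "\<forall>n\<ge>N0. loser n \<in> vanishing" using eventually_loser_vanishing by blast
  obtain N where N: "N \<ge> N0" "\<And>n. n \<ge> N \<Longrightarrow> after_closed vanishing (tops n) = after_closed vanishing (tops N)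
      \<and> after_closed vanishing (bots n) = after_closed vanishing (bots N)"
    using after_closed_eventually_const[OF N0] by blast
  have closed: "\<forall>c\<in>vanishing. after (tops N) c \<subseteq> vanishing" "\<forall>c\<in>vanishing. after (bots N) c \<subseteq> vanishing"
    using vanishing_after_closed[OF N0 N(2) N(1)] by (auto simp: after_closed_def)
  have fin: "finite vanishing" and sub: "vanishing \<subseteq> letters" by (auto simp: vanishing_def letters_def)
  have len: "length (bots N) = length (tops N)"
    using distinct_card[OF distinct_bots] distinct_card[OF distinct_tops] set_bots by metis
  have "card vanishing \<le> card right_letters"
    using vanishing_subset_right_letters by (intro card_mono) (auto simp: right_letters_def)
  also have "card right_letters = card (set (drop i (tops N)))" using set_drop_tops[of N] by simp
  also have "\<dots> = length (tops N) - i" by (simp add: distinct_card[OF distinct_drop[OF distinct_tops]])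
  finally have "i + card vanishing \<le> length (tops N)" using long[of N] by simp
  moreover have "1 \<le> card vanishing" using vanishing_nonempty fin by (simp add: Suc_le_eq card_gt_0_iff)
  moreover have "set (drop (length (tops N) - card vanishing) (tops N)) = vanishing"
    using set_drop_eq_if_after_closed[OF distinct_tops fin _ closed(1)] sub set_tops by simp
  moreover have "set (drop (length (tops N) - card vanishing) (bots N)) = vanishing"
    using set_drop_eq_if_after_closed[OF distinct_bots fin _ closed(2)] sub set_tops set_bots len by simp
  ultimately show ?thesis by blast
qed

end

lemma no_infinite_right_run:
  assumes wf: "\<And>n. iet_wf (S n)" and run: "\<And>n. S (Suc n) = rauzy_right (S n)"
    and long: "\<And>n. i < length (iet_top (S n))" and ns: "\<And>n. no_right_shortcut i (S n)"
  shows False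
proof -
  interpret right_rauzy_run S i
    using wf run long ns no_right_shortcut_last_neq[OF wf long ns]
    by unfold_locales (auto simp: no_right_shortcut_def)
  show False using eventually_suffix_block ns by (auto simp: no_right_shortcut_def)
qed

text \<open>Mirroring reverses both rows; only the combinatorics matter here, so the left end is
  arbitrary.\<close>

definition mirror :: "'a iet \<Rightarrow> 'a iet" where
  "mirror S = \<lparr>iet_left = 0, iet_top = rev (iet_top S), iet_bot = rev (iet_bot S), iet_len = iet_len S\<rparr>"

lemma rev_ins_before: "rev (ins_before b a xs) = ins_after b a (rev xs)"
  by (induction xs) (auto simp: ins_before_def ins_after_def)

lemma rev_repl: "rev (repl a b xs) = repl a b (rev xs)"
  by (simp add: repl_def rev_map)

lemma mirror_rauzy_left:
  assumes "iet_top S \<noteq> []" "iet_bot S \<noteq> []"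
  shows "mirror (rauzy_left S) = rauzy_right (mirror S)"
proof -
  have h: "last (rev (iet_top S)) = hd (iet_top S)" "last (rev (iet_bot S)) = hd (iet_bot S)"
    using assms by (simp_all add: last_rev)
  have t: "butlast (rev (iet_top S)) = rev (tl (iet_top S))" "butlast (rev (iet_bot S)) = rev (tl (iet_bot S))"
    by (simp_all add: butlast_rev)
  show ?thesis
    unfolding mirror_def rauzy_left_def rauzy_right_def Let_def
    by (simp add: h t rev_ins_before rev_repl)
qed

lemma mirror_wf: "iet_wf S \<Longrightarrow> iet_wf (mirror S)"
  by (simp add: iet_wf_def mirror_def)

definition no_left_shortcut :: "nat \<Rightarrow> 'a iet \<Rightarrow> bool" where
  "no_left_shortcut j S \<longleftrightarrow>
     (\<forall>m. 1 \<le> m \<longrightarrow> m \<le> j \<longrightarrow> set (take m (iet_top S)) \<noteq> set (take m (iet_bot S)))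
   \<and> iet_len S (hd (iet_top S)) \<noteq> iet_len S (hd (iet_bot S))
   \<and> (iet_len S (hd (iet_top S)) < iet_len S (hd (iet_bot S)) \<longrightarrow>
        hd (iet_bot S) \<in> set (take j (iet_top S)))"

lemma no_right_shortcut_mirror:
  assumes wf: "iet_wf S" and N: "length (iet_top S) = N" and j: "j \<le> N"
    and ns: "no_left_shortcut j S"
  shows "no_right_shortcut (N - j) (mirror S)"
proof -
  have ne: "iet_top S \<noteq> []" "iet_bot S \<noteq> []" using wf unfolding iet_wf_def by auto
  have Nb: "length (iet_bot S) = N" using wf N unfolding iet_wf_def by (metis distinct_card)
  have drops: "set (drop (N - m) (rev (iet_top S))) = set (take m (iet_top S))"
    "set (drop (N - m) (rev (iet_bot S))) = set (take m (iet_bot S))" for m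
    using N Nb rev_take[of m "iet_top S"] rev_take[of m "iet_bot S"] by (metis set_rev)+
  have mirror: "iet_top (mirror S) = rev (iet_top S)" "iet_bot (mirror S) = rev (iet_bot S)"
    "iet_len (mirror S) = iet_len S" by (simp_all add: mirror_def)
  have lasts: "last (rev (iet_top S)) = hd (iet_top S)" "last (rev (iet_bot S)) = hd (iet_bot S)"
    using ne by (simp_all add: last_rev)
  show ?thesis
    unfolding no_right_shortcut_def mirror lasts length_rev N
  proof (intro conjI allI impI)
    fix m assume "1 \<le> m" "N - j + m \<le> N"
    then show "set (drop (N - m) (rev (iet_top S))) \<noteq> set (drop (N - m) (rev (iet_bot S)))"
      using ns j unfolding drops no_left_shortcut_def by auto
  next
    show "iet_len S (hd (iet_top S)) \<noteq> iet_len S (hd (iet_bot S))"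
      using ns by (simp add: no_left_shortcut_def)
  next
    assume "iet_len S (hd (iet_top S)) < iet_len S (hd (iet_bot S))"
    then show "hd (iet_bot S) \<in> set (drop (N - j) (rev (iet_top S)))"
      using ns unfolding drops no_left_shortcut_def by simp
  qed
qed

lemma no_infinite_left_run:
  assumes wf: "\<And>n. iet_wf (S n)" and run: "\<And>n. S (Suc n) = rauzy_left (S n)"
    and N: "\<And>n. length (iet_top (S n)) = N" and j: "0 < j" "j \<le> N"
    and ns: "\<And>n. no_left_shortcut j (S n)"
  shows False
proof (rule no_infinite_right_run)
  have ne: "iet_top (S n) \<noteq> []" "iet_bot (S n) \<noteq> []" for n
    using wf[of n] unfolding iet_wf_def by auto
  show "iet_wf (mirror (S n))" for n using mirror_wf[OF wf] .
  show "mirror (S (Suc n)) = rauzy_right (mirror (S n))" for n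
    unfolding run by (rule mirror_rauzy_left[OF ne])
  show "N - j < length (iet_top (mirror (S n)))" for n using N[of n] j by (simp add: mirror_def)
  show "no_right_shortcut (N - j) (mirror (S n))" for n by (rule no_right_shortcut_mirror[OF wf N j(2) ns])
qed

section \<open>Trimming an induced map to a subinterval\<close>

definition ident_on_dom :: "(real \<Rightarrow> real) \<Rightarrow> 'a iet \<Rightarrow> bool" where
  "ident_on_dom e S \<longleftrightarrow> (\<forall>x\<in>iet_dom S. e x = x)"

lemma ident_on_dom_subset: "ident_on_dom e S \<Longrightarrow> iet_dom S' \<subseteq> iet_dom S \<Longrightarrow> ident_on_dom e S'"
  by (auto simp: ident_on_dom_def)

definition endpoint :: "'a iet \<Rightarrow> nat \<Rightarrow> real" where
  "endpoint S i = iet_left S + lensum (iet_len S) (take i (iet_top S))"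

definition left_ends :: "'a iet \<Rightarrow> real set" where
  "left_ends S = (\<lambda>c. iet_left S + off_top S c) ` set (iet_top S)"

lemma endpoint_0 [simp]: "endpoint S 0 = iet_left S"
  by (simp add: endpoint_def)

lemma endpoint_length: "endpoint S (length (iet_top S)) = iet_right S"
  by (simp add: endpoint_def iet_right_def)

lemma endpoint_le_right: "iet_wf S \<Longrightarrow> endpoint S i \<le> iet_right S"
proof -
  assume wf: "iet_wf S"
  have "lensum (iet_len S) (iet_top S)
      = lensum (iet_len S) (take i (iet_top S)) + lensum (iet_len S) (drop i (iet_top S))"
    by (metis append_take_drop_id map_append sum_list_append)
  moreover have "lensum (iet_len S) (drop i (iet_top S)) \<ge> 0"
    using iet_wf_len_nonneg[OF wf] by (intro lensum_nonneg) (auto dest: in_set_dropD)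
  ultimately show ?thesis by (simp add: endpoint_def iet_right_def)
qed

lemma left_endsI: "c \<in> set (iet_top S) \<Longrightarrow> iet_left S + off_top S c \<in> left_ends S"
  by (auto simp: left_ends_def)

lemma left_ends_ge: "iet_wf S \<Longrightarrow> u \<in> left_ends S \<Longrightarrow> iet_left S \<le> u"
  using lensum_before_nonneg[OF iet_wf_len_nonneg] by (auto simp: left_ends_def off_top_def)

lemma left_ends_eq_endpoint:
  assumes "u \<in> left_ends S" shows "\<exists>i<length (iet_top S). u = endpoint S i"
proof -
  obtain c where c: "c \<in> set (iet_top S)" "u = iet_left S + off_top S c"
    using assms by (auto simp: left_ends_def)
  have "before c (iet_top S) = take (length (before c (iet_top S))) (iet_top S)"
    by (rule takeWhile_eq_take)
  moreover have "length (before c (iet_top S)) < length (iet_top S)"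
  proof -
    obtain ys zs where "iet_top S = ys @ c # zs" "c \<notin> set ys" using split_list_first[OF c(1)] by blast
    then show ?thesis using before_append_Cons[of c ys zs] by simp
  qed
  ultimately show ?thesis using c(2) unfolding off_top_def endpoint_def by metis
qed

lemma left_end_below_endpoint:
  assumes wf: "iet_wf S" and u: "u \<in> left_ends S" "u < endpoint S i"
  obtains c where "c \<in> set (take i (iet_top S))" "u = iet_left S + off_top S c"
proof -
  obtain c where c: "c \<in> set (iet_top S)" "u = iet_left S + off_top S c"
    using u(1) by (auto simp: left_ends_def)
  have "c \<in> set (take i (iet_top S))"
  proof (rule ccontr)
    assume "c \<notin> set (take i (iet_top S))"
    then have "before c (iet_top S) = take i (iet_top S) @ before c (drop i (iet_top S))"
      using before_append_notin[of c "take i (iet_top S)" "drop i (iet_top S)"] by simp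
    moreover have "lensum (iet_len S) (before c (drop i (iet_top S))) \<ge> 0"
      using iet_wf_len_nonneg[OF wf] by (intro lensum_before_nonneg) (auto dest: in_set_dropD)
    ultimately show False using u(2) c(2) by (simp add: off_top_def endpoint_def)
  qed
  then show ?thesis using c(2) that by blast
qed

lemma left_ends_keep:
  assumes "c \<in> set (iet_top S')" "iet_left S' + off_top S' c = iet_left S + off_top S c"
  shows "iet_left S + off_top S c \<in> left_ends S'"
  using left_endsI[OF assms(1)] assms(2) by simp

definition right_trim_state :: "'a iet \<Rightarrow> (real \<Rightarrow> real) \<Rightarrow> real \<Rightarrow> nat \<Rightarrow> 'a iet \<Rightarrow> bool" where
  "right_trim_state T e u i X \<longleftrightarrow> induced T X \<and> ident_on_dom e X \<and> i \<le> length (iet_top X)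
     \<and> u \<in> left_ends X \<and> u < endpoint X i"

lemma right_trim_stateD:
  assumes "right_trim_state T e u i X"
  shows "induced T X" "iet_wf X" "ident_on_dom e X" "u \<in> left_ends X" "u < endpoint X i" "0 < i"
proof -
  show I: "induced T X" "ident_on_dom e X" "u \<in> left_ends X" "u < endpoint X i"
    using assms by (simp_all add: right_trim_state_def)
  show wf: "iet_wf X" using I by (simp add: induced_def)
  show "0 < i" using left_ends_ge[OF wf I(3)] I(4) by (cases i) auto
qed

lemma right_trim_state_rauzy:
  assumes st: "right_trim_state T e u i X" and ab: "last (iet_top X) \<noteq> last (iet_bot X)"
    and "i' \<le> length (iet_top (rauzy_right X))" "endpoint (rauzy_right X) i' = endpoint X i"
    and "u \<in> left_ends (rauzy_right X)"
  shows "right_trim_state T e u i' (rauzy_right X)"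
  using assms right_trim_stateD[OF st] induced_rauzy_right[of T X] ident_on_dom_subset
  by (auto simp: right_trim_state_def)

lemma right_trim_top_wins:
  assumes st: "right_trim_state T e u i X" and i: "i < length (iet_top X)"
    and ab: "last (iet_top X) \<noteq> last (iet_bot X)"
    and lt: "iet_len X (last (iet_bot X)) < iet_len X (last (iet_top X))"
  shows "right_trim_state T e u i (rauzy_right X)" "length (iet_top (rauzy_right X)) = length (iet_top X)"
    "iet_left (rauzy_right X) = iet_left X" "endpoint (rauzy_right X) i = endpoint X i"
proof -
  note X = right_trim_stateD[OF st]
  note r = rauzy_right_top_wins[OF X(2) ab lt]
  have "last (iet_top X) \<notin> set (take i (iet_top X))"
    using last_notin_set_take[OF _ i] X(2) by (simp add: iet_wf_def)
  then show cut: "endpoint (rauzy_right X) i = endpoint X i"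
    using r lensum_upd_notin by (simp add: endpoint_def)
  obtain c where "c \<in> set (take i (iet_top X))" "u = iet_left X + off_top X c"
    using left_end_below_endpoint[OF X(2,4,5)] .
  then have "u \<in> left_ends (rauzy_right X)" using r left_ends_keep[of c] by (auto dest: in_set_takeD)
  then show "right_trim_state T e u i (rauzy_right X)"
    using right_trim_state_rauzy[OF st ab _ cut] i r by simp
  show "length (iet_top (rauzy_right X)) = length (iet_top X)" "iet_left (rauzy_right X) = iet_left X"
    using r by simp_all
qed

text \<open>When the bottom row wins, the last top letter moves right behind the last bottom letter; the
  cut moves one letter to the right exactly when that letter lies left of it.\<close>

lemma right_trim_bot_wins:
  assumes st: "right_trim_state T e u i X" and i: "i < length (iet_top X)"
    and ab: "last (iet_top X) \<noteq> last (iet_bot X)"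
    and lt: "iet_len X (last (iet_top X)) < iet_len X (last (iet_bot X))"
  shows "length (iet_top (rauzy_right X)) = length (iet_top X)" "iet_left (rauzy_right X) = iet_left X"
    and "last (iet_bot X) \<in> set (drop i (iet_top X)) \<Longrightarrow>
      right_trim_state T e u i (rauzy_right X) \<and> endpoint (rauzy_right X) i = endpoint X i"
    and "last (iet_bot X) \<notin> set (drop i (iet_top X)) \<Longrightarrow>
      right_trim_state T e u (Suc i) (rauzy_right X) \<and> endpoint (rauzy_right X) (Suc i) = endpoint X i"
proof -
  note X = right_trim_stateD[OF st]
  note r = rauzy_right_bot_wins[OF X(2) ab lt]
  define a where "a = last (iet_top X)"
  define b where "b = last (iet_bot X)"
  define L where "L = iet_len X"
  have l1: "iet_left (rauzy_right X) = iet_left X" and len1: "iet_len (rauzy_right X) = L(b := L b - L a)"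
    and ot1: "\<forall>c\<in>set (iet_top X). c \<noteq> a \<longrightarrow> off_top (rauzy_right X) c = off_top X c"
    using r unfolding a_def b_def L_def by blast+
  obtain A1 A2 where top: "iet_top X = A1 @ b # A2 @ [a]" and top1: "iet_top (rauzy_right X) = A1 @ b # a # A2"
    using r unfolding a_def b_def by blast
  have dist: "distinct (A1 @ b # A2 @ [a])" using X(2) top by (simp add: iet_wf_def)
  then have b: "b \<notin> set A1" "b \<notin> set A2" "a \<noteq> b" by auto
  show "length (iet_top (rauzy_right X)) = length (iet_top X)" "iet_left (rauzy_right X) = iet_left X"
    using top top1 l1 by simp_all
  obtain c where c: "c \<in> set (take i (iet_top X))" "u = iet_left X + off_top X c"
    using left_end_below_endpoint[OF X(2,4,5)] .
  have "c \<noteq> a" using c(1) last_notin_set_take[OF _ i] X(2) unfolding a_def iet_wf_def by auto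
  moreover have "c \<in> set (iet_top X)" using c(1) by (rule in_set_takeD)
  ultimately have u: "u \<in> left_ends (rauzy_right X)"
    using left_ends_keep[of c "rauzy_right X" X] ot1 l1 c(2) top top1 by auto
  show "right_trim_state T e u i (rauzy_right X) \<and> endpoint (rauzy_right X) i = endpoint X i"
    if "b \<in> set (drop i (iet_top X))" unfolding b_def[symmetric]
  proof -
    have "i \<le> length A1"
    proof (rule ccontr)
      assume "\<not> i \<le> length A1"
      then have "length A1 < i" by simp
      then obtain k where "i = Suc (length A1 + k)" using less_imp_Suc_add by blast
      then have "b \<in> set (take i (iet_top X))" using top by simp
      moreover have "set (take i (iet_top X)) \<inter> set (drop i (iet_top X)) = {}"
        using dist top by (intro set_take_disj_set_drop_if_distinct) simp_all
      ultimately show False using that by blast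
    qed
    then have "take i (iet_top X) = take i A1" "take i (iet_top (rauzy_right X)) = take i A1"
      using top top1 by simp_all
    moreover have "lensum (L(b := L b - L a)) (take i A1) = lensum L (take i A1)"
      using b(1) by (intro lensum_upd_notin) (auto dest: in_set_takeD)
    ultimately have cut: "endpoint (rauzy_right X) i = endpoint X i"
      using l1 len1 by (simp add: endpoint_def L_def)
    then show ?thesis using right_trim_state_rauzy[OF st ab _ cut u] i top top1 by simp
  qed
  show "right_trim_state T e u (Suc i) (rauzy_right X) \<and> endpoint (rauzy_right X) (Suc i) = endpoint X i"
    if "b \<notin> set (drop i (iet_top X))" unfolding b_def[symmetric]
  proof -
    have "length A1 < i" using that top by (cases "length A1 < i") auto
    then obtain k where k: "i = Suc (length A1 + k)" using less_imp_Suc_add by blast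
    have "k \<le> length A2" using i top k by simp
    then have "take i (iet_top X) = A1 @ b # take k A2"
      "take (Suc i) (iet_top (rauzy_right X)) = A1 @ b # a # take k A2" using top top1 k by simp_all
    moreover have "lensum (L(b := L b - L a)) A1 = lensum L A1"
      "lensum (L(b := L b - L a)) (take k A2) = lensum L (take k A2)"
      using b by (auto intro: lensum_upd_notin dest: in_set_takeD)
    ultimately have cut: "endpoint (rauzy_right X) (Suc i) = endpoint X i"
      using l1 len1 b(3) by (simp add: endpoint_def L_def)
    then show ?thesis using right_trim_state_rauzy[OF st ab _ cut u] i top top1 by simp
  qed
qed

lemma right_trim_tie:
  assumes st: "right_trim_state T e u i X" and i: "i < length (iet_top X)"
    and ab: "last (iet_top X) \<noteq> last (iet_bot X)"
    and eq: "iet_len X (last (iet_top X)) = iet_len X (last (iet_bot X))"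
  shows "right_trim_state T e u i (rauzy_right X)"
    "length (iet_top (rauzy_right X)) = length (iet_top X) - 1"
    "iet_left (rauzy_right X) = iet_left X" "endpoint (rauzy_right X) i = endpoint X i"
proof -
  note X = right_trim_stateD[OF st]
  note r = rauzy_right_tie[OF X(2) ab eq]
  have tk: "take i (iet_top (rauzy_right X)) = take i (iet_top X)" using i r by (simp add: take_butlast)
  then show cut: "endpoint (rauzy_right X) i = endpoint X i" using r by (simp add: endpoint_def)
  obtain c where c: "c \<in> set (take i (iet_top X))" "u = iet_left X + off_top X c"
    using left_end_below_endpoint[OF X(2,4,5)] .
  then have "c \<in> set (iet_top (rauzy_right X))" using tk by (metis in_set_takeD)
  then have "u \<in> left_ends (rauzy_right X)" using r c(2) left_ends_keep[of c "rauzy_right X" X] by simp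
  then show "right_trim_state T e u i (rauzy_right X)"
    using right_trim_state_rauzy[OF st ab _ cut] i r by simp
  show "length (iet_top (rauzy_right X)) = length (iet_top X) - 1" "iet_left (rauzy_right X) = iet_left X"
    using r by simp_all
qed

lemma right_trim_split:
  assumes st: "right_trim_state T e u i X" and j: "1 \<le> j" "i + j \<le> length (iet_top X)"
    and blk: "set (drop (length (iet_top X) - j) (iet_top X)) = set (drop (length (iet_top X) - j) (iet_bot X))"
  obtains X1 e1 where "iet_step (X, e) (X1, e1)" "right_trim_state T e1 u i X1"
    "length (iet_top X1) = length (iet_top X) - j" "iet_left X1 = iet_left X" "endpoint X1 i = endpoint X i"
proof -
  note X = right_trim_stateD[OF st]
  define N where "N = length (iet_top X)"
  define p where "p = take (N - j) (iet_top X)"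
  define q where "q = drop (N - j) (iet_top X)"
  have top: "iet_top X = p @ q" and bot: "iet_bot X = take (N - j) (iet_bot X) @ drop (N - j) (iet_bot X)"
    by (simp_all add: p_def q_def)
  have sq: "set q = set (drop (N - j) (iet_bot X))" using blk by (simp add: q_def N_def)
  have "length p > 0" "length q > 0" using j X(6) by (simp_all add: p_def q_def N_def)
  then have pq: "p \<noteq> []" "q \<noteq> []" by auto
  define X1 where "X1 = X\<lparr>iet_top := p, iet_bot := filter (\<lambda>c. c \<notin> set q) (iet_bot X)\<rparr>"
  define lp where "lp = iet_left X + lensum (iet_len X) p"
  define e1 where "e1 = (\<lambda>x. if x < lp then e x else e (x + (lp + lensum (iet_len X) q - lp)))"
  note sp = split_off_suffix[OF X(2) top bot sq pq, folded X1_def]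
  have step: "iet_step (X, e) (X1, e1)" using sp(1)[of e] unfolding e1_def lp_def .
  have "iet_right X1 = endpoint X (N - j)" using sp by (simp add: endpoint_def p_def)
  then have sub: "iet_dom X1 \<subseteq> iet_dom X"
    using sp endpoint_le_right[OF X(2), of "N - j"] by (intro iet_dom_subset) auto
  have "ident_on_dom e1 X1"
    using X(3) sub sp by (auto simp: ident_on_dom_def iet_dom_def e1_def lp_def)
  moreover have "induced T X1" by (rule induced_trans[OF X(1)]) (use sp sub in auto)
  moreover have "i \<le> N - j" using j by (simp add: N_def)
  then have tk: "take i p = take i (iet_top X)" by (simp add: p_def min_def)
  then have cut: "endpoint X1 i = endpoint X i" using sp by (simp add: endpoint_def)
  moreover obtain c where c: "c \<in> set (take i (iet_top X))" "u = iet_left X + off_top X c"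
    using left_end_below_endpoint[OF X(2,4,5)] .
  then have "c \<in> set p" using tk by (metis in_set_takeD)
  then have "u \<in> left_ends X1" using sp c(2) left_ends_keep[of c X1 X] by simp
  moreover have "i \<le> length p" "length p = N - j" using j by (simp_all add: p_def N_def)
  ultimately show ?thesis
    using that[OF step] X(5) sp by (simp add: right_trim_state_def N_def)
qed

lemma suffix_block_if_last_eq:
  assumes "iet_wf X" "last (iet_top X) = last (iet_bot X)"
  shows "set (drop (length (iet_top X) - 1) (iet_top X)) = set (drop (length (iet_top X) - 1) (iet_bot X))"
proof -
  have ne: "iet_top X \<noteq> []" "iet_bot X \<noteq> []" using assms(1) unfolding iet_wf_def by auto
  have "length (iet_bot X) = length (iet_top X)" using assms(1) unfolding iet_wf_def by (metis distinct_card)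
  moreover have "drop (length xs - 1) xs = [last xs]" if "xs \<noteq> []" for xs :: "'a list"
    using that by (cases xs rule: rev_cases) auto
  ultimately show ?thesis using ne assms(2) by metis
qed

lemma right_trim_rauzy:
  assumes st: "right_trim_state T e u i X" and i: "i < length (iet_top X)" and ns: "no_right_shortcut i X"
  shows "iet_step (X, e) (rauzy_right X, e)" "right_trim_state T e u i (rauzy_right X)"
    "length (iet_top (rauzy_right X)) = length (iet_top X)"
    "iet_left (rauzy_right X) = iet_left X" "endpoint (rauzy_right X) i = endpoint X i"
proof -
  note X = right_trim_stateD[OF st]
  have ab: "last (iet_top X) \<noteq> last (iet_bot X)" by (rule no_right_shortcut_last_neq[OF X(2) i ns])
  then show "iet_step (X, e) (rauzy_right X, e)" by (rule iet_step.right)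
  have "iet_len X (last (iet_bot X)) < iet_len X (last (iet_top X))
    \<or> iet_len X (last (iet_top X)) < iet_len X (last (iet_bot X)) \<and> last (iet_bot X) \<in> set (drop i (iet_top X))"
    using ns unfolding no_right_shortcut_def by auto
  then show "right_trim_state T e u i (rauzy_right X)" "length (iet_top (rauzy_right X)) = length (iet_top X)"
    "iet_left (rauzy_right X) = iet_left X" "endpoint (rauzy_right X) i = endpoint X i"
    using right_trim_top_wins[OF st i ab] right_trim_bot_wins[OF st i ab] by blast+
qed

lemma right_trim_shortcut:
  assumes st: "right_trim_state T e u i X" and i: "i < length (iet_top X)"
    and "\<not> no_right_shortcut i X"
  shows "\<exists>X1 e1 i1. iet_step (X, e) (X1, e1) \<and> right_trim_state T e1 u i1 X1
    \<and> iet_left X1 = iet_left X \<and> endpoint X1 i1 = endpoint X i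
    \<and> 2 * length (iet_top X1) - i1 < 2 * length (iet_top X) - i"
proof -
  note X = right_trim_stateD[OF st]
  have split: ?thesis if j: "1 \<le> j" "i + j \<le> length (iet_top X)"
    "set (drop (length (iet_top X) - j) (iet_top X)) = set (drop (length (iet_top X) - j) (iet_bot X))" for j
  proof -
    obtain X1 e1 where X1: "iet_step (X, e) (X1, e1)" "right_trim_state T e1 u i X1"
      "length (iet_top X1) = length (iet_top X) - j" "iet_left X1 = iet_left X" "endpoint X1 i = endpoint X i"
      using right_trim_split[OF st j] .
    have "2 * length (iet_top X1) - i < 2 * length (iet_top X) - i" using X1(3) j by simp
    then show ?thesis using X1 by blast
  qed
  consider (block) j where "1 \<le> j" "i + j \<le> length (iet_top X)"
      "set (drop (length (iet_top X) - j) (iet_top X)) = set (drop (length (iet_top X) - j) (iet_bot X))"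
    | (tie) "iet_len X (last (iet_top X)) = iet_len X (last (iet_bot X))"
    | (outside) "iet_len X (last (iet_top X)) < iet_len X (last (iet_bot X))"
        "last (iet_bot X) \<notin> set (drop i (iet_top X))"
    using assms(3) unfolding no_right_shortcut_def by blast
  then show ?thesis
  proof cases
    case block
    then show ?thesis by (rule split)
  next
    case tie
    show ?thesis
    proof (cases "last (iet_top X) = last (iet_bot X)")
      case True
      then show ?thesis using split[of 1] i suffix_block_if_last_eq[OF X(2)] by simp
    next
      case False
      note r = right_trim_tie[OF st i False tie]
      have "2 * length (iet_top (rauzy_right X)) - i < 2 * length (iet_top X) - i" using r(2) i by simp
      then show ?thesis using iet_step.right[OF False] r by blast
    qed
  next
    case outside
    then have ab: "last (iet_top X) \<noteq> last (iet_bot X)" by auto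
    note r = right_trim_bot_wins[OF st i ab outside(1)]
    have "2 * length (iet_top (rauzy_right X)) - Suc i < 2 * length (iet_top X) - i" using r(1) i by simp
    then show ?thesis using iet_step.right[OF ab] r(1,2) r(4)[OF outside(2)] by blast
  qed
qed

definition right_trimmable :: "'a iet \<Rightarrow> real \<Rightarrow> 'a iet \<Rightarrow> (real \<Rightarrow> real) \<Rightarrow> nat \<Rightarrow> bool" where
  "right_trimmable T u S e i \<longleftrightarrow> (\<exists>S' e'. iet_step\<^sup>*\<^sup>* (S, e) (S', e') \<and> induced T S' \<and> ident_on_dom e' S'
      \<and> iet_left S' = iet_left S \<and> iet_right S' = endpoint S i \<and> u \<in> left_ends S')"

lemma right_trimmable_steps:
  assumes "iet_step\<^sup>*\<^sup>* (S, e) (X, e')" "right_trimmable T u X e' i'"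
    "iet_left X = iet_left S" "endpoint X i' = endpoint S i"
  shows "right_trimmable T u S e i"
  using assms unfolding right_trimmable_def by (metis (no_types, lifting) rtranclp_trans)

text \<open>Induction on \<open>2 * length (iet_top S) - i\<close>: a shortcut (splitting, a tie, or a bottom
  winner left of the cut) lowers it, and without shortcuts forever the run of right Rauzy steps
  contradicts \<open>no_infinite_right_run\<close>.\<close>

lemma right_trim:
  assumes "right_trim_state T e u i S"
  shows "right_trimmable T u S e i"
  using assms
proof (induction "2 * length (iet_top S) - i" arbitrary: S e i rule: less_induct)
  case less
  show ?case
  proof (cases "i = length (iet_top S)")
    case True
    then show ?thesis using less.prems endpoint_length[of S] unfolding right_trimmable_def
      by (intro exI[of _ S] exI[of _ e]) (simp add: right_trim_state_def)
  next
    case False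
    then have i: "i < length (iet_top S)" using less.prems by (simp add: right_trim_state_def)
    define good where "good X \<longleftrightarrow> right_trim_state T e u i X \<and> length (iet_top X) = length (iet_top S)
      \<and> iet_left X = iet_left S \<and> endpoint X i = endpoint S i \<and> iet_step\<^sup>*\<^sup>* (S, e) (X, e)" for X
    show ?thesis
    proof (rule ccontr)
      assume stuck: "\<not> right_trimmable T u S e i"
      have no_shortcut: "no_right_shortcut i X" if X: "good X" for X
      proof (rule ccontr)
        assume "\<not> no_right_shortcut i X"
        then obtain X1 e1 i1 where X1: "iet_step (X, e) (X1, e1)" "right_trim_state T e1 u i1 X1"
          "iet_left X1 = iet_left X" "endpoint X1 i1 = endpoint X i"
          "2 * length (iet_top X1) - i1 < 2 * length (iet_top X) - i"
          using right_trim_shortcut[of T e u i X] X i by (auto simp: good_def)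
        then have "right_trimmable T u X1 e1 i1" using less.hyps X by (auto simp: good_def)
        moreover have "iet_step\<^sup>*\<^sup>* (S, e) (X1, e1)" using X X1(1) by (auto simp: good_def)
        ultimately have "right_trimmable T u S e i"
          using right_trimmable_steps X X1(3,4) by (auto simp: good_def)
        then show False using stuck by simp
      qed
      have good_run: "good ((rauzy_right ^^ n) S)" for n
      proof (induction n)
        case 0 then show ?case using less.prems by (simp add: good_def)
      next
        case (Suc n)
        then show ?case
          using right_trim_rauzy[of T e u i "(rauzy_right ^^ n) S"] no_shortcut[OF Suc] i
          by (auto simp: good_def)
      qed
      show False
      proof (rule no_infinite_right_run)
        show "iet_wf ((rauzy_right ^^ n) S)" for n
          using good_run[of n] by (simp add: good_def right_trim_state_def induced_def)
        show "(rauzy_right ^^ Suc n) S = rauzy_right ((rauzy_right ^^ n) S)" for n by simp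
        show "i < length (iet_top ((rauzy_right ^^ n) S))" for n using good_run[of n] i by (simp add: good_def)
        show "no_right_shortcut i ((rauzy_right ^^ n) S)" for n by (rule no_shortcut[OF good_run])
      qed
    qed
  qed
qed

definition left_trim_state :: "'a iet \<Rightarrow> (real \<Rightarrow> real) \<Rightarrow> nat \<Rightarrow> 'a iet \<Rightarrow> bool" where
  "left_trim_state T e j X \<longleftrightarrow> induced T X \<and> ident_on_dom e X \<and> j < length (iet_top X)"

lemma left_trim_stateD:
  assumes "left_trim_state T e j X"
  shows "induced T X" "iet_wf X" "ident_on_dom e X" "j < length (iet_top X)"
  using assms by (simp_all add: left_trim_state_def induced_def)

lemma left_trim_state_rauzy:
  assumes "left_trim_state T e j X" "hd (iet_top X) \<noteq> hd (iet_bot X)" "j' < length (iet_top (rauzy_left X))"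
  shows "left_trim_state T e j' (rauzy_left X)"
  using assms induced_rauzy_left[of T X] ident_on_dom_subset by (auto simp: left_trim_state_def)

lemma left_trim_top_wins:
  assumes st: "left_trim_state T e j X" and j: "0 < j"
    and ab: "hd (iet_top X) \<noteq> hd (iet_bot X)"
    and lt: "iet_len X (hd (iet_bot X)) < iet_len X (hd (iet_top X))"
  shows "left_trim_state T e j (rauzy_left X)" "length (iet_top (rauzy_left X)) = length (iet_top X)"
    "iet_right (rauzy_left X) = iet_right X" "endpoint (rauzy_left X) j = endpoint X j"
proof -
  note X = left_trim_stateD[OF st]
  note r = rauzy_left_top_wins[OF X(2) ab lt]
  define a where "a = hd (iet_top X)"
  obtain k where k: "j = Suc k" using j by (cases j) auto
  have top: "iet_top X = a # tl (iet_top X)" using X(4) by (cases "iet_top X") (auto simp: a_def)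
  then have "a \<notin> set (tl (iet_top X))" using X(2) unfolding iet_wf_def by (metis distinct.simps(2))
  then have "lensum ((iet_len X)(a := v)) (take k (tl (iet_top X))) = lensum (iet_len X) (take k (tl (iet_top X)))"
    for v by (intro lensum_upd_notin) (auto dest: in_set_takeD)
  moreover have "take j (iet_top X) = a # take k (tl (iet_top X))" using k by (subst top) simp
  ultimately show "endpoint (rauzy_left X) j = endpoint X j"
    using r by (simp add: endpoint_def a_def)
  show "left_trim_state T e j (rauzy_left X)" using left_trim_state_rauzy[OF st ab] X(4) r by simp
  show "length (iet_top (rauzy_left X)) = length (iet_top X)" "iet_right (rauzy_left X) = iet_right X"
    using r by simp_all
qed

lemma left_trim_bot_wins:
  assumes st: "left_trim_state T e j X" and j: "0 < j"
    and ab: "hd (iet_top X) \<noteq> hd (iet_bot X)"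
    and lt: "iet_len X (hd (iet_top X)) < iet_len X (hd (iet_bot X))"
  shows "length (iet_top (rauzy_left X)) = length (iet_top X)" "iet_right (rauzy_left X) = iet_right X"
    and "hd (iet_bot X) \<in> set (take j (iet_top X)) \<Longrightarrow>
      left_trim_state T e j (rauzy_left X) \<and> endpoint (rauzy_left X) j = endpoint X j"
    and "hd (iet_bot X) \<notin> set (take j (iet_top X)) \<Longrightarrow>
      left_trim_state T e (j - 1) (rauzy_left X) \<and> endpoint (rauzy_left X) (j - 1) = endpoint X j"
proof -
  note X = left_trim_stateD[OF st]
  note r = rauzy_left_bot_wins[OF X(2) ab lt]
  define a where "a = hd (iet_top X)"
  define b where "b = hd (iet_bot X)"
  define L where "L = iet_len X"
  have l1: "iet_left (rauzy_left X) = iet_left X + L a" and r1: "iet_right (rauzy_left X) = iet_right X"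
    and len1: "iet_len (rauzy_left X) = L(b := L b - L a)"
    using r unfolding a_def b_def L_def by blast+
  obtain A1 A2 where top: "iet_top X = a # A1 @ b # A2" and top1: "iet_top (rauzy_left X) = A1 @ a # b # A2"
    using r unfolding a_def b_def by blast
  have dist: "distinct (a # A1 @ b # A2)" using X(2) top by (simp add: iet_wf_def)
  then have b: "b \<notin> set A1" "b \<notin> set A2" "a \<noteq> b" by auto
  have len: "length (iet_top (rauzy_left X)) = length (iet_top X)" using top top1 by simp
  then show "length (iet_top (rauzy_left X)) = length (iet_top X)" "iet_right (rauzy_left X) = iet_right X"
    using r1 by simp_all
  obtain k where k: "j = Suc k" using j by (cases j) auto
  show "left_trim_state T e j (rauzy_left X) \<and> endpoint (rauzy_left X) j = endpoint X j"
    if "b \<in> set (take j (iet_top X))" unfolding b_def[symmetric]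
  proof -
    have "length A1 < k"
    proof (rule ccontr)
      assume "\<not> length A1 < k"
      then have "take j (iet_top X) = a # take k A1" using top k by simp
      then show False using that b(1,3) by (auto dest: in_set_takeD)
    qed
    then obtain k' where k': "k = Suc (length A1 + k')" using less_imp_Suc_add by blast
    then have "take j (iet_top X) = a # A1 @ b # take k' A2"
      "take j (iet_top (rauzy_left X)) = A1 @ a # b # take k' A2" using top top1 k by simp_all
    moreover have "lensum (L(b := L b - L a)) A1 = lensum L A1"
      "lensum (L(b := L b - L a)) (take k' A2) = lensum L (take k' A2)"
      using b by (auto intro: lensum_upd_notin dest: in_set_takeD)
    ultimately have "endpoint (rauzy_left X) j = endpoint X j"
      using l1 len1 b(3) by (simp add: endpoint_def L_def)
    then show ?thesis using left_trim_state_rauzy[OF st ab] X(4) len by simp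
  qed
  show "left_trim_state T e (j - 1) (rauzy_left X) \<and> endpoint (rauzy_left X) (j - 1) = endpoint X j"
    if "b \<notin> set (take j (iet_top X))" unfolding b_def[symmetric]
  proof -
    have "k \<le> length A1"
    proof (rule ccontr)
      assume "\<not> k \<le> length A1"
      then obtain k' where "k = Suc (length A1 + k')" using less_imp_Suc_add not_le by blast
      then show False using that top k by simp
    qed
    then have "take j (iet_top X) = a # take k A1" "take (j - 1) (iet_top (rauzy_left X)) = take k A1"
      using top top1 k by simp_all
    moreover have "lensum (L(b := L b - L a)) (take k A1) = lensum L (take k A1)"
      using b(1) by (intro lensum_upd_notin) (auto dest: in_set_takeD)
    ultimately have "endpoint (rauzy_left X) (j - 1) = endpoint X j"
      using l1 len1 by (simp add: endpoint_def L_def)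
    then show ?thesis using left_trim_state_rauzy[OF st ab] X(4) len by simp
  qed
qed

lemma left_trim_tie:
  assumes st: "left_trim_state T e j X" and j: "0 < j"
    and ab: "hd (iet_top X) \<noteq> hd (iet_bot X)"
    and eq: "iet_len X (hd (iet_top X)) = iet_len X (hd (iet_bot X))"
  shows "left_trim_state T e (j - 1) (rauzy_left X)"
    "length (iet_top (rauzy_left X)) = length (iet_top X) - 1"
    "iet_right (rauzy_left X) = iet_right X" "endpoint (rauzy_left X) (j - 1) = endpoint X j"
proof -
  note X = left_trim_stateD[OF st]
  note r = rauzy_left_tie[OF X(2) ab eq]
  obtain k where k: "j = Suc k" using j by (cases j) auto
  have top: "iet_top X = hd (iet_top X) # tl (iet_top X)" using X(4) by (cases "iet_top X") auto
  have "take j (iet_top X) = hd (iet_top X) # take k (tl (iet_top X))" using k by (subst top) simp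
  then show "endpoint (rauzy_left X) (j - 1) = endpoint X j" using r k by (simp add: endpoint_def)
  show "length (iet_top (rauzy_left X)) = length (iet_top X) - 1" "iet_right (rauzy_left X) = iet_right X"
    using r by simp_all
  then show "left_trim_state T e (j - 1) (rauzy_left X)" using left_trim_state_rauzy[OF st ab] X(4) j by simp
qed

lemma left_trim_split:
  assumes st: "left_trim_state T e j X" and m: "1 \<le> m" "m \<le> j"
    and blk: "set (take m (iet_top X)) = set (take m (iet_bot X))"
  obtains X1 where "iet_step (X, e) (X1, e)" "left_trim_state T e (j - m) X1"
    "length (iet_top X1) = length (iet_top X) - m" "iet_right X1 = iet_right X"
    "endpoint X1 (j - m) = endpoint X j"
proof -
  note X = left_trim_stateD[OF st]
  define p where "p = take m (iet_top X)"
  define q where "q = drop m (iet_top X)"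
  have top: "iet_top X = p @ q" and bot: "iet_bot X = take m (iet_bot X) @ drop m (iet_bot X)"
    by (simp_all add: p_def q_def)
  have sp: "set p = set (take m (iet_bot X))" using blk by (simp add: p_def)
  have "length p > 0" "length q > 0" using m X(4) by (simp_all add: p_def q_def)
  then have pq: "p \<noteq> []" "q \<noteq> []" by auto
  define X1 where
    "X1 = X\<lparr>iet_left := iet_left X + lensum (iet_len X) p, iet_top := q, iet_bot := filter (\<lambda>c. c \<in> set q) (iet_bot X)\<rparr>"
  note r = split_off_prefix[OF X(2) top bot sp pq, folded X1_def]
  have sub: "iet_dom X1 \<subseteq> iet_dom X"
    using r lensum_nonneg[of p "iet_len X"] iet_wf_len_nonneg[OF X(2)] top by (intro iet_dom_subset) auto
  have "take j (iet_top X) = p @ take (j - m) q" using m by (simp add: p_def q_def take_add[symmetric])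
  then have "endpoint X1 (j - m) = endpoint X j" using r by (simp add: endpoint_def)
  moreover have "left_trim_state T e (j - m) X1"
    using induced_trans[OF X(1)] r sub ident_on_dom_subset[OF X(3) sub] X(4) m
    by (auto simp: left_trim_state_def q_def)
  moreover have "length (iet_top X1) = length (iet_top X) - m" using r by (simp add: q_def)
  ultimately show ?thesis using that[OF r(1)] r by simp
qed

lemma prefix_block_if_hd_eq:
  assumes "iet_wf X" "hd (iet_top X) = hd (iet_bot X)"
  shows "set (take 1 (iet_top X)) = set (take 1 (iet_bot X))"
proof -
  have "iet_top X \<noteq> []" "iet_bot X \<noteq> []" using assms(1) unfolding iet_wf_def by auto
  then show ?thesis using assms(2) by (cases "iet_top X"; cases "iet_bot X") auto
qed

lemma left_trim_rauzy:
  assumes st: "left_trim_state T e j X" and j: "0 < j" and ns: "no_left_shortcut j X"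
  shows "iet_step (X, e) (rauzy_left X, e)" "left_trim_state T e j (rauzy_left X)"
    "length (iet_top (rauzy_left X)) = length (iet_top X)"
    "iet_right (rauzy_left X) = iet_right X" "endpoint (rauzy_left X) j = endpoint X j"
proof -
  note X = left_trim_stateD[OF st]
  have ab: "hd (iet_top X) \<noteq> hd (iet_bot X)"
    using prefix_block_if_hd_eq[OF X(2)] ns j unfolding no_left_shortcut_def by force
  then show "iet_step (X, e) (rauzy_left X, e)" by (rule iet_step.left)
  have "iet_len X (hd (iet_bot X)) < iet_len X (hd (iet_top X))
    \<or> iet_len X (hd (iet_top X)) < iet_len X (hd (iet_bot X)) \<and> hd (iet_bot X) \<in> set (take j (iet_top X))"
    using ns unfolding no_left_shortcut_def by auto
  then show "left_trim_state T e j (rauzy_left X)" "length (iet_top (rauzy_left X)) = length (iet_top X)"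
    "iet_right (rauzy_left X) = iet_right X" "endpoint (rauzy_left X) j = endpoint X j"
    using left_trim_top_wins[OF st j ab] left_trim_bot_wins[OF st j ab] by blast+
qed

lemma left_trim_shortcut:
  assumes st: "left_trim_state T e j X" and j: "0 < j" and "\<not> no_left_shortcut j X"
  shows "\<exists>X1 e1 j1. iet_step (X, e) (X1, e1) \<and> left_trim_state T e1 j1 X1
    \<and> iet_right X1 = iet_right X \<and> endpoint X1 j1 = endpoint X j
    \<and> length (iet_top X1) + j1 < length (iet_top X) + j"
proof -
  note X = left_trim_stateD[OF st]
  have split: ?thesis if m: "1 \<le> m" "m \<le> j" "set (take m (iet_top X)) = set (take m (iet_bot X))" for m
  proof -
    obtain X1 where X1: "iet_step (X, e) (X1, e)" "left_trim_state T e (j - m) X1"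
      "length (iet_top X1) = length (iet_top X) - m" "iet_right X1 = iet_right X"
      "endpoint X1 (j - m) = endpoint X j"
      using left_trim_split[OF st m] .
    have "length (iet_top X1) + (j - m) < length (iet_top X) + j" using X1(3) m X(4) by simp
    then show ?thesis using X1 by blast
  qed
  consider (block) m where "1 \<le> m" "m \<le> j" "set (take m (iet_top X)) = set (take m (iet_bot X))"
    | (tie) "iet_len X (hd (iet_top X)) = iet_len X (hd (iet_bot X))"
    | (outside) "iet_len X (hd (iet_top X)) < iet_len X (hd (iet_bot X))"
        "hd (iet_bot X) \<notin> set (take j (iet_top X))"
    using assms(3) unfolding no_left_shortcut_def by blast
  then show ?thesis
  proof cases
    case block
    then show ?thesis by (rule split)
  next
    case tie
    show ?thesis
    proof (cases "hd (iet_top X) = hd (iet_bot X)")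
      case True
      then show ?thesis using split[of 1] j prefix_block_if_hd_eq[OF X(2)] by simp
    next
      case False
      note r = left_trim_tie[OF st j False tie]
      have "length (iet_top (rauzy_left X)) + (j - 1) < length (iet_top X) + j" using r(2) j by simp
      then show ?thesis using iet_step.left[OF False] r by blast
    qed
  next
    case outside
    then have ab: "hd (iet_top X) \<noteq> hd (iet_bot X)" by auto
    note r = left_trim_bot_wins[OF st j ab outside(1)]
    have "length (iet_top (rauzy_left X)) + (j - 1) < length (iet_top X) + j" using r(1) j by simp
    then show ?thesis using iet_step.left[OF ab] r(1,2) r(4)[OF outside(2)] by blast
  qed
qed

definition left_trimmable :: "'a iet \<Rightarrow> 'a iet \<Rightarrow> (real \<Rightarrow> real) \<Rightarrow> nat \<Rightarrow> bool" where
  "left_trimmable T S e j \<longleftrightarrow> (\<exists>S' e'. iet_step\<^sup>*\<^sup>* (S, e) (S', e') \<and> induced T S' \<and> ident_on_dom e' S'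
      \<and> iet_left S' = endpoint S j \<and> iet_right S' = iet_right S)"

lemma left_trimmable_steps:
  assumes "iet_step\<^sup>*\<^sup>* (S, e) (X, e')" "left_trimmable T X e' j'"
    "iet_right X = iet_right S" "endpoint X j' = endpoint S j"
  shows "left_trimmable T S e j"
  using assms unfolding left_trimmable_def by (metis (no_types, lifting) rtranclp_trans)

lemma left_trim:
  assumes "left_trim_state T e j S"
  shows "left_trimmable T S e j"
  using assms
proof (induction "length (iet_top S) + j" arbitrary: S e j rule: less_induct)
  case less
  show ?case
  proof (cases "j = 0")
    case True
    then show ?thesis using less.prems unfolding left_trimmable_def
      by (intro exI[of _ S] exI[of _ e]) (simp add: left_trim_state_def)
  next
    case False
    then have j: "0 < j" by simp
    define good where "good X \<longleftrightarrow> left_trim_state T e j X \<and> length (iet_top X) = length (iet_top S)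
      \<and> iet_right X = iet_right S \<and> endpoint X j = endpoint S j \<and> iet_step\<^sup>*\<^sup>* (S, e) (X, e)" for X
    show ?thesis
    proof (rule ccontr)
      assume stuck: "\<not> left_trimmable T S e j"
      have no_shortcut: "no_left_shortcut j X" if X: "good X" for X
      proof (rule ccontr)
        assume "\<not> no_left_shortcut j X"
        then obtain X1 e1 j1 where X1: "iet_step (X, e) (X1, e1)" "left_trim_state T e1 j1 X1"
          "iet_right X1 = iet_right X" "endpoint X1 j1 = endpoint X j"
          "length (iet_top X1) + j1 < length (iet_top X) + j"
          using left_trim_shortcut[of T e j X] X j by (auto simp: good_def)
        then have "left_trimmable T X1 e1 j1" using less.hyps X by (auto simp: good_def)
        moreover have "iet_step\<^sup>*\<^sup>* (S, e) (X1, e1)" using X X1(1) by (auto simp: good_def)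
        ultimately have "left_trimmable T S e j"
          using left_trimmable_steps X X1(3,4) by (auto simp: good_def)
        then show False using stuck by simp
      qed
      have good_run: "good ((rauzy_left ^^ n) S)" for n
      proof (induction n)
        case 0 then show ?case using less.prems by (simp add: good_def)
      next
        case (Suc n)
        then show ?case
          using left_trim_rauzy[of T e j "(rauzy_left ^^ n) S"] no_shortcut[OF Suc] j
          by (auto simp: good_def)
      qed
      show False
      proof (rule no_infinite_left_run)
        show "iet_wf ((rauzy_left ^^ n) S)" for n
          using good_run[of n] by (simp add: good_def left_trim_state_def induced_def)
        show "(rauzy_left ^^ Suc n) S = rauzy_left ((rauzy_left ^^ n) S)" for n by simp
        show "length (iet_top ((rauzy_left ^^ n) S)) = length (iet_top S)" for n
          using good_run[of n] by (simp add: good_def)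
        show "0 < j" by (fact j)
        show "j \<le> length (iet_top S)" using less.prems by (simp add: left_trim_state_def)
        show "no_left_shortcut j ((rauzy_left ^^ n) S)" for n by (rule no_shortcut[OF good_run])
      qed
    qed
  qed
qed

text \<open>First trim the right end down to \<open>v\<close>, keeping \<open>u\<close> a left end, then the left end up to \<open>u\<close>.\<close>

lemma trim_to_interval:
  assumes I: "induced T S" and e: "ident_on_dom e S" and u: "u \<in> left_ends S" and uv: "u < v"
    and v: "v = iet_right S \<or> v \<in> left_ends S"
  shows "\<exists>S' e'. iet_step\<^sup>*\<^sup>* (S, e) (S', e') \<and> induced T S' \<and> ident_on_dom e' S' \<and> iet_dom S' = {u..<v}"
proof -
  obtain i where i: "i \<le> length (iet_top S)" "v = endpoint S i"
    using v endpoint_length[of S] left_ends_eq_endpoint[of v S] by (metis less_imp_le order_refl)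
  have "right_trimmable T u S e i"
    by (rule right_trim) (use I e u uv i in \<open>simp add: right_trim_state_def\<close>)
  then obtain S1 e1 where S1: "iet_step\<^sup>*\<^sup>* (S, e) (S1, e1)" "induced T S1" "ident_on_dom e1 S1"
      "iet_right S1 = v" "u \<in> left_ends S1"
    unfolding right_trimmable_def using i by auto
  obtain j where j: "j < length (iet_top S1)" "u = endpoint S1 j" using left_ends_eq_endpoint[OF S1(5)] by blast
  have "left_trimmable T S1 e1 j"
    by (rule left_trim) (use S1 j in \<open>simp add: left_trim_state_def\<close>)
  then obtain S2 e2 where "iet_step\<^sup>*\<^sup>* (S1, e1) (S2, e2)" "induced T S2" "ident_on_dom e2 S2"
      "iet_left S2 = u" "iet_right S2 = v"
    unfolding left_trimmable_def using j S1(4) by auto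
  then show ?thesis using S1(1) by (auto simp: iet_dom_def intro: rtranclp_trans)
qed

section \<open>Cylinders\<close>

lemma cyl_Nil: "cyl T [] = iet_dom T"
  by (simp add: cyl_def)

lemma cyl_snoc: "cyl T (w @ [c]) = {x \<in> cyl T w. (iet_map T ^^ length w) x \<in> ivl T c}"
  by (auto simp: cyl_def nth_append less_Suc_eq)

lemma cyl_Cons:
  assumes wf: "iet_wf T"
  shows "cyl T (c # w) = {x \<in> iet_dom T. x \<in> ivl T c \<and> iet_map T x \<in> cyl T w}"
proof -
  have "(\<forall>j<length (c # w). (iet_map T ^^ j) x \<in> ivl T ((c # w) ! j)) \<longleftrightarrow>
        x \<in> ivl T c \<and> (\<forall>j<length w. (iet_map T ^^ j) (iet_map T x) \<in> ivl T (w ! j))" for x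
    by (simp add: All_less_Suc2 funpow_Suc_right del: funpow.simps)
  then show ?thesis using iet_map_in_dom[OF wf] by (auto simp: cyl_def)
qed

lemma cyl_interval:
  assumes wf: "iet_wf T"
  shows "\<exists>u v. cyl T w = {u..<v}"
proof (induction w)
  case Nil then show ?case by (auto simp: cyl_Nil iet_dom_def)
next
  case (Cons c w)
  obtain u v where uv: "cyl T w = {u..<v}" using Cons.IH by blast
  show ?case
  proof (cases "c \<in> set (iet_top T)")
    case False
    have "cyl T (c # w) = {}" using ivl_disjoint_dom[OF False] by (auto simp: cyl_Cons[OF wf])
    then show ?thesis by (metis atLeastLessThan_empty order_refl)
  next
    case True
    define s where "s = iet_left T + off_top T c"
    define t where "t = s + iet_len T c"
    define tau where "tau = off_bot T c - off_top T c"
    have m: "\<And>x. x \<in> ivl T c \<Longrightarrow> iet_map T x = x + tau"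
      using iet_map_ivl[OF wf True] by (simp add: tau_def)
    have "cyl T (c # w) = {x. x \<in> ivl T c \<and> x + tau \<in> {u..<v}}"
      using ivl_subset_dom[OF wf True] m unfolding cyl_Cons[OF wf] uv by auto
    also have "\<dots> = {max s (u - tau)..<min t (v - tau)}"
      by (auto simp: ivl_def s_def t_def)
    finally show ?thesis by blast
  qed
qed

lemma cyl_nonempty:
  assumes wf: "iet_wf T" and w: "w \<in> iet_lang T"
  shows "cyl T w \<noteq> {}"
proof -
  obtain x i where x: "x \<in> iet_dom T" and P: "\<forall>j<length w. (iet_map T ^^ (i + j)) x \<in> ivl T (w ! j)"
    using w by (auto simp: iet_lang_def)
  have "(iet_map T ^^ j) ((iet_map T ^^ i) x) = (iet_map T ^^ (i + j)) x" for j
    by (metis add.commute comp_apply funpow_add)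
  then have "(iet_map T ^^ i) x \<in> cyl T w"
    unfolding cyl_def using iet_map_funpow_in_dom[OF wf x] P by simp
  then show ?thesis by blast
qed

lemma lang_appendD:
  assumes "w @ v \<in> iet_lang T" shows "w \<in> iet_lang T"
proof -
  obtain x i where x: "x \<in> iet_dom T" and P: "\<forall>j<length (w @ v).
      (iet_map T ^^ (i + j)) x \<in> ivl T ((w @ v) ! j) \<and> (w @ v) ! j \<in> set (iet_top T)"
    using assms unfolding iet_lang_def by blast
  have "\<forall>j<length w. (iet_map T ^^ (i + j)) x \<in> ivl T (w ! j) \<and> w ! j \<in> set (iet_top T)"
  proof (intro allI impI)
    fix j assume "j < length w"
    then show "(iet_map T ^^ (i + j)) x \<in> ivl T (w ! j) \<and> w ! j \<in> set (iet_top T)"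
      using P[rule_format, of j] by (simp add: nth_append)
  qed
  then show ?thesis using x unfolding iet_lang_def by blast
qed

text \<open>All points of an interval of an IET induced from \<open>T\<close> follow the same \<open>T\<close>-itinerary
  until they return, so a cylinder one letter longer than \<open>iet_dom S\<close> is a union of intervals of
  \<open>S\<close>.\<close>

lemma cyl_snoc_const_on_ivl:
  assumes wfT: "iet_wf T" and I: "induced T S" and dS: "iet_dom S = cyl T w"
    and d: "d \<in> set (iet_top S)" and x: "x \<in> ivl S d" and y: "y \<in> ivl S d"
    and xc: "x \<in> cyl T (w @ [c])"
  shows "y \<in> cyl T (w @ [c])"
proof -
  have wf: "iet_wf S" and sub: "iet_dom S \<subseteq> iet_dom T"
    and tow: "return_tower T (iet_dom S) (iet_map S) (ivl S d)"
    using I d by (auto simp: induced_def tower_def)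
  obtain h ws where h: "h > 0" "length ws = h"
    and it: "\<And>x j. x \<in> ivl S d \<Longrightarrow> j < h \<Longrightarrow> (iet_map T ^^ j) x \<in> ivl T (ws ! j)"
    and ret: "\<And>x. x \<in> ivl S d \<Longrightarrow> (iet_map T ^^ h) x = iet_map S x"
    using tow by (rule return_towerE) blast
  have xd: "x \<in> iet_dom S" "y \<in> iet_dom S" using ivl_subset_dom[OF wf d] x y by auto
  have yw: "y \<in> cyl T w" using xd dS by simp
  define n where "n = length w"
  have xn: "(iet_map T ^^ n) x \<in> ivl T c" using xc by (simp add: cyl_snoc n_def)
  have domT: "(iet_map T ^^ k) z \<in> iet_dom T" if "z \<in> iet_dom S" for z k using iet_map_funpow_in_dom[OF wfT] sub that by blast
  have "(iet_map T ^^ n) y \<in> ivl T c"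
  proof (cases "n < h")
    case True
    have "ws ! n = c" using ivl_unique[OF wfT it[OF x True] xn domT[OF xd(1)]] .
    then show ?thesis using it[OF y True] by simp
  next
    case False
    have sh: "(iet_map T ^^ n) z = (iet_map T ^^ (n - h)) (iet_map S z)" if "z \<in> ivl S d" for z
    proof -
      have nn: "n = (n - h) + h" using False by simp
      have "(iet_map T ^^ n) z = (iet_map T ^^ ((n - h) + h)) z" using nn by simp
      also have "\<dots> = (iet_map T ^^ (n - h)) ((iet_map T ^^ h) z)" by (simp add: funpow_add)
      finally have "(iet_map T ^^ n) z = (iet_map T ^^ (n - h)) ((iet_map T ^^ h) z)" .
      then show ?thesis using ret[OF that] by simp
    qed
    have mx: "iet_map S x \<in> cyl T w" "iet_map S y \<in> cyl T w" using iet_map_in_dom[OF wf] xd dS by auto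
    have k: "n - h < length w" using h False by (simp add: n_def)
    have "(iet_map T ^^ (n - h)) (iet_map S x) \<in> ivl T (w ! (n - h))"
      "(iet_map T ^^ (n - h)) (iet_map S y) \<in> ivl T (w ! (n - h))" using mx k by (auto simp: cyl_def)
    then show ?thesis using ivl_unique[OF wfT _ xn domT[OF xd(1)]] sh[OF x] sh[OF y] by metis
  qed
  then show ?thesis using yw by (simp add: cyl_snoc n_def)
qed

lemma saturated_interval_ends:
  assumes wf: "iet_wf S" and sub: "{u..<v} \<subseteq> iet_dom S" and uv: "u < v"
    and sat: "\<And>d x y. d \<in> set (iet_top S) \<Longrightarrow> x \<in> ivl S d \<Longrightarrow> y \<in> ivl S d \<Longrightarrow> x \<in> {u..<v} \<Longrightarrow> y \<in> {u..<v}"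
  shows "u \<in> left_ends S" "v = iet_right S \<or> v \<in> left_ends S"
proof -
  have "u \<in> iet_dom S" using sub uv by auto
  then obtain d where d: "d \<in> set (iet_top S)" "u \<in> ivl S d" using dom_covered_by_ivl[OF wf] by blast
  have "iet_left S + off_top S d \<in> {u..<v}" using sat[OF d left_end_in_ivl[OF wf d(1)]] uv by simp
  then have "u = iet_left S + off_top S d" using d(2) by (simp add: ivl_def)
  then show "u \<in> left_ends S" using left_endsI[OF d(1)] by simp
  show "v = iet_right S \<or> v \<in> left_ends S"
  proof (cases "v = iet_right S")
    case False
    moreover have "v \<le> iet_right S"
    proof (rule ccontr)
      assume "\<not> v \<le> iet_right S"
      then have "max u (iet_right S) \<in> {u..<v}" using uv by auto
      then show False using sub by (auto simp: iet_dom_def)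
    qed
    ultimately have "v \<in> iet_dom S" using sub uv by (auto simp: iet_dom_def)
    then obtain d' where d': "d' \<in> set (iet_top S)" "v \<in> ivl S d'" using dom_covered_by_ivl[OF wf] by blast
    define s where "s = iet_left S + off_top S d'"
    have "\<not> s < v"
    proof
      assume "s < v"
      then have "max u s \<in> ivl S d'" "max u s \<in> {u..<v}" using d'(2) uv by (auto simp: ivl_def s_def)
      from sat[OF d'(1) this(1) d'(2) this(2)] show False by simp
    qed
    then have "v = s" using d'(2) by (simp add: ivl_def s_def)
    then show ?thesis using left_endsI[OF d'(1)] by (simp add: s_def)
  qed simp
qed

lemma cyl_snoc_endpoints:
  assumes wfT: "iet_wf T" and I: "induced T S" and dS: "iet_dom S = cyl T w"
    and J: "cyl T (w @ [c]) = {u..<v}" and uv: "u < v"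
  shows "u \<in> left_ends S" "v = iet_right S \<or> v \<in> left_ends S"
proof -
  have wf: "iet_wf S" using I by (simp add: induced_def)
  have sub: "{u..<v} \<subseteq> iet_dom S" using J dS cyl_snoc[of T w c] by auto
  have sat: "y \<in> {u..<v}" if "d \<in> set (iet_top S)" "x \<in> ivl S d" "y \<in> ivl S d" "x \<in> {u..<v}" for d x y
  proof -
    have "x \<in> cyl T (w @ [c])" using that(4) J by simp
    from cyl_snoc_const_on_ivl[OF wfT I dS that(1-3) this] show ?thesis using J by simp
  qed
  show "u \<in> left_ends S" by (rule saturated_interval_ends(1)[OF wf sub uv]) (fact sat)
  show "v = iet_right S \<or> v \<in> left_ends S" by (rule saturated_interval_ends(2)[OF wf sub uv]) (fact sat)
qed

lemma reach_cyl:
  assumes wf: "iet_wf T" and "w \<in> iet_lang T"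
  shows "\<exists>S e. iet_step\<^sup>*\<^sup>* (T, id) (S, e) \<and> induced T S \<and> ident_on_dom e S \<and> iet_dom S = cyl T w"
  using assms(2)
proof (induction w rule: rev_induct)
  case Nil
  show ?case using induced_refl[OF wf] by (intro exI[of _ T] exI[of _ id]) (simp add: ident_on_dom_def cyl_Nil)
next
  case (snoc c w)
  obtain S e where S: "iet_step\<^sup>*\<^sup>* (T, id) (S, e)" "induced T S" "ident_on_dom e S" "iet_dom S = cyl T w"
    using snoc.IH lang_appendD[OF snoc.prems] by blast
  obtain u v where J: "cyl T (w @ [c]) = {u..<v}" using cyl_interval[OF wf] by blast
  have uv: "u < v" using cyl_nonempty[OF wf snoc.prems] J by (metis atLeastLessThan_empty not_le)
  obtain S' e' where "iet_step\<^sup>*\<^sup>* (S, e) (S', e')" "induced T S'" "ident_on_dom e' S'" "iet_dom S' = {u..<v}"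
    using trim_to_interval[OF S(2,3) _ uv] cyl_snoc_endpoints[OF wf S(2,4) J uv] by blast
  then show ?case using S(1) J by (metis rtranclp_trans)
qed

theorem proposition4p17:
  fixes T :: "'a iet" and w :: "'a list"
  assumes "iet_wf T" and "w \<in> iet_lang T"
  shows "\<exists>S e. iet_reach (T, id) (S, e)
           \<and> bij_betw e (iet_dom S) (cyl T w)
           \<and> (\<forall>x\<in>cyl T w. \<exists>n>0. (iet_map T ^^ n) x \<in> cyl T w)
           \<and> (\<forall>x\<in>iet_dom S. e (iet_map S x) = first_return (iet_map T) (cyl T w) (e x))"
proof -
  obtain S e where S: "iet_step\<^sup>*\<^sup>* (T, id) (S, e)" "induced T S" "ident_on_dom e S" "iet_dom S = cyl T w"
    using reach_cyl[OF assms] by blast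
  have wf: "iet_wf S" using S(2) by (simp add: induced_def)
  have e: "e x = x" if "x \<in> iet_dom S" for x using S(3) that by (simp add: ident_on_dom_def)
  have "bij_betw e (iet_dom S) (cyl T w) \<longleftrightarrow> bij_betw id (iet_dom S) (cyl T w)"
    by (rule bij_betw_cong) (simp add: e)
  then have "bij_betw e (iet_dom S) (cyl T w)" using S(4) by simp
  moreover have "\<forall>x\<in>cyl T w. \<exists>n>0. (iet_map T ^^ n) x \<in> cyl T w"
    using induced_recurrent[OF S(2)] S(4) by simp
  moreover have "e (iet_map S x) = first_return (iet_map T) (cyl T w) (e x)" if "x \<in> iet_dom S" for x
    using induced_first_return[OF S(2) that] e[OF that] e[OF iet_map_in_dom[OF wf that]] S(4) by simp
  ultimately show ?thesis using S(1) unfolding iet_reach_def by (intro exI[of _ S] exI[of _ e]) blast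
qed

end
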